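(* For all $\theta,\hat\theta\in\Theta$, $k\in\mathbb N_+$, $\mu\in\mathcal M$, $T\ge2$, and the observation sequence $\{s_t,a_t\}_{t\in\mathbb Z}$ of any $\omega\in\Omega$: (1) for all $t\in[1:T]$, $$\|\gamma^\theta_{\mu,t|T}-\gamma^{\hat\theta}_{k,t}\|_{TV}\le\Big(1-\frac{\epsilon_b^2\zeta}{|\mathcal O|}\Big)^{t-1}+\Big(1-\frac{\epsilon_b^2\zeta}{|\mathcal O|}\Big)^{T-t}+\frac{2|\mathcal O|z_{\theta,\hat\theta}L_{\theta,\|\hat\theta-\theta\|_2}}{\epsilon_b^2\zeta}\|\hat\theta-\theta\|_2;$$ (2) for all $t\in[2:T]$, $$\|\tilde\gamma^\theta_{\mu,t|T}-\tilde\gamma^{\hat\theta}_{k,t}\|_{TV}\le2\Big(1-\frac{\epsilon_b^2\zeta}{|\mathcal O|}\Big)^{t-2}+\Big(1-\frac{\epsilon_b^2\zeta}{|\mathcal O|}\Big)^{T-t}+\frac{4|\mathcal O|z_{\theta,\hat\theta}L_{\theta,\|\hat\theta-\theta\|_2}}{\epsilon_b^2\zeta}\|\hat\theta-\theta\|_2.$$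
   Context: $\mathcal S,\mathcal A,\mathcal O$ are finite sets; $\Theta=\Theta_{hi}\times\Theta_{lo}\times\Theta_b$ is a convex compact subset of a Euclidean space. There are policies $\pi_{hi}(o\mid s;\theta_{hi})$ (distribution on $\mathcal O$), $\pi_{lo}(a\mid s,o;\theta_{lo})$ (distribution on $\mathcal A$), $\pi_b(b\mid s,o';\theta_b)$ (distribution on $\{0,1\}$), and environment kernel $P(s'\mid s,a)$. For fixed $\zeta\in(0,1)$, $\bar\pi_{hi}(o_t\mid s_t,o_{t-1},b_t;\theta_{hi})$ equals $\pi_{hi}(o_t\mid s_t;\theta_{hi})$ if $b_t=1$, $1-\zeta+\zeta/|\mathcal O|$ if $b_t=0,o_t=o_{t-1}$, $\zeta/|\mathcal O|$ if $b_t=0,o_t\ne o_{t-1}$. The options-with-failure process with parameter $\theta$: given $O_{t-1},S_t$, draw $B_t\sim\pi_b(\cdot\mid S_t,O_{t-1};\theta_b)$, $O_t\sim\bar\pi_{hi}(\cdot\mid S_t,O_{t-1},B_t;\theta_{hi})$, $A_t\sim\pi_{lo}(\cdot\mid S_t,O_t;\theta_{lo})$, $S_{t+1}\sim P(\cdot\mid S_t,A_t)$; $\mathbb P_{\theta,o_0,s_1}$ is the law of $(S_{2:T},A_{1:T},O_{1:T},B_{1:T})$ given $(O_0,S_1)=(o_0,s_1)$. Standing assumptions: (i) on an open $\tilde\Theta\supseteq\Theta$ the policies are defined, strictly positive and continuously differentiable in $\theta$; (ii) for a true parameter $\theta^*$, $\{(O_{t-1},S_t)\}_{t\ge1}$ is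 a Markov chain and $\nu^*$ is an extreme point of its set of stationary distributions. $\mathcal X=\mathcal S\times\mathcal A\times\mathcal O\times\{0,1\}$, $\Omega=\{\omega\in\mathcal X^{\mathbb Z}:P(\omega(s_{t+1})\mid\omega(s_t),\omega(a_t))>0\ \forall t\}$, $s_t=\omega(s_t),a_t=\omega(a_t)$. $\mathcal M$ = set of conditional pmfs $\mu(\cdot\mid s_1)$ on $\mathcal O$. Smoothing distributions (pmfs on $\mathcal O\times\{0,1\}$): $\gamma^\theta_{\mu,t|T}(o_t,b_t)\propto\mathbb E_{O_0\sim\mu(\cdot\mid s_1)}[\mathbb P_{\theta,O_0,s_1}(S_{2:T}=s_{2:T},A_{1:T}=a_{1:T},O_t=o_t,B_t=b_t)]$, $\tilde\gamma^\theta_{\mu,t|T}(o_{t-1},b_t)\propto\mathbb E_{O_0\sim\mu(\cdot\mid s_1)}[\mathbb P_{\theta,O_0,s_1}(S_{2:T}=s_{2:T},A_{1:T}=a_{1:T},O_{t-1}=o_{t-1},B_t=b_t)]$. For $k\in\mathbb N_+$, $\mathbb P_{\theta,k}$ is the law of the process with parameter $\theta$ over times $1-k,\dots,T+k$ with $(O_{-k},S_{1-k})\sim\nu^*$, and $\gamma^\theta_{k,t}(o_t,b_t)\propto\mathbb P_{\theta,k}(S_{1-k:T+k}=s_{1-k:T+k},A_{1-k:T+k}=a_{1-k:T+k},O_t=o_t,B_t=b_t)$, $\tilde\gamma^\theta_{k,t}(o_{t-1},b_t)\propto\mathbb P_{\theta,k}(S_{1-k:T+k}=s_{1-k:T+k},A_{1-k:T+k}=a_{1-k:T+k},O_{t-1}=o_{t-1},B_t=b_t)$.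 Constants: $\epsilon_b>0$ is a constant for which there is a conditional distribution $\bar\pi_{o,b}(o_t,b_t\mid s_t;\theta)$ on $\mathcal O\times\{0,1\}$ with $0<\epsilon_b\zeta\bar\pi_{o,b}(o_t,b_t\mid s_t;\theta)\le\pi_b(b_t\mid s_t,o_{t-1};\theta_b)\bar\pi_{hi}(o_t\mid s_t,o_{t-1},b_t;\theta_{hi})\le\epsilon_b^{-1}|\mathcal O|\bar\pi_{o,b}(o_t,b_t\mid s_t;\theta)$ for all $\theta\in\Theta$ and all arguments. With $h(\theta;o_{t-1},s_t,a_t,o_t,b_t)=\pi_b(b_t\mid s_t,o_{t-1};\theta_b)\bar\pi_{hi}(o_t\mid s_t,o_{t-1},b_t;\theta_{hi})\pi_{lo}(a_t\mid s_t,o_t;\theta_{lo})$: $L_{\theta,\delta}$ is the smallest $L$ such that for all arguments $\tilde\theta\mapsto h(\tilde\theta;\cdot)$ is $L$-Lipschitz on $\{\tilde\theta\in\Theta:\|\tilde\theta-\theta\|_2\le\delta\}$; and $z_{\theta,\hat\theta}=\max_{s',a'}\frac{[\max_{o,o',b}h(\theta;o,s',a',o',b)]\vee[\max_{o,o',b}h(\hat\theta;o,s',a',o',b)]}{[\min_{o,o',b}h(\theta;o,s',a',o',b)][\min_{o,o',b}h(\hat\theta;o,s',a',o',b)]}$. $\|\nu_1-\nu_2\|_{TV}=\frac12\sum|\nu_1-\nu_2|$. *)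

theory Defs
  imports "HOL-Analysis.Analysis"
begin

(* Parameters are triples theta = (theta_hi, theta_lo, theta_b) in a product of Euclidean
   spaces; the norm on the product type is the Euclidean (L2) norm of the concatenation. *)

definition pibar_hi ::
  "('h \<Rightarrow> 's \<Rightarrow> 'o::finite \<Rightarrow> real) \<Rightarrow> real \<Rightarrow> 'h \<Rightarrow> 's \<Rightarrow> 'o \<Rightarrow> bool \<Rightarrow> 'o \<Rightarrow> real" where
  "pibar_hi pi_hi \<zeta> th s o_prev b q =
     (if b then pi_hi th s q
      else if q = o_prev then 1 - \<zeta> + \<zeta> / real (card (UNIV :: 'o set))
      else \<zeta> / real (card (UNIV :: 'o set)))"

text \<open>h(theta; o_{t-1}, s_t, a_t, o_t, b_t); pi_lo th s q a = pi_lo(a | s,q); pi_b th s q' b = pi_b(b | s,q').\<close>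
definition hfun ::
  "('h \<Rightarrow> 's \<Rightarrow> 'o::finite \<Rightarrow> real) \<Rightarrow> ('l \<Rightarrow> 's \<Rightarrow> 'o \<Rightarrow> 'a \<Rightarrow> real) \<Rightarrow> ('b \<Rightarrow> 's \<Rightarrow> 'o \<Rightarrow> bool \<Rightarrow> real)
    \<Rightarrow> real \<Rightarrow> ('h \<times> 'l \<times> 'b) \<Rightarrow> 'o \<Rightarrow> 's \<Rightarrow> 'a \<Rightarrow> 'o \<Rightarrow> bool \<Rightarrow> real" where
  "hfun pi_hi pi_lo pi_b \<zeta> \<theta> o_prev s a q b =
     pi_b (snd (snd \<theta>)) s o_prev b * pibar_hi pi_hi \<zeta> (fst \<theta>) s o_prev b q * pi_lo (fst (snd \<theta>)) s q a"

definition C1_on :: "'p::euclidean_space set \<Rightarrow> ('p \<Rightarrow> real) \<Rightarrow> bool" where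
  "C1_on U f \<longleftrightarrow> (\<exists>f'. (\<forall>x\<in>U. (f has_derivative blinfun_apply (f' x)) (at x)) \<and> continuous_on U f')"

text \<open>Latent trajectories (O_{lo-1..hi}, B_{lo..hi}).\<close>
definition latents :: "int \<Rightarrow> int \<Rightarrow> ((int \<Rightarrow> 'o) \<times> (int \<Rightarrow> bool)) set" where
  "latents lo hi = (PiE {lo - 1..hi} (\<lambda>_. UNIV)) \<times> (PiE {lo..hi} (\<lambda>_. UNIV))"

text \<open>Joint probability of O_{lo-1} (with weight init), the observations S_{lo..hi}, A_{lo..hi}
  (S_lo being fixed by the initial condition / included in init) and the latent trajectory.\<close>
definition path_weight ::
  "('p \<Rightarrow> 'o \<Rightarrow> 's \<Rightarrow> 'a \<Rightarrow> 'o \<Rightarrow> bool \<Rightarrow> real) \<Rightarrow> ('s \<Rightarrow> 'a \<Rightarrow> 's \<Rightarrow> real) \<Rightarrow> 'p \<Rightarrow> ('o \<Rightarrow> real)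
    \<Rightarrow> int \<Rightarrow> int \<Rightarrow> (int \<Rightarrow> 's) \<Rightarrow> (int \<Rightarrow> 'a) \<Rightarrow> (int \<Rightarrow> 'o) \<Rightarrow> (int \<Rightarrow> bool) \<Rightarrow> real" where
  "path_weight h P \<theta> init lo hi ss as os bs =
     init (os (lo - 1))
     * (\<Prod>t\<in>{lo..hi}. h \<theta> (os (t - 1)) (ss t) (as t) (os t) (bs t))
     * (\<Prod>t\<in>{lo..hi - 1}. P (ss t) (as t) (ss (t + 1)))"

text \<open>Unnormalised P(observations, O_t = q, B_t = b).\<close>
definition marg_ob ::
  "('p \<Rightarrow> 'o \<Rightarrow> 's \<Rightarrow> 'a \<Rightarrow> 'o \<Rightarrow> bool \<Rightarrow> real) \<Rightarrow> ('s \<Rightarrow> 'a \<Rightarrow> 's \<Rightarrow> real) \<Rightarrow> 'p \<Rightarrow> ('o \<Rightarrow> real)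
    \<Rightarrow> int \<Rightarrow> int \<Rightarrow> (int \<Rightarrow> 's) \<Rightarrow> (int \<Rightarrow> 'a) \<Rightarrow> int \<Rightarrow> 'o \<Rightarrow> bool \<Rightarrow> real" where
  "marg_ob h P \<theta> init lo hi ss as t q b =
     (\<Sum>(os, bs)\<in>latents lo hi \<inter> {(os, bs). os t = q \<and> bs t = b}. path_weight h P \<theta> init lo hi ss as os bs)"

text \<open>Unnormalised P(observations, O_{t-1} = q, B_t = b).\<close>
definition marg_prev ::
  "('p \<Rightarrow> 'o \<Rightarrow> 's \<Rightarrow> 'a \<Rightarrow> 'o \<Rightarrow> bool \<Rightarrow> real) \<Rightarrow> ('s \<Rightarrow> 'a \<Rightarrow> 's \<Rightarrow> real) \<Rightarrow> 'p \<Rightarrow> ('o \<Rightarrow> real)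
    \<Rightarrow> int \<Rightarrow> int \<Rightarrow> (int \<Rightarrow> 's) \<Rightarrow> (int \<Rightarrow> 'a) \<Rightarrow> int \<Rightarrow> 'o \<Rightarrow> bool \<Rightarrow> real" where
  "marg_prev h P \<theta> init lo hi ss as t q b =
     (\<Sum>(os, bs)\<in>latents lo hi \<inter> {(os, bs). os (t - 1) = q \<and> bs t = b}. path_weight h P \<theta> init lo hi ss as os bs)"

definition obs_prob ::
  "('p \<Rightarrow> 'o \<Rightarrow> 's \<Rightarrow> 'a \<Rightarrow> 'o \<Rightarrow> bool \<Rightarrow> real) \<Rightarrow> ('s \<Rightarrow> 'a \<Rightarrow> 's \<Rightarrow> real) \<Rightarrow> 'p \<Rightarrow> ('o \<Rightarrow> real)
    \<Rightarrow> int \<Rightarrow> int \<Rightarrow> (int \<Rightarrow> 's) \<Rightarrow> (int \<Rightarrow> 'a) \<Rightarrow> real" where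
  "obs_prob h P \<theta> init lo hi ss as =
     (\<Sum>(os, bs)\<in>latents lo hi. path_weight h P \<theta> init lo hi ss as os bs)"

definition normalize :: "('x::finite \<Rightarrow> real) \<Rightarrow> 'x \<Rightarrow> real" where
  "normalize f x = f x / (\<Sum>y\<in>UNIV. f y)"

definition tv_dist :: "('x::finite \<Rightarrow> real) \<Rightarrow> ('x \<Rightarrow> real) \<Rightarrow> real" where
  "tv_dist p q = (1/2) * (\<Sum>x\<in>UNIV. \<bar>p x - q x\<bar>)"

text \<open>gamma^theta_{mu,t|T}: O_0 ~ mu(.|s_1), process over times 1..T.\<close>
definition gamma_mu where
  "gamma_mu h P \<theta> \<mu> T ss as t =
     normalize (\<lambda>(q, b). marg_ob h P \<theta> (\<mu> (ss 1)) 1 T ss as t q b)"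

definition gamma_mu_tilde where
  "gamma_mu_tilde h P \<theta> \<mu> T ss as t =
     normalize (\<lambda>(q, b). marg_prev h P \<theta> (\<mu> (ss 1)) 1 T ss as t q b)"

text \<open>gamma^theta_{k,t}: (O_{-k}, S_{1-k}) ~ nu, process over times 1-k..T+k;
  nu q s = nu(O = q, S = s).\<close>
definition gamma_k where
  "gamma_k h P \<theta> \<nu> k T ss as t =
     normalize (\<lambda>(q, b). marg_ob h P \<theta> (\<lambda>q. \<nu> q (ss (1 - k))) (1 - k) (T + k) ss as t q b)"

definition gamma_k_tilde where
  "gamma_k_tilde h P \<theta> \<nu> k T ss as t =
     normalize (\<lambda>(q, b). marg_prev h P \<theta> (\<lambda>q. \<nu> q (ss (1 - k))) (1 - k) (T + k) ss as t q b)"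

text \<open>Transition kernel of the Markov chain (O_{t-1}, S_t) -> (O_t, S_{t+1}).\<close>
definition chain_kernel where
  "chain_kernel h P \<theta> q s q' s' = (\<Sum>b\<in>UNIV. \<Sum>a\<in>UNIV. h \<theta> q s a q' b * P s a s')"

definition stationary_dists ::
  "('p \<Rightarrow> 'o::finite \<Rightarrow> 's::finite \<Rightarrow> 'a::finite \<Rightarrow> 'o \<Rightarrow> bool \<Rightarrow> real) \<Rightarrow> ('s \<Rightarrow> 'a \<Rightarrow> 's \<Rightarrow> real) \<Rightarrow> 'p
     \<Rightarrow> ('o \<Rightarrow> 's \<Rightarrow> real) set" where
  "stationary_dists h P \<theta> =
     {\<nu>. (\<forall>q s. 0 \<le> \<nu> q s) \<and> (\<Sum>q\<in>UNIV. \<Sum>s\<in>UNIV. \<nu> q s) = 1 \<and>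
          (\<forall>q' s'. (\<Sum>q\<in>UNIV. \<Sum>s\<in>UNIV. \<nu> q s * chain_kernel h P \<theta> q s q' s') = \<nu> q' s')}"

definition extreme_point_in :: "('o \<Rightarrow> 's \<Rightarrow> real) \<Rightarrow> ('o \<Rightarrow> 's \<Rightarrow> real) set \<Rightarrow> bool" where
  "extreme_point_in \<nu> S \<longleftrightarrow> \<nu> \<in> S \<and>
     (\<forall>\<nu>1\<in>S. \<forall>\<nu>2\<in>S. \<forall>c::real. 0 < c \<and> c < 1 \<and> \<nu> = (\<lambda>q s. c * \<nu>1 q s + (1 - c) * \<nu>2 q s)
        \<longrightarrow> \<nu>1 = \<nu>2)"

definition Lconst ::
  "('p::metric_space \<Rightarrow> 'o \<Rightarrow> 's \<Rightarrow> 'a \<Rightarrow> 'o \<Rightarrow> bool \<Rightarrow> real) \<Rightarrow> 'p set \<Rightarrow> 'p \<Rightarrow> real \<Rightarrow> real" where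
  "Lconst h \<Theta> \<theta> \<delta> = Inf {L. \<forall>q s a q' b. lipschitz_on L (\<Theta> \<inter> cball \<theta> \<delta>) (\<lambda>\<theta>'. h \<theta>' q s a q' b)}"

definition zconst ::
  "('p \<Rightarrow> 'o::finite \<Rightarrow> 's::finite \<Rightarrow> 'a::finite \<Rightarrow> 'o \<Rightarrow> bool \<Rightarrow> real) \<Rightarrow> 'p \<Rightarrow> 'p \<Rightarrow> real" where
  "zconst h \<theta> \<theta>' = Max ((\<lambda>(s, a).
       max (Max ((\<lambda>(q, q', b). h \<theta> q s a q' b) ` UNIV)) (Max ((\<lambda>(q, q', b). h \<theta>' q s a q' b) ` UNIV))
       / (Min ((\<lambda>(q, q', b). h \<theta> q s a q' b) ` UNIV) * Min ((\<lambda>(q, q', b). h \<theta>' q s a q' b) ` UNIV))) ` UNIV)"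

end

theory Submission
  imports Defs
begin

text \<open>
  Both smoothing distributions are normalised products \<open>\<alpha>(x) \<kappa>\<^sub>t(x, y, e) \<beta>(y)\<close> of a forward
  vector, the kernel of time \<open>t\<close> (which carries the likelihood of the observed action) and a
  backward vector. The two-sided bound on \<open>\<pi>\<^sub>b \<cdot> \<pi>\<^sub>h\<^sub>i\<close> makes every kernel independent of the
  previous option up to the factor \<open>c = \<epsilon>\<^sub>b\<^sup>2 \<zeta> / |\<O>|\<close>, so by Dobrushin's argument every
  step of the forward or backward recursion contracts the total variation distance of normalised
  vectors by \<open>1 - c\<close>. Hence the initial condition is forgotten at rate \<open>(1 - c)\<^sup>t\<^sup>-\<^sup>1\<close> and the terminal
  one at rate \<open>(1 - c)\<^sup>T\<^sup>-\<^sup>t\<close>. The kernels of \<open>\<theta>\<close> and \<open>\<theta>'\<close> are then exchanged one time step at a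
  time: the Lipschitz bound divided by the smallest value of \<open>h\<close> makes each exchange a relative
  perturbation of size \<open>r = z L \<parallel>\<theta>' - \<theta>\<parallel>\<close>, which is again forgotten geometrically, so the total
  is at most \<open>r \<Sum>\<^sub>j (1 - c)\<^bsup>|j - t|\<^esup> \<le> 2 r / c\<close>. For the pairs \<open>(O\<^sub>t\<^sub>-\<^sub>1, B\<^sub>t)\<close> the exchange at time
  \<open>t\<close> itself is not damped, which costs one more \<open>r / c\<close>.
\<close>

lemma sum_normalize: "(\<Sum>x\<in>UNIV. normalize f x) = (if (\<Sum>x\<in>UNIV. f x) = 0 then 0 else 1)"
  by (simp add: normalize_def sum_divide_distrib[symmetric])

lemma normalize_nonneg: "(\<And>x. 0 \<le> f x) \<Longrightarrow> 0 \<le> normalize f x"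
  by (simp add: normalize_def sum_nonneg)

lemma normalize_mult_const: "c \<noteq> 0 \<Longrightarrow> normalize (\<lambda>x. c * f x) = normalize f"
  by (rule ext) (simp add: normalize_def sum_distrib_left[symmetric])

lemma tv_dist_nonneg: "0 \<le> tv_dist p q"
  by (simp add: tv_dist_def sum_nonneg)

lemma tv_dist_triangle: "tv_dist p r \<le> tv_dist p q + tv_dist q r"
proof -
  have "(\<Sum>x\<in>UNIV. \<bar>p x - r x\<bar>) \<le> (\<Sum>x\<in>UNIV. \<bar>p x - q x\<bar> + \<bar>q x - r x\<bar>)"
    by (rule sum_mono) linarith
  then show ?thesis by (simp add: tv_dist_def sum.distrib)
qed

lemma tv_dist_telescope: "tv_dist (f 0) (f n) \<le> (\<Sum>j<n. tv_dist (f j) (f (Suc j)))"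
proof (induction n)
  case (Suc n)
  then show ?case using tv_dist_triangle[of "f 0" "f (Suc n)" "f n"] by simp
qed (simp add: tv_dist_def)

lemma tv_dist_normalize_le_1:
  assumes "\<And>x. 0 \<le> f x" "\<And>x. 0 \<le> g x"
  shows "tv_dist (normalize f) (normalize g) \<le> 1"
proof -
  have "(\<Sum>x\<in>UNIV. \<bar>normalize f x - normalize g x\<bar>) \<le> (\<Sum>x\<in>UNIV. normalize f x + normalize g x)"
  proof (rule sum_mono)
    fix x
    have "0 \<le> normalize f x" "0 \<le> normalize g x" using normalize_nonneg assms by blast+
    then show "\<bar>normalize f x - normalize g x\<bar> \<le> normalize f x + normalize g x" by linarith
  qed
  also have "\<dots> \<le> 2" by (simp add: sum.distrib sum_normalize)
  finally show ?thesis by (simp add: tv_dist_def)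
qed

lemma sum_mult_pos_if_nonzero:
  fixes u :: "'x::finite \<Rightarrow> real"
  assumes "\<And>x. 0 \<le> u x" "u z \<noteq> 0" "\<And>x. 0 < r x"
  shows "0 < (\<Sum>x\<in>UNIV. u x * r x)"
proof -
  have "0 < u z * r z" using assms by (metis less_eq_real_def mult_pos_pos)
  also have "\<dots> \<le> (\<Sum>x\<in>UNIV. u x * r x)"
    by (rule member_le_sum) (use assms in \<open>auto intro: mult_nonneg_nonneg less_imp_le\<close>)
  finally show ?thesis .
qed

lemma sum_UNIV_prod: "(\<Sum>p\<in>(UNIV :: ('a::finite \<times> 'b::finite) set). f p) = (\<Sum>a\<in>UNIV. \<Sum>b\<in>UNIV. f (a, b))"
  by (subst UNIV_Times_UNIV[symmetric]) (simp add: sum.cartesian_product)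

lemma tv_dist_normalize_rel_perturb:
  fixes p p' :: "'y::finite \<Rightarrow> real"
  assumes p'_nonneg: "\<And>y. 0 \<le> p' y"
    and pos: "0 < (\<Sum>y\<in>UNIV. p y)" "0 < (\<Sum>y\<in>UNIV. p' y)"
    and close: "\<And>y. \<bar>p y - p' y\<bar> \<le> r * p y"
  shows "tv_dist (normalize p) (normalize p') \<le> r"
proof -
  define S S' D where "S = (\<Sum>y\<in>UNIV. p y)" and "S' = (\<Sum>y\<in>UNIV. p' y)"
    and "D = (\<Sum>y\<in>UNIV. \<bar>p y - p' y\<bar>)"
  have S_pos: "0 < S" "0 < S'" using pos by (simp_all add: S_def S'_def)
  have D_le: "D \<le> r * S"
    unfolding D_def S_def sum_distrib_left by (rule sum_mono) (rule close)
  have S_diff: "\<bar>S' - S\<bar> \<le> D"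
    using sum_abs[of "\<lambda>y. p y - p' y" UNIV]
    by (simp add: S_def S'_def D_def sum_subtractf abs_minus_commute)
  have pointwise: "\<bar>p y / S - p' y / S'\<bar> \<le> \<bar>p y - p' y\<bar> / S + p' y * \<bar>S' - S\<bar> / (S * S')" for y
  proof -
    have "p y / S - p' y / S' = (p y - p' y) / S + p' y * (S' - S) / (S * S')"
      using S_pos by (simp add: field_simps)
    then show ?thesis
      using S_pos p'_nonneg[of y] abs_triangle_ineq[of "(p y - p' y) / S" "p' y * (S' - S) / (S * S')"]
      by (simp add: abs_mult abs_divide)
  qed
  have "(\<Sum>y\<in>UNIV. \<bar>p y / S - p' y / S'\<bar>)
      \<le> (\<Sum>y\<in>UNIV. \<bar>p y - p' y\<bar> / S + p' y * \<bar>S' - S\<bar> / (S * S'))"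
    by (rule sum_mono) (rule pointwise)
  also have "\<dots> = D / S + \<bar>S' - S\<bar> / S"
    using S_pos by (simp add: sum.distrib D_def sum_divide_distrib[symmetric]
        sum_distrib_right[symmetric] S'_def[symmetric])
  also have "\<dots> \<le> 2 * r"
    using S_pos D_le S_diff by (simp add: field_simps)
  finally show ?thesis
    by (simp add: tv_dist_def normalize_def S_def[symmetric] S'_def[symmetric])
qed

lemma tv_dist_normalize_sum_rel_perturb:
  fixes a k1 k2 :: "'y::finite \<Rightarrow> 'x::finite \<Rightarrow> real"
  assumes a_nonneg: "\<And>y x. 0 \<le> a y x" and k2_nonneg: "\<And>y x. 0 \<le> k2 y x"
    and close: "\<And>y x. \<bar>k1 y x - k2 y x\<bar> \<le> r * k1 y x"
    and pos: "0 < (\<Sum>y\<in>UNIV. \<Sum>x\<in>UNIV. a y x * k1 y x)" "0 < (\<Sum>y\<in>UNIV. \<Sum>x\<in>UNIV. a y x * k2 y x)"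
  shows "tv_dist (normalize (\<lambda>y. \<Sum>x\<in>UNIV. a y x * k1 y x)) (normalize (\<lambda>y. \<Sum>x\<in>UNIV. a y x * k2 y x)) \<le> r"
proof (rule tv_dist_normalize_rel_perturb)
  fix y
  have "\<bar>(\<Sum>x\<in>UNIV. a y x * k1 y x) - (\<Sum>x\<in>UNIV. a y x * k2 y x)\<bar> \<le> (\<Sum>x\<in>UNIV. \<bar>a y x * (k1 y x - k2 y x)\<bar>)"
    using sum_abs[of "\<lambda>x. a y x * (k1 y x - k2 y x)" UNIV] by (simp add: sum_subtractf right_diff_distrib)
  also have "\<dots> \<le> (\<Sum>x\<in>UNIV. a y x * (r * k1 y x))"
    by (rule sum_mono) (use a_nonneg close in \<open>auto simp: abs_mult intro: mult_left_mono\<close>)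
  finally show "\<bar>(\<Sum>x\<in>UNIV. a y x * k1 y x) - (\<Sum>x\<in>UNIV. a y x * k2 y x)\<bar> \<le> r * (\<Sum>x\<in>UNIV. a y x * k1 y x)"
    by (simp add: sum_distrib_left algebra_simps)
qed (use a_nonneg k2_nonneg pos in \<open>auto intro!: sum_nonneg\<close>)

section \<open>Dobrushin contraction\<close>

text \<open>Dobrushin's inequality: the common minorant \<open>c \<cdot> m\<close> of the rows cancels in the difference
  of two vectors of equal mass.\<close>
lemma sum_abs_mix_diff_le:
  fixes Q :: "'x::finite \<Rightarrow> 'y::finite \<Rightarrow> real" and m :: "'y \<Rightarrow> real"
  assumes Q_sum: "\<And>x. (\<Sum>y\<in>UNIV. Q x y) = 1" and m_sum: "(\<Sum>y\<in>UNIV. m y) = 1"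
    and minorant: "\<And>x y. c * m y \<le> Q x y" and mass: "(\<Sum>x\<in>UNIV. p x) = (\<Sum>x\<in>UNIV. p' x)"
  shows "(\<Sum>y\<in>UNIV. \<bar>(\<Sum>x\<in>UNIV. p x * Q x y) - (\<Sum>x\<in>UNIV. p' x * Q x y)\<bar>) \<le> (1 - c) * (\<Sum>x\<in>UNIV. \<bar>p x - p' x\<bar>)"
proof -
  define d where "d x = p x - p' x" for x
  have d_sum: "(\<Sum>x\<in>UNIV. d x) = 0" using mass by (simp add: d_def sum_subtractf)
  have row_diff: "\<bar>(\<Sum>x\<in>UNIV. p x * Q x y) - (\<Sum>x\<in>UNIV. p' x * Q x y)\<bar> \<le> (\<Sum>x\<in>UNIV. \<bar>d x\<bar> * (Q x y - c * m y))" for y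
  proof -
    have "(\<Sum>x\<in>UNIV. p x * Q x y) - (\<Sum>x\<in>UNIV. p' x * Q x y) = (\<Sum>x\<in>UNIV. d x * (Q x y - c * m y))"
      using d_sum by (simp add: d_def sum_subtractf left_diff_distrib right_diff_distrib sum_distrib_right[symmetric])
    also have "\<bar>\<dots>\<bar> \<le> (\<Sum>x\<in>UNIV. \<bar>d x * (Q x y - c * m y)\<bar>)" by (rule sum_abs)
    also have "\<dots> = (\<Sum>x\<in>UNIV. \<bar>d x\<bar> * (Q x y - c * m y))"
      by (rule sum.cong) (use minorant in \<open>auto simp: abs_mult\<close>)
    finally show ?thesis .
  qed
  have "(\<Sum>y\<in>UNIV. \<bar>(\<Sum>x\<in>UNIV. p x * Q x y) - (\<Sum>x\<in>UNIV. p' x * Q x y)\<bar>)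
      \<le> (\<Sum>y\<in>UNIV. \<Sum>x\<in>UNIV. \<bar>d x\<bar> * (Q x y - c * m y))"
    by (rule sum_mono) (rule row_diff)
  also have "\<dots> = (\<Sum>x\<in>UNIV. \<bar>d x\<bar> * (\<Sum>y\<in>UNIV. Q x y - c * m y))"
    by (subst sum.swap) (simp add: sum_distrib_left)
  also have "\<dots> = (\<Sum>x\<in>UNIV. \<bar>d x\<bar> * (1 - c))"
    by (simp add: sum_subtractf Q_sum sum_distrib_left[symmetric] m_sum)
  finally show ?thesis by (simp add: d_def sum_distrib_left mult.commute)
qed

lemma tv_dist_normalize_mix_contract:
  fixes A :: "'x::finite \<Rightarrow> 'y::finite \<Rightarrow> real" and m :: "'y \<Rightarrow> real"
  assumes row_pos: "\<And>x. 0 < (\<Sum>y\<in>UNIV. A x y)"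
    and m_sum: "(\<Sum>y\<in>UNIV. m y) = 1"
    and minorant: "\<And>x y. c * (\<Sum>y'\<in>UNIV. A x y') * m y \<le> A x y"
    and u_nonneg: "\<And>x. 0 \<le> u x" and v_nonneg: "\<And>x. 0 \<le> v x" and "u xu \<noteq> 0" "v xv \<noteq> 0"
  shows "tv_dist (normalize (\<lambda>y. \<Sum>x\<in>UNIV. u x * A x y)) (normalize (\<lambda>y. \<Sum>x\<in>UNIV. v x * A x y))
     \<le> (1 - c) * tv_dist (normalize (\<lambda>x. u x * (\<Sum>y\<in>UNIV. A x y))) (normalize (\<lambda>x. v x * (\<Sum>y\<in>UNIV. A x y)))"
proof -
  define r where "r x = (\<Sum>y\<in>UNIV. A x y)" for x
  define Q where "Q x y = A x y / r x" for x y
  have r_pos: "0 < r x" for x using row_pos r_def by auto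
  then have r_nonzero: "r x \<noteq> 0" for x by (metis less_irrefl)
  have Q_sum: "(\<Sum>y\<in>UNIV. Q x y) = 1" for x
    using r_pos[of x] by (simp add: Q_def sum_divide_distrib[symmetric] r_def[symmetric])
  have Q_minorant: "c * m y \<le> Q x y" for x y
    using minorant[of x y] r_pos[of x] by (simp add: Q_def r_def[symmetric] field_simps)
  have mix: "normalize (\<lambda>y. \<Sum>x\<in>UNIV. w x * A x y) y = (\<Sum>x\<in>UNIV. normalize (\<lambda>x. w x * r x) x * Q x y)"
    and mass: "(\<Sum>x\<in>UNIV. normalize (\<lambda>x. w x * r x) x) = 1"
    if "\<And>x. 0 \<le> w x" "w x0 \<noteq> 0" for w x0 y
  proof -
    have W: "0 < (\<Sum>x\<in>UNIV. w x * r x)" by (rule sum_mult_pos_if_nonzero) (use that r_pos in auto)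
    have total: "(\<Sum>y\<in>UNIV. \<Sum>x\<in>UNIV. w x * A x y) = (\<Sum>x\<in>UNIV. w x * r x)"
      by (subst sum.swap) (simp add: r_def sum_distrib_left)
    have "(\<Sum>x\<in>UNIV. w x * A x y) = (\<Sum>x\<in>UNIV. w x * r x * Q x y)"
      by (rule sum.cong) (simp_all add: Q_def r_nonzero)
    then show "normalize (\<lambda>y. \<Sum>x\<in>UNIV. w x * A x y) y = (\<Sum>x\<in>UNIV. normalize (\<lambda>x. w x * r x) x * Q x y)"
      by (simp add: normalize_def total sum_divide_distrib[symmetric])
    show "(\<Sum>x\<in>UNIV. normalize (\<lambda>x. w x * r x) x) = 1" using W by (simp add: sum_normalize)
  qed
  have "(\<Sum>x\<in>UNIV. normalize (\<lambda>x. u x * r x) x) = (\<Sum>x\<in>UNIV. normalize (\<lambda>x. v x * r x) x)"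
    using mass[of u xu] mass[of v xv] assms by simp
  from sum_abs_mix_diff_le[OF Q_sum m_sum Q_minorant this] show ?thesis
    using mix[of u xu] mix[of v xv] assms by (simp add: tv_dist_def r_def)
qed

lemma tv_dist_normalize_mix_le:
  fixes A :: "'x::finite \<Rightarrow> 'y::finite \<Rightarrow> real"
  assumes "\<And>x. 0 < (\<Sum>y\<in>UNIV. A x y)"
    and "\<And>x y. 0 \<le> A x y" "\<And>x. 0 \<le> u x" "\<And>x. 0 \<le> v x" "u xu \<noteq> 0" "v xv \<noteq> 0"
  shows "tv_dist (normalize (\<lambda>y. \<Sum>x\<in>UNIV. u x * A x y)) (normalize (\<lambda>y. \<Sum>x\<in>UNIV. v x * A x y))
     \<le> tv_dist (normalize (\<lambda>x. u x * (\<Sum>y\<in>UNIV. A x y))) (normalize (\<lambda>x. v x * (\<Sum>y\<in>UNIV. A x y)))"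
  using tv_dist_normalize_mix_contract[where m="\<lambda>_. 1 / real CARD('y)" and c=0, of A u v xu xv] assms
  by simp

lemma exists_row_minorant:
  fixes K :: "'x::finite \<Rightarrow> 'y::finite \<Rightarrow> real"
  assumes K_pos: "\<And>x y. 0 < K x y" and ratio: "\<And>x x' y. c * K x' y \<le> K x y" and "0 \<le> c"
    and \<beta>_pos: "\<And>y. 0 < \<beta> y"
  shows "\<exists>m. (\<Sum>y\<in>UNIV. m y) = 1 \<and> (\<forall>x y. c * (\<Sum>y'\<in>UNIV. K x y' * \<beta> y') * m y \<le> K x y * \<beta> y)"
proof -
  define g where "g y = Max (range (\<lambda>x. K x y))" for y
  have K_le_g: "K x y \<le> g y" for x y unfolding g_def by (rule Max_ge) auto
  have "g y \<in> range (\<lambda>x. K x y)" for y unfolding g_def by (rule Max_in) auto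
  then have "\<forall>y. \<exists>x. g y = K x y" by blast
  then obtain xmax where xmax: "g y = K (xmax y) y" for y by metis
  define S where "S = (\<Sum>y\<in>UNIV. g y * \<beta> y)"
  have S_pos: "0 < S" unfolding S_def by (rule sum_pos) (auto intro: mult_pos_pos K_pos \<beta>_pos simp: xmax)
  define m where "m y = g y * \<beta> y / S" for y
  have "c * (\<Sum>y'\<in>UNIV. K x y' * \<beta> y') * m y \<le> K x y * \<beta> y" for x y
  proof -
    have "(\<Sum>y'\<in>UNIV. K x y' * \<beta> y') \<le> S"
      unfolding S_def by (rule sum_mono) (use K_le_g \<beta>_pos in \<open>auto intro: mult_right_mono less_imp_le\<close>)
    then have "c * (\<Sum>y'\<in>UNIV. K x y' * \<beta> y') * m y \<le> c * S * m y"
      using \<open>0 \<le> c\<close> S_pos \<beta>_pos[of y] K_pos[of "xmax y" y]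
      by (intro mult_right_mono mult_left_mono) (auto simp: m_def xmax)
    also have "\<dots> = c * K (xmax y) y * \<beta> y" using S_pos by (simp add: m_def xmax)
    also have "\<dots> \<le> K x y * \<beta> y" using ratio \<beta>_pos[of y] by (simp add: mult_right_mono less_imp_le)
    finally show ?thesis .
  qed
  moreover have "(\<Sum>y\<in>UNIV. m y) = 1"
    using S_pos by (simp add: m_def sum_divide_distrib[symmetric] S_def[symmetric])
  ultimately show ?thesis by blast
qed

lemma exists_col_minorant:
  fixes K :: "'x::finite \<Rightarrow> 'y::finite \<Rightarrow> real"
  assumes ratio: "\<And>x x' y. c * K x' y \<le> K x y" and F_nonneg: "\<And>x. 0 \<le> F x" and "F x0 \<noteq> 0"
  shows "\<exists>m. (\<Sum>x\<in>UNIV. m x) = 1 \<and> (\<forall>y x. c * (\<Sum>x'\<in>UNIV. F x' * K x' y) * m x \<le> F x * K x y)"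
proof -
  define S where "S = (\<Sum>x\<in>UNIV. F x)"
  have S_pos: "0 < S"
    using sum_mult_pos_if_nonzero[of F x0 "\<lambda>_. 1"] F_nonneg \<open>F x0 \<noteq> 0\<close> by (simp add: S_def)
  define m where "m x = F x / S" for x
  have "c * (\<Sum>x'\<in>UNIV. F x' * K x' y) * m x \<le> F x * K x y" for x y
  proof -
    have "c * (\<Sum>x'\<in>UNIV. F x' * K x' y) \<le> (\<Sum>x'\<in>UNIV. F x' * K x y)"
      unfolding sum_distrib_left
      by (rule sum_mono) (use mult_left_mono[OF ratio F_nonneg] in \<open>simp add: algebra_simps\<close>)
    also have "\<dots> = S * K x y" by (simp add: S_def sum_distrib_right)
    finally have "c * (\<Sum>x'\<in>UNIV. F x' * K x' y) * m x \<le> S * K x y * m x"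
      using S_pos F_nonneg[of x] by (intro mult_right_mono) (simp_all add: m_def)
    also have "\<dots> = F x * K x y" using S_pos by (simp add: m_def)
    finally show ?thesis .
  qed
  moreover have "(\<Sum>x\<in>UNIV. m x) = 1"
    using S_pos by (simp add: m_def sum_divide_distrib[symmetric] S_def[symmetric])
  ultimately show ?thesis by blast
qed

section \<open>Forward and backward recursions\<close>

text \<open>A step kernel \<open>\<kappa> s x y e\<close> is the weight of passing at time \<open>s\<close> from the previous
  option \<open>x\<close> to the option \<open>y\<close> with switch bit \<open>e\<close>. Along a fixed observation sequence
  it also carries the likelihood of the observed action, so it is not stochastic.\<close>

definition option_kernel :: "(int \<Rightarrow> 'o \<Rightarrow> 'o \<Rightarrow> bool \<Rightarrow> real) \<Rightarrow> int \<Rightarrow> 'o \<Rightarrow> 'o \<Rightarrow> real" where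
  "option_kernel \<kappa> s x y = (\<Sum>e\<in>UNIV. \<kappa> s x y e)"

fun fwd :: "(int \<Rightarrow> 'o::finite \<Rightarrow> 'o \<Rightarrow> bool \<Rightarrow> real) \<Rightarrow> ('o \<Rightarrow> real) \<Rightarrow> int \<Rightarrow> nat \<Rightarrow> 'o \<Rightarrow> real" where
  "fwd \<kappa> u lo 0 = u"
| "fwd \<kappa> u lo (Suc n) = (\<lambda>y. \<Sum>x\<in>UNIV. fwd \<kappa> u lo n x * option_kernel \<kappa> (lo + int n) x y)"

fun bwd :: "(int \<Rightarrow> 'o::finite \<Rightarrow> 'o \<Rightarrow> bool \<Rightarrow> real) \<Rightarrow> ('o \<Rightarrow> real) \<Rightarrow> int \<Rightarrow> nat \<Rightarrow> 'o \<Rightarrow> real" where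
  "bwd \<kappa> w hi 0 = w"
| "bwd \<kappa> w hi (Suc n) = (\<lambda>x. \<Sum>y\<in>UNIV. option_kernel \<kappa> (hi - int n) x y * bwd \<kappa> w hi n y)"

lemma fwd_add: "fwd \<kappa> u lo (m + n) = fwd \<kappa> (fwd \<kappa> u lo m) (lo + int m) n"
  by (induction n) (simp_all add: algebra_simps)

lemma bwd_add: "bwd \<kappa> w hi (m + n) = bwd \<kappa> (bwd \<kappa> w hi m) (hi - int m) n"
  by (induction n) (simp_all add: algebra_simps)

lemma fwd_zero: "fwd \<kappa> (\<lambda>_. 0) lo n = (\<lambda>_. 0)"
  by (induction n) auto

lemma fwd_last:
  "0 < n \<Longrightarrow> fwd \<kappa> u lo n = (\<lambda>y. \<Sum>x\<in>UNIV. fwd \<kappa> u lo (n - 1) x * option_kernel \<kappa> (lo + int n - 1) x y)"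
  by (cases n) (auto simp: algebra_simps)

lemma bwd_last:
  "0 < n \<Longrightarrow> bwd \<kappa> w hi n = (\<lambda>x. \<Sum>y\<in>UNIV. option_kernel \<kappa> (hi - int n + 1) x y * bwd \<kappa> w hi (n - 1) y)"
  by (cases n) (auto simp: algebra_simps)

lemma fwd_cong:
  "(\<And>s. lo \<le> s \<Longrightarrow> s < lo + int n \<Longrightarrow> \<kappa> s = \<kappa>' s) \<Longrightarrow> fwd \<kappa> u lo n = fwd \<kappa>' u lo n"
  by (induction n) (simp_all add: option_kernel_def)

lemma bwd_cong:
  "(\<And>s. hi - int n < s \<Longrightarrow> s \<le> hi \<Longrightarrow> \<kappa> s = \<kappa>' s) \<Longrightarrow> bwd \<kappa> w hi n = bwd \<kappa>' w hi n"
  by (induction n) (simp_all add: option_kernel_def)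

lemma sum_fwd_mult_eq_sum_mult_bwd:
  "(\<Sum>y\<in>UNIV. fwd \<kappa> v a n y * w y) = (\<Sum>x\<in>UNIV. v x * bwd \<kappa> w (a - 1 + int n) n x)"
proof (induction n arbitrary: w)
  case (Suc n)
  define w' where "w' = bwd \<kappa> w (a + int n) 1"
  have "(\<Sum>y\<in>UNIV. fwd \<kappa> v a (Suc n) y * w y) = (\<Sum>x\<in>UNIV. fwd \<kappa> v a n x * w' x)"
    by (simp add: w'_def sum_distrib_left sum_distrib_right mult.assoc) (rule sum.swap)
  also have "\<dots> = (\<Sum>x\<in>UNIV. v x * bwd \<kappa> w' (a - 1 + int n) n x)" by (rule Suc.IH)
  also have "bwd \<kappa> w' (a - 1 + int n) n = bwd \<kappa> w (a - 1 + int (Suc n)) (Suc n)"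
    using bwd_add[of \<kappa> w "a + int n" 1 n] by (simp add: w'_def algebra_simps)
  finally show ?case .
qed simp

lemma fwd_step_at: "1 \<le> t \<Longrightarrow> fwd \<kappa> u 1 t y = (\<Sum>x\<in>UNIV. fwd \<kappa> u 1 (t - 1) x * option_kernel \<kappa> (int t) x y)"
  using fwd_last[of t \<kappa> u 1] by simp

lemma bwd_step_at:
  "t \<le> N \<Longrightarrow> bwd \<kappa> w (int N) (N - t + 1) x = (\<Sum>y\<in>UNIV. option_kernel \<kappa> (int t) x y * bwd \<kappa> w (int N) (N - t) y)"
  using bwd_last[of "N - t + 1" \<kappa> w "int N"] by (simp add: of_nat_diff)

definition minorized :: "(int \<Rightarrow> 'o::finite \<Rightarrow> 'o \<Rightarrow> bool \<Rightarrow> real) \<Rightarrow> real \<Rightarrow> bool" where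
  "minorized \<kappa> c \<longleftrightarrow> 0 \<le> c \<and> (\<forall>s x y e. 0 < \<kappa> s x y e) \<and> (\<forall>s x x' y e. c * \<kappa> s x' y e \<le> \<kappa> s x y e)"

lemma minorized_pos: "minorized \<kappa> c \<Longrightarrow> 0 < \<kappa> s x y e"
  by (simp add: minorized_def)

lemma minorized_ratio: "minorized \<kappa> c \<Longrightarrow> c * \<kappa> s x' y e \<le> \<kappa> s x y e"
  by (simp add: minorized_def)

lemma minorized_const_nonneg: "minorized \<kappa> c \<Longrightarrow> 0 \<le> c"
  by (simp add: minorized_def)

lemma minorized_le_1:
  assumes "minorized \<kappa> c"
  shows "c \<le> 1"
proof -
  have "c * \<kappa> 0 x y e \<le> 1 * \<kappa> 0 x y e" and "0 < \<kappa> 0 x y e" for x y e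
    using minorized_ratio[OF assms] minorized_pos[OF assms] by simp_all
  then show ?thesis by (meson mult_le_cancel_right_pos)
qed

lemma option_kernel_pos: "minorized \<kappa> c \<Longrightarrow> 0 < option_kernel \<kappa> s x y"
  unfolding option_kernel_def by (rule sum_pos) (auto intro: minorized_pos)

lemma option_kernel_ratio: "minorized \<kappa> c \<Longrightarrow> c * option_kernel \<kappa> s x' y \<le> option_kernel \<kappa> s x y"
  unfolding option_kernel_def sum_distrib_left by (rule sum_mono) (rule minorized_ratio)

lemma fwd_nonneg: "minorized \<kappa> c \<Longrightarrow> (\<And>x. 0 \<le> u x) \<Longrightarrow> 0 \<le> fwd \<kappa> u lo n y"
  by (induction n arbitrary: y) (auto intro!: sum_nonneg mult_nonneg_nonneg less_imp_le[OF option_kernel_pos])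

lemma fwd_nonzero:
  assumes "minorized \<kappa> c" "\<And>x. 0 \<le> u x" "u z \<noteq> 0"
  shows "\<exists>x. fwd \<kappa> u lo n x \<noteq> 0"
proof (induction n)
  case (Suc n)
  then obtain x where "fwd \<kappa> u lo n x \<noteq> 0" by auto
  then have "0 < (\<Sum>x\<in>UNIV. fwd \<kappa> u lo n x * option_kernel \<kappa> (lo + int n) x z)"
    by (intro sum_mult_pos_if_nonzero fwd_nonneg[OF assms(1,2)] option_kernel_pos[OF assms(1)])
  then show ?case by (intro exI[of _ z]) simp
qed (use assms in auto)

lemma bwd_pos: "minorized \<kappa> c \<Longrightarrow> (\<And>x. 0 < w x) \<Longrightarrow> 0 < bwd \<kappa> w hi n x"
  by (induction n arbitrary: x) (auto intro!: sum_pos mult_pos_pos option_kernel_pos)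

lemma sum_PiE_insert:
  assumes "finite S" "i \<notin> S"
  shows "(\<Sum>f\<in>PiE (insert i S) T. g f) = (\<Sum>y\<in>T i. \<Sum>f\<in>PiE S T. g (f(i:=y)))"
proof -
  have "(\<Sum>f\<in>PiE (insert i S) T. g f) = (\<Sum>(y, f)\<in>T i \<times> PiE S T. g (f(i := y)))"
    unfolding PiE_insert_eq by (subst sum.reindex[OF inj_combinator[OF assms(2)]]) (simp add: comp_def case_prod_unfold)
  then show ?thesis by (simp add: sum.cartesian_product)
qed

lemma finite_latents: "finite (latents lo hi :: ((int \<Rightarrow> 'o::finite) \<times> (int \<Rightarrow> bool)) set)"
  unfolding latents_def by (intro finite_cartesian_product finite_PiE) auto

lemma sum_latents:
  "(\<Sum>(os, bs)\<in>latents lo hi. g os bs)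
     = (\<Sum>os\<in>PiE {lo-1..hi} (\<lambda>_. UNIV). \<Sum>bs\<in>PiE {lo..hi} (\<lambda>_. UNIV). g os bs)"
  unfolding latents_def by (simp add: sum.cartesian_product)

lemma sum_latents_Suc:
  fixes g :: "(int \<Rightarrow> 'o::finite) \<Rightarrow> (int \<Rightarrow> bool) \<Rightarrow> real"
  assumes "lo - 1 \<le> hi"
  shows "(\<Sum>(os, bs)\<in>latents lo (hi + 1). g os bs)
       = (\<Sum>(os, bs)\<in>latents lo hi. \<Sum>y\<in>UNIV. \<Sum>e\<in>UNIV. g (os(hi+1:=y)) (bs(hi+1:=e)))"
proof -
  have e1: "{lo-1..hi+1} = insert (hi+1) {lo-1..hi}" and e2: "{lo..hi+1} = insert (hi+1) {lo..hi}"
    using assms by auto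
  let ?S1 = "{lo-1..hi}" and ?S2 = "{lo..hi}" and ?i = "hi + 1"
  have "(\<Sum>os\<in>PiE (insert ?i ?S1) (\<lambda>_. UNIV). \<Sum>bs\<in>PiE (insert ?i ?S2) (\<lambda>_. UNIV). g os bs)
      = (\<Sum>y\<in>UNIV. \<Sum>os\<in>PiE ?S1 (\<lambda>_. UNIV). \<Sum>e\<in>UNIV. \<Sum>bs\<in>PiE ?S2 (\<lambda>_. UNIV). g (os(?i:=y)) (bs(?i:=e)))"
    by (simp add: sum_PiE_insert)
  also have "\<dots> = (\<Sum>os\<in>PiE ?S1 (\<lambda>_. UNIV). \<Sum>y\<in>UNIV. \<Sum>e\<in>UNIV. \<Sum>bs\<in>PiE ?S2 (\<lambda>_. UNIV). g (os(?i:=y)) (bs(?i:=e)))"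
    by (rule sum.swap)
  also have "\<dots> = (\<Sum>os\<in>PiE ?S1 (\<lambda>_. UNIV). \<Sum>y\<in>UNIV. \<Sum>bs\<in>PiE ?S2 (\<lambda>_. UNIV). \<Sum>e\<in>UNIV. g (os(?i:=y)) (bs(?i:=e)))"
    by (intro sum.cong refl sum.swap)
  also have "\<dots> = (\<Sum>os\<in>PiE ?S1 (\<lambda>_. UNIV). \<Sum>bs\<in>PiE ?S2 (\<lambda>_. UNIV). \<Sum>y\<in>UNIV. \<Sum>e\<in>UNIV. g (os(?i:=y)) (bs(?i:=e)))"
    by (intro sum.cong refl sum.swap)
  finally show ?thesis
    unfolding sum_latents e1 e2 .
qed

definition chain_weight ::
  "(int \<Rightarrow> 'o \<Rightarrow> 'o \<Rightarrow> bool \<Rightarrow> real) \<Rightarrow> ('o \<Rightarrow> real) \<Rightarrow> int \<Rightarrow> int \<Rightarrow> (int \<Rightarrow> 'o) \<Rightarrow> (int \<Rightarrow> bool) \<Rightarrow> real" where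
  "chain_weight \<kappa> init lo hi os bs = init (os (lo - 1)) * (\<Prod>s\<in>{lo..hi}. \<kappa> s (os (s - 1)) (os s) (bs s))"

lemma chain_weight_Suc:
  assumes "lo - 1 \<le> hi"
  shows "chain_weight \<kappa> init lo (hi + 1) (os(hi+1:=y)) (bs(hi+1:=e))
       = chain_weight \<kappa> init lo hi os bs * \<kappa> (hi + 1) (os hi) y e"
proof -
  have "{lo..hi+1} = insert (hi+1) {lo..hi}" using assms by auto
  moreover have "(\<Prod>s\<in>{lo..hi}. \<kappa> s ((os(hi+1:=y)) (s - 1)) ((os(hi+1:=y)) s) ((bs(hi+1:=e)) s))
      = (\<Prod>s\<in>{lo..hi}. \<kappa> s (os (s - 1)) (os s) (bs s))"
    by (rule prod.cong) auto
  ultimately show ?thesis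
    unfolding chain_weight_def using assms by (simp add: ac_simps)
qed

lemma sum_chain_weight_eq_fwd:
  fixes \<kappa> :: "int \<Rightarrow> 'o::finite \<Rightarrow> 'o \<Rightarrow> bool \<Rightarrow> real"
  shows "(\<Sum>(os, bs)\<in>latents lo (lo - 1 + int n). chain_weight \<kappa> init lo (lo - 1 + int n) os bs * G (os (lo - 1 + int n)))
     = (\<Sum>y\<in>UNIV. fwd \<kappa> init lo n y * G y)"
proof (induction n arbitrary: G)
  case 0
  show ?case unfolding sum_latents chain_weight_def
    using sum_PiE_insert[where S="{}" and i="lo-1" and T="\<lambda>_. UNIV" and g="\<lambda>os. init (os (lo-1)) * G (os (lo-1))"]
    by simp
next
  case (Suc n)
  define hi where "hi = lo - 1 + int n"
  have hi: "lo - 1 \<le> hi" and hi_Suc: "lo - 1 + int (Suc n) = hi + 1" by (simp_all add: hi_def)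
  define G' where "G' x = (\<Sum>y\<in>UNIV. option_kernel \<kappa> (hi + 1) x y * G y)" for x
  have "(\<Sum>(os, bs)\<in>latents lo (hi + 1). chain_weight \<kappa> init lo (hi + 1) os bs * G (os (hi + 1)))
      = (\<Sum>(os, bs)\<in>latents lo hi. \<Sum>y\<in>UNIV. \<Sum>e\<in>UNIV. chain_weight \<kappa> init lo hi os bs * \<kappa> (hi + 1) (os hi) y e * G y)"
    by (subst sum_latents_Suc[OF hi]) (simp add: chain_weight_Suc[OF hi])
  also have "\<dots> = (\<Sum>(os, bs)\<in>latents lo hi. chain_weight \<kappa> init lo hi os bs * G' (os hi))"
    by (rule sum.cong) (auto simp: G'_def option_kernel_def sum_distrib_left sum_distrib_right mult.assoc intro!: sum.cong)
  also have "\<dots> = (\<Sum>y\<in>UNIV. fwd \<kappa> init lo n y * G' y)"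
    using Suc.IH[of G'] by (simp add: hi_def)
  also have "\<dots> = (\<Sum>y\<in>UNIV. fwd \<kappa> init lo (Suc n) y * G y)"
    by (simp add: G'_def sum_distrib_left sum_distrib_right hi_def algebra_simps) (rule sum.swap)
  finally show ?case unfolding hi_Suc .
qed

text \<open>Multiplying the step kernel at time \<open>t\<close> by an indicator selects a marginal at time \<open>t\<close>.\<close>
definition mask_step ::
  "(int \<Rightarrow> 'o \<Rightarrow> 'o \<Rightarrow> bool \<Rightarrow> real) \<Rightarrow> int \<Rightarrow> ('o \<Rightarrow> 'o \<Rightarrow> bool \<Rightarrow> real) \<Rightarrow> int \<Rightarrow> 'o \<Rightarrow> 'o \<Rightarrow> bool \<Rightarrow> real" where
  "mask_step \<kappa> t ind s x y e = \<kappa> s x y e * (if s = t then ind x y e else 1)"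

lemma chain_weight_mask_step:
  assumes "lo \<le> t" "t \<le> hi"
  shows "chain_weight (mask_step \<kappa> t ind) init lo hi os bs
       = chain_weight \<kappa> init lo hi os bs * ind (os (t - 1)) (os t) (bs t)"
  using assms by (simp add: chain_weight_def mask_step_def prod.distrib prod.delta mult.assoc)

lemma sum_chain_weight_mult_step:
  fixes \<kappa> :: "int \<Rightarrow> 'o::finite \<Rightarrow> 'o \<Rightarrow> bool \<Rightarrow> real"
  assumes "lo \<le> t" "t \<le> hi"
  shows "(\<Sum>(os, bs)\<in>latents lo hi. chain_weight \<kappa> init lo hi os bs * ind (os (t - 1)) (os t) (bs t))
    = (\<Sum>x\<in>UNIV. \<Sum>y\<in>UNIV. \<Sum>e\<in>UNIV.
         fwd \<kappa> init lo (nat (t - lo)) x * \<kappa> t x y e * ind x y e * bwd \<kappa> (\<lambda>_. 1) hi (nat (hi - t)) y)"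
proof -
  define \<kappa>' where "\<kappa>' = mask_step \<kappa> t ind"
  define m n where "m = nat (t - lo)" and "n = nat (hi - t)"
  have hi: "hi = lo - 1 + int (m + 1 + n)" and t: "lo + int m = t" "lo + int (m + 1) = t + 1"
    using assms by (simp_all add: m_def n_def)
  have "(\<Sum>(os, bs)\<in>latents lo hi. chain_weight \<kappa> init lo hi os bs * ind (os (t - 1)) (os t) (bs t))
      = (\<Sum>(os, bs)\<in>latents lo hi. chain_weight \<kappa>' init lo hi os bs * (\<lambda>_. 1) (os hi))"
    by (rule sum.cong) (auto simp: \<kappa>'_def chain_weight_mask_step[OF assms])
  also have "\<dots> = (\<Sum>y\<in>UNIV. fwd \<kappa>' (fwd \<kappa>' (fwd \<kappa>' init lo m) t 1) (t + 1) n y * 1)"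
    using sum_chain_weight_eq_fwd[of \<kappa>' init lo "m + 1 + n" "\<lambda>_. 1"]
    unfolding hi[symmetric] fwd_add t by simp
  also have "\<dots> = (\<Sum>x\<in>UNIV. fwd \<kappa>' (fwd \<kappa>' init lo m) t 1 x * bwd \<kappa>' (\<lambda>_. 1) hi n x)"
    using sum_fwd_mult_eq_sum_mult_bwd[of \<kappa>' _ "t + 1" n "\<lambda>_. 1"] assms by (simp add: n_def)
  also have "fwd \<kappa>' init lo m = fwd \<kappa> init lo m"
    by (rule fwd_cong) (use assms in \<open>auto simp: \<kappa>'_def mask_step_def m_def fun_eq_iff\<close>)
  also have "bwd \<kappa>' (\<lambda>_. 1) hi n = bwd \<kappa> (\<lambda>_. 1) hi n"
    by (rule bwd_cong) (use assms in \<open>auto simp: \<kappa>'_def mask_step_def n_def fun_eq_iff\<close>)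
  also have "(\<Sum>x\<in>UNIV. fwd \<kappa>' (fwd \<kappa> init lo m) t 1 x * bwd \<kappa> (\<lambda>_. 1) hi n x)
     = (\<Sum>y\<in>UNIV. \<Sum>x\<in>UNIV. \<Sum>e\<in>UNIV. fwd \<kappa> init lo m x * \<kappa> t x y e * ind x y e * bwd \<kappa> (\<lambda>_. 1) hi n y)"
    by (simp add: option_kernel_def \<kappa>'_def mask_step_def sum_distrib_left sum_distrib_right mult.assoc)
  also have "\<dots> = (\<Sum>x\<in>UNIV. \<Sum>y\<in>UNIV. \<Sum>e\<in>UNIV. fwd \<kappa> init lo m x * \<kappa> t x y e * ind x y e * bwd \<kappa> (\<lambda>_. 1) hi n y)"
    by (rule sum.swap)
  finally show ?thesis
    unfolding m_def n_def .
qed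

section \<open>Smoothing distributions as forward-backward products\<close>

definition smoothing_ob ::
  "(int \<Rightarrow> 'o::finite \<Rightarrow> 'o \<Rightarrow> bool \<Rightarrow> real) \<Rightarrow> int \<Rightarrow> ('o \<Rightarrow> real) \<Rightarrow> ('o \<Rightarrow> real) \<Rightarrow> 'o \<times> bool \<Rightarrow> real" where
  "smoothing_ob \<kappa> t F B = normalize (\<lambda>(q, b). (\<Sum>x\<in>UNIV. F x * \<kappa> t x q b) * B q)"

definition smoothing_prev ::
  "(int \<Rightarrow> 'o::finite \<Rightarrow> 'o \<Rightarrow> bool \<Rightarrow> real) \<Rightarrow> int \<Rightarrow> ('o \<Rightarrow> real) \<Rightarrow> ('o \<Rightarrow> real) \<Rightarrow> 'o \<times> bool \<Rightarrow> real" where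
  "smoothing_prev \<kappa> t F B = normalize (\<lambda>(q, b). F q * (\<Sum>y\<in>UNIV. \<kappa> t q y b * B y))"

definition obs_kernel ::
  "('p \<Rightarrow> 'o \<Rightarrow> 's \<Rightarrow> 'a \<Rightarrow> 'o \<Rightarrow> bool \<Rightarrow> real) \<Rightarrow> 'p \<Rightarrow> (int \<Rightarrow> 's) \<Rightarrow> (int \<Rightarrow> 'a) \<Rightarrow> int \<Rightarrow> 'o \<Rightarrow> 'o \<Rightarrow> bool \<Rightarrow> real" where
  "obs_kernel h \<theta> ss as s x y e = h \<theta> x (ss s) (as s) y e"

definition transition_factor :: "('s \<Rightarrow> 'a \<Rightarrow> 's \<Rightarrow> real) \<Rightarrow> int \<Rightarrow> int \<Rightarrow> (int \<Rightarrow> 's) \<Rightarrow> (int \<Rightarrow> 'a) \<Rightarrow> real" where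
  "transition_factor P lo hi ss as = (\<Prod>s\<in>{lo..hi - 1}. P (ss s) (as s) (ss (s + 1)))"

lemma path_weight_eq_chain_weight:
  "path_weight h P \<theta> init lo hi ss as os bs
     = chain_weight (obs_kernel h \<theta> ss as) init lo hi os bs * transition_factor P lo hi ss as"
  by (simp add: path_weight_def chain_weight_def obs_kernel_def transition_factor_def)

lemma sum_sum_if_eq_conj:
  fixes g :: "'x::finite \<Rightarrow> 'y::finite \<Rightarrow> real"
  shows "(\<Sum>y\<in>UNIV. \<Sum>e\<in>UNIV. if y = q \<and> e = b then g y e else 0) = g q b"
proof -
  have "(\<Sum>e\<in>UNIV. if y = q \<and> e = b then g y e else 0) = (if y = q then g y b else 0)" for y
    by (cases "y = q") (simp_all add: sum.delta)
  then show ?thesis by simp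
qed

lemma marg_ob_eq_fwd_bwd:
  fixes h :: "'p \<Rightarrow> 'o::finite \<Rightarrow> 's \<Rightarrow> 'a \<Rightarrow> 'o \<Rightarrow> bool \<Rightarrow> real"
    and \<theta> :: 'p and ss :: "int \<Rightarrow> 's" and as :: "int \<Rightarrow> 'a"
  assumes "lo \<le> t" "t \<le> hi"
  defines "\<kappa> \<equiv> obs_kernel h \<theta> ss as"
  shows "marg_ob h P \<theta> init lo hi ss as t q b = transition_factor P lo hi ss as *
     ((\<Sum>x\<in>UNIV. fwd \<kappa> init lo (nat (t - lo)) x * \<kappa> t x q b) * bwd \<kappa> (\<lambda>_. 1) hi (nat (hi - t)) q)"
proof -
  define F B where "F = fwd \<kappa> init lo (nat (t - lo))" and "B = bwd \<kappa> (\<lambda>_. 1) hi (nat (hi - t))"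
  define ind :: "'o \<Rightarrow> 'o \<Rightarrow> bool \<Rightarrow> real" where "ind x y e = (if y = q \<and> e = b then 1 else 0)" for x y e
  have "marg_ob h P \<theta> init lo hi ss as t q b
     = (\<Sum>(os, bs)\<in>latents lo hi. chain_weight \<kappa> init lo hi os bs * ind (os (t - 1)) (os t) (bs t))
       * transition_factor P lo hi ss as"
    unfolding marg_ob_def \<kappa>_def
    by (subst sum.inter_restrict[OF finite_latents])
       (auto simp: path_weight_eq_chain_weight ind_def sum_distrib_right intro!: sum.cong)
  also have "\<dots> = (\<Sum>x\<in>UNIV. \<Sum>y\<in>UNIV. \<Sum>e\<in>UNIV. if y = q \<and> e = b then F x * \<kappa> t x y e * B y else 0)
       * transition_factor P lo hi ss as"
    unfolding sum_chain_weight_mult_step[OF assms(1,2)] F_def B_def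
    by (intro arg_cong2[where f=times] sum.cong refl) (simp add: ind_def)
  finally show ?thesis
    by (simp add: sum_sum_if_eq_conj F_def B_def sum_distrib_left sum_distrib_right ac_simps)
qed

lemma marg_prev_eq_fwd_bwd:
  fixes h :: "'p \<Rightarrow> 'o::finite \<Rightarrow> 's \<Rightarrow> 'a \<Rightarrow> 'o \<Rightarrow> bool \<Rightarrow> real"
    and \<theta> :: 'p and ss :: "int \<Rightarrow> 's" and as :: "int \<Rightarrow> 'a"
  assumes "lo \<le> t" "t \<le> hi"
  defines "\<kappa> \<equiv> obs_kernel h \<theta> ss as"
  shows "marg_prev h P \<theta> init lo hi ss as t q b = transition_factor P lo hi ss as *
     (fwd \<kappa> init lo (nat (t - lo)) q * (\<Sum>y\<in>UNIV. \<kappa> t q y b * bwd \<kappa> (\<lambda>_. 1) hi (nat (hi - t)) y))"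
proof -
  define F B where "F = fwd \<kappa> init lo (nat (t - lo))" and "B = bwd \<kappa> (\<lambda>_. 1) hi (nat (hi - t))"
  define ind :: "'o \<Rightarrow> 'o \<Rightarrow> bool \<Rightarrow> real" where "ind x y e = (if x = q \<and> e = b then 1 else 0)" for x y e
  have "marg_prev h P \<theta> init lo hi ss as t q b
     = (\<Sum>(os, bs)\<in>latents lo hi. chain_weight \<kappa> init lo hi os bs * ind (os (t - 1)) (os t) (bs t))
       * transition_factor P lo hi ss as"
    unfolding marg_prev_def \<kappa>_def
    by (subst sum.inter_restrict[OF finite_latents])
       (auto simp: path_weight_eq_chain_weight ind_def sum_distrib_right intro!: sum.cong)
  also have "\<dots> = (\<Sum>x\<in>UNIV. \<Sum>y\<in>UNIV. \<Sum>e\<in>UNIV. if x = q \<and> e = b then F x * \<kappa> t x y e * B y else 0)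
       * transition_factor P lo hi ss as"
    unfolding sum_chain_weight_mult_step[OF assms(1,2)] F_def B_def
    by (intro arg_cong2[where f=times] sum.cong refl) (simp add: ind_def)
  also have "(\<Sum>x\<in>UNIV. \<Sum>y\<in>UNIV. \<Sum>e\<in>UNIV. if x = q \<and> e = b then F x * \<kappa> t x y e * B y else 0)
      = (\<Sum>y\<in>UNIV. \<Sum>x\<in>UNIV. \<Sum>e\<in>UNIV. if x = q \<and> e = b then F x * \<kappa> t x y e * B y else 0)"
    by (rule sum.swap)
  finally show ?thesis
    by (simp add: sum_sum_if_eq_conj F_def B_def sum_distrib_left sum_distrib_right ac_simps)
qed

lemma obs_prob_eq_fwd:
  fixes h :: "'p \<Rightarrow> 'o::finite \<Rightarrow> 's \<Rightarrow> 'a \<Rightarrow> 'o \<Rightarrow> bool \<Rightarrow> real"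
    and \<theta> :: 'p and ss :: "int \<Rightarrow> 's" and as :: "int \<Rightarrow> 'a"
  assumes "lo - 1 \<le> hi"
  shows "obs_prob h P \<theta> init lo hi ss as
    = transition_factor P lo hi ss as * (\<Sum>y\<in>UNIV. fwd (obs_kernel h \<theta> ss as) init lo (nat (hi - lo + 1)) y)"
proof -
  have hi: "lo - 1 + int (nat (hi - lo + 1)) = hi" using assms by simp
  have "obs_prob h P \<theta> init lo hi ss as = (\<Sum>(os, bs)\<in>latents lo hi.
      chain_weight (obs_kernel h \<theta> ss as) init lo hi os bs * (\<lambda>_. 1) (os hi)) * transition_factor P lo hi ss as"
    unfolding obs_prob_def by (simp add: path_weight_eq_chain_weight sum_distrib_right case_prod_beta')
  then show ?thesis
    using sum_chain_weight_eq_fwd[of "obs_kernel h \<theta> ss as" init lo "nat (hi - lo + 1)" "\<lambda>_. 1"]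
    unfolding hi by simp
qed

lemma normalize_pair_mult_const:
  "C \<noteq> 0 \<Longrightarrow> normalize (\<lambda>(q, b). C * g q b) = normalize (\<lambda>(q, b). g q b)"
  using normalize_mult_const[of C "\<lambda>(q, b). g q b"] by (simp add: case_prod_unfold)

lemma gamma_mu_eq_smoothing:
  fixes h :: "'p \<Rightarrow> 'o::finite \<Rightarrow> 's \<Rightarrow> 'a \<Rightarrow> 'o \<Rightarrow> bool \<Rightarrow> real"
    and \<theta> :: 'p and ss :: "int \<Rightarrow> 's" and as :: "int \<Rightarrow> 'a"
  assumes "1 \<le> t" "t \<le> T" "transition_factor P 1 T ss as \<noteq> 0"
  defines "\<kappa> \<equiv> obs_kernel h \<theta> ss as"
  shows "gamma_mu h P \<theta> \<mu> T ss as t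
           = smoothing_ob \<kappa> t (fwd \<kappa> (\<mu> (ss 1)) 1 (nat (t - 1))) (bwd \<kappa> (\<lambda>_. 1) T (nat (T - t)))"
    and "gamma_mu_tilde h P \<theta> \<mu> T ss as t
           = smoothing_prev \<kappa> t (fwd \<kappa> (\<mu> (ss 1)) 1 (nat (t - 1))) (bwd \<kappa> (\<lambda>_. 1) T (nat (T - t)))"
  unfolding gamma_mu_def gamma_mu_tilde_def smoothing_ob_def smoothing_prev_def
    marg_ob_eq_fwd_bwd[OF assms(1,2)] marg_prev_eq_fwd_bwd[OF assms(1,2)] normalize_pair_mult_const[OF assms(3)] \<kappa>_def
  by simp_all

text \<open>The window \<open>1 - k .. T + k\<close> reduces to \<open>1 .. T\<close>, with the first and last \<open>k\<close> steps
  folded into the initial and terminal vectors.\<close>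
lemma gamma_k_eq_smoothing:
  fixes h :: "'p \<Rightarrow> 'o::finite \<Rightarrow> 's \<Rightarrow> 'a \<Rightarrow> 'o \<Rightarrow> bool \<Rightarrow> real"
    and \<theta> :: 'p and ss :: "int \<Rightarrow> 's" and as :: "int \<Rightarrow> 'a" and \<nu> :: "'o \<Rightarrow> 's \<Rightarrow> real" and k T :: int
  assumes "1 \<le> t" "t \<le> T" "1 \<le> k" "transition_factor P (1 - k) (T + k) ss as \<noteq> 0"
  defines "\<kappa> \<equiv> obs_kernel h \<theta> ss as"
  defines "u \<equiv> fwd \<kappa> (\<lambda>q. \<nu> q (ss (1 - k))) (1 - k) (nat k)"
    and "w \<equiv> bwd \<kappa> (\<lambda>_. 1) (T + k) (nat k)"
  shows "gamma_k h P \<theta> \<nu> k T ss as t = smoothing_ob \<kappa> t (fwd \<kappa> u 1 (nat (t - 1))) (bwd \<kappa> w T (nat (T - t)))"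
    and "gamma_k_tilde h P \<theta> \<nu> k T ss as t = smoothing_prev \<kappa> t (fwd \<kappa> u 1 (nat (t - 1))) (bwd \<kappa> w T (nat (T - t)))"
proof -
  have window: "1 - k \<le> t" "t \<le> T + k" using assms by auto
  have "nat (t - (1 - k)) = nat k + nat (t - 1)" and "nat (T + k - t) = nat k + nat (T - t)"
    using assms by simp_all
  then have fwd_eq: "fwd \<kappa> (\<lambda>q. \<nu> q (ss (1 - k))) (1 - k) (nat (t - (1 - k))) = fwd \<kappa> u 1 (nat (t - 1))"
    and bwd_eq: "bwd \<kappa> (\<lambda>_. 1) (T + k) (nat (T + k - t)) = bwd \<kappa> w T (nat (T - t))"
    using assms(3) by (simp_all add: fwd_add bwd_add u_def w_def)
  show "gamma_k h P \<theta> \<nu> k T ss as t = smoothing_ob \<kappa> t (fwd \<kappa> u 1 (nat (t - 1))) (bwd \<kappa> w T (nat (T - t)))"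
    unfolding gamma_k_def smoothing_ob_def marg_ob_eq_fwd_bwd[OF window] normalize_pair_mult_const[OF assms(4)]
    by (simp add: fwd_eq[unfolded \<kappa>_def] bwd_eq[unfolded \<kappa>_def] \<kappa>_def)
  show "gamma_k_tilde h P \<theta> \<nu> k T ss as t = smoothing_prev \<kappa> t (fwd \<kappa> u 1 (nat (t - 1))) (bwd \<kappa> w T (nat (T - t)))"
    unfolding gamma_k_tilde_def smoothing_prev_def marg_prev_eq_fwd_bwd[OF window] normalize_pair_mult_const[OF assms(4)]
    by (simp add: fwd_eq[unfolded \<kappa>_def] bwd_eq[unfolded \<kappa>_def] \<kappa>_def)
qed

lemma tv_normalize_fwd_step:
  fixes K :: "'x::finite \<Rightarrow> 'y::finite \<Rightarrow> real"
  assumes K_pos: "\<And>x y. 0 < K x y" and ratio: "\<And>x x' y. c * K x' y \<le> K x y" and "0 \<le> c"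
    and \<beta>_pos: "\<And>y. 0 < \<beta> y"
    and F_nonneg: "\<And>x. 0 \<le> F x" "\<And>x. 0 \<le> F' x" and "F z \<noteq> 0" "F' z' \<noteq> 0"
  shows "tv_dist (normalize (\<lambda>y. (\<Sum>x\<in>UNIV. F x * K x y) * \<beta> y)) (normalize (\<lambda>y. (\<Sum>x\<in>UNIV. F' x * K x y) * \<beta> y))
    \<le> (1 - c) * tv_dist (normalize (\<lambda>x. F x * (\<Sum>y\<in>UNIV. K x y * \<beta> y))) (normalize (\<lambda>x. F' x * (\<Sum>y\<in>UNIV. K x y * \<beta> y)))"
proof -
  obtain m where "(\<Sum>y\<in>UNIV. m y) = 1" "\<forall>x y. c * (\<Sum>y'\<in>UNIV. K x y' * \<beta> y') * m y \<le> K x y * \<beta> y"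
    using exists_row_minorant[of K c \<beta>, OF K_pos ratio \<open>0 \<le> c\<close> \<beta>_pos] by blast
  then have "tv_dist (normalize (\<lambda>y. \<Sum>x\<in>UNIV. F x * (K x y * \<beta> y))) (normalize (\<lambda>y. \<Sum>x\<in>UNIV. F' x * (K x y * \<beta> y)))
    \<le> (1 - c) * tv_dist (normalize (\<lambda>x. F x * (\<Sum>y\<in>UNIV. K x y * \<beta> y))) (normalize (\<lambda>x. F' x * (\<Sum>y\<in>UNIV. K x y * \<beta> y)))"
    by (intro tv_dist_normalize_mix_contract[where m=m]) (use assms in \<open>auto intro!: sum_pos mult_pos_pos\<close>)
  then show ?thesis by (simp add: sum_distrib_right mult.assoc)
qed

lemma tv_normalize_bwd_step:
  fixes K :: "'x::finite \<Rightarrow> 'y::finite \<Rightarrow> real"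
  assumes K_pos: "\<And>x y. 0 < K x y" and ratio: "\<And>x x' y. c * K x' y \<le> K x y"
    and F_nonneg: "\<And>x. 0 \<le> F x" and "F z \<noteq> 0"
    and H_pos: "\<And>y. 0 < H y" "\<And>y. 0 < H' y"
  shows "tv_dist (normalize (\<lambda>x. F x * (\<Sum>y\<in>UNIV. K x y * H y))) (normalize (\<lambda>x. F x * (\<Sum>y\<in>UNIV. K x y * H' y)))
    \<le> (1 - c) * tv_dist (normalize (\<lambda>y. (\<Sum>x\<in>UNIV. F x * K x y) * H y)) (normalize (\<lambda>y. (\<Sum>x\<in>UNIV. F x * K x y) * H' y))"
proof -
  obtain m where "(\<Sum>x\<in>UNIV. m x) = 1" "\<forall>y x. c * (\<Sum>x'\<in>UNIV. F x' * K x' y) * m x \<le> F x * K x y"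
    using exists_col_minorant[of c K F z, OF ratio F_nonneg \<open>F z \<noteq> 0\<close>] by blast
  moreover have "0 < (\<Sum>x\<in>UNIV. F x * K x y)" for y
    by (rule sum_mult_pos_if_nonzero) (use assms in auto)
  moreover have "H undefined \<noteq> 0" "H' undefined \<noteq> 0"
    using H_pos(1)[of undefined] H_pos(2)[of undefined] by auto
  ultimately have "tv_dist (normalize (\<lambda>x. \<Sum>y\<in>UNIV. H y * (F x * K x y))) (normalize (\<lambda>x. \<Sum>y\<in>UNIV. H' y * (F x * K x y)))
    \<le> (1 - c) * tv_dist (normalize (\<lambda>y. H y * (\<Sum>x\<in>UNIV. F x * K x y))) (normalize (\<lambda>y. H' y * (\<Sum>x\<in>UNIV. F x * K x y)))"
    by (intro tv_dist_normalize_mix_contract[where A="\<lambda>y x. F x * K x y" and m=m and xu=undefined and xv=undefined])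
       (use H_pos in \<open>auto intro: less_imp_le\<close>)
  then show ?thesis by (simp add: sum_distrib_left ac_simps)
qed

lemma tv_fwd_contract:
  fixes \<kappa> :: "int \<Rightarrow> 'o::finite \<Rightarrow> 'o \<Rightarrow> bool \<Rightarrow> real"
  assumes \<kappa>: "minorized \<kappa> c" and G_nonneg: "\<And>x. 0 \<le> G x" "\<And>x. 0 \<le> G' x"
    and G_nonzero: "G z \<noteq> 0" "G' z' \<noteq> 0" and H_pos: "\<And>x. 0 < H x"
  shows "m \<le> M \<Longrightarrow> tv_dist (normalize (\<lambda>x. fwd \<kappa> G (a + 1) m x * bwd \<kappa> H (a + int M) (M - m) x))
                       (normalize (\<lambda>x. fwd \<kappa> G' (a + 1) m x * bwd \<kappa> H (a + int M) (M - m) x))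
     \<le> (1 - c) ^ m * tv_dist (normalize (\<lambda>x. G x * bwd \<kappa> H (a + int M) M x)) (normalize (\<lambda>x. G' x * bwd \<kappa> H (a + int M) M x))"
proof (induction m)
  case (Suc m)
  define K where "K = option_kernel \<kappa> (a + 1 + int m)"
  define \<beta> where "\<beta> = bwd \<kappa> H (a + int M) (M - Suc m)"
  have bwd_Suc: "bwd \<kappa> H (a + int M) (M - m) = (\<lambda>x. \<Sum>y\<in>UNIV. K x y * \<beta> y)"
    using Suc.prems bwd_last[of "M - m" \<kappa> H "a + int M"] by (simp add: K_def \<beta>_def Suc_diff_Suc algebra_simps)
  obtain x x' where "fwd \<kappa> G (a + 1) m x \<noteq> 0" "fwd \<kappa> G' (a + 1) m x' \<noteq> 0"
    using fwd_nonzero[where u=G, OF \<kappa> G_nonneg(1) G_nonzero(1)] fwd_nonzero[where u=G', OF \<kappa> G_nonneg(2) G_nonzero(2)]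
    by metis
  then have "tv_dist (normalize (\<lambda>y. (\<Sum>x\<in>UNIV. fwd \<kappa> G (a + 1) m x * K x y) * \<beta> y))
                     (normalize (\<lambda>y. (\<Sum>x\<in>UNIV. fwd \<kappa> G' (a + 1) m x * K x y) * \<beta> y))
    \<le> (1 - c) * tv_dist (normalize (\<lambda>x. fwd \<kappa> G (a + 1) m x * (\<Sum>y\<in>UNIV. K x y * \<beta> y)))
                        (normalize (\<lambda>x. fwd \<kappa> G' (a + 1) m x * (\<Sum>y\<in>UNIV. K x y * \<beta> y)))"
    by (intro tv_normalize_fwd_step)
       (use option_kernel_pos[OF \<kappa>] option_kernel_ratio[OF \<kappa>] minorized_const_nonneg[OF \<kappa>] bwd_pos[OF \<kappa> H_pos]
          fwd_nonneg[OF \<kappa> G_nonneg(1)] fwd_nonneg[OF \<kappa> G_nonneg(2)] in \<open>auto simp: K_def \<beta>_def\<close>)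
  then have "tv_dist (normalize (\<lambda>y. fwd \<kappa> G (a + 1) (Suc m) y * \<beta> y)) (normalize (\<lambda>y. fwd \<kappa> G' (a + 1) (Suc m) y * \<beta> y))
    \<le> (1 - c) * tv_dist (normalize (\<lambda>x. fwd \<kappa> G (a + 1) m x * bwd \<kappa> H (a + int M) (M - m) x))
                        (normalize (\<lambda>x. fwd \<kappa> G' (a + 1) m x * bwd \<kappa> H (a + int M) (M - m) x))"
    unfolding bwd_Suc by (simp add: K_def)
  also have "\<dots> \<le> (1 - c) * ((1 - c) ^ m * tv_dist (normalize (\<lambda>x. G x * bwd \<kappa> H (a + int M) M x))
                                                  (normalize (\<lambda>x. G' x * bwd \<kappa> H (a + int M) M x)))"
    using Suc minorized_le_1[OF \<kappa>] by (intro mult_left_mono) auto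
  finally show ?case by (simp add: \<beta>_def)
qed simp

lemma tv_bwd_contract:
  fixes \<kappa> :: "int \<Rightarrow> 'o::finite \<Rightarrow> 'o \<Rightarrow> bool \<Rightarrow> real"
  assumes \<kappa>: "minorized \<kappa> c" and F_nonneg: "\<And>x. 0 \<le> F x" and F_nonzero: "F z \<noteq> 0"
    and H_pos: "\<And>x. 0 < H x" "\<And>x. 0 < H' x"
  shows "m \<le> M \<Longrightarrow> tv_dist (normalize (\<lambda>x. fwd \<kappa> F (a + 1) m x * bwd \<kappa> H (a + int M) (M - m) x))
                       (normalize (\<lambda>x. fwd \<kappa> F (a + 1) m x * bwd \<kappa> H' (a + int M) (M - m) x))
     \<le> (1 - c) ^ (M - m) * tv_dist (normalize (\<lambda>x. fwd \<kappa> F (a + 1) M x * H x)) (normalize (\<lambda>x. fwd \<kappa> F (a + 1) M x * H' x))"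
proof (induction "M - m" arbitrary: m)
  case (Suc d)
  define K where "K = option_kernel \<kappa> (a + 1 + int m)"
  define \<phi> where "\<phi> = fwd \<kappa> F (a + 1) m"
  have bwd_Suc: "bwd \<kappa> H0 (a + int M) (M - m) = (\<lambda>x. \<Sum>y\<in>UNIV. K x y * bwd \<kappa> H0 (a + int M) (M - Suc m) y)" for H0
    using Suc.hyps(2) bwd_last[of "M - m" \<kappa> H0 "a + int M"] by (simp add: K_def Suc_diff_Suc algebra_simps)
  obtain x where "\<phi> x \<noteq> 0" using fwd_nonzero[where u=F, OF \<kappa> F_nonneg F_nonzero] \<phi>_def by metis
  then have "tv_dist (normalize (\<lambda>x. \<phi> x * (\<Sum>y\<in>UNIV. K x y * bwd \<kappa> H (a + int M) (M - Suc m) y)))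
                     (normalize (\<lambda>x. \<phi> x * (\<Sum>y\<in>UNIV. K x y * bwd \<kappa> H' (a + int M) (M - Suc m) y)))
    \<le> (1 - c) * tv_dist (normalize (\<lambda>y. (\<Sum>x\<in>UNIV. \<phi> x * K x y) * bwd \<kappa> H (a + int M) (M - Suc m) y))
                        (normalize (\<lambda>y. (\<Sum>x\<in>UNIV. \<phi> x * K x y) * bwd \<kappa> H' (a + int M) (M - Suc m) y))"
    by (intro tv_normalize_bwd_step)
       (use option_kernel_pos[OF \<kappa>] option_kernel_ratio[OF \<kappa>] bwd_pos[OF \<kappa> H_pos(1)] bwd_pos[OF \<kappa> H_pos(2)]
          fwd_nonneg[OF \<kappa> F_nonneg] in \<open>auto simp: K_def \<phi>_def\<close>)
  then have "tv_dist (normalize (\<lambda>x. \<phi> x * bwd \<kappa> H (a + int M) (M - m) x)) (normalize (\<lambda>x. \<phi> x * bwd \<kappa> H' (a + int M) (M - m) x))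
    \<le> (1 - c) * tv_dist (normalize (\<lambda>y. fwd \<kappa> F (a + 1) (Suc m) y * bwd \<kappa> H (a + int M) (M - Suc m) y))
                        (normalize (\<lambda>y. fwd \<kappa> F (a + 1) (Suc m) y * bwd \<kappa> H' (a + int M) (M - Suc m) y))"
    unfolding bwd_Suc by (simp add: K_def \<phi>_def)
  also have "\<dots> \<le> (1 - c) * ((1 - c) ^ d * tv_dist (normalize (\<lambda>x. fwd \<kappa> F (a + 1) M x * H x))
                                                  (normalize (\<lambda>x. fwd \<kappa> F (a + 1) M x * H' x)))"
  proof -
    have d: "d = M - Suc m" "Suc m \<le> M" using Suc.hyps(2) by arith+
    show ?thesis
      using Suc.hyps(1)[OF d] minorized_le_1[OF \<kappa>] by (intro mult_left_mono) (simp_all add: d(1))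
  qed
  finally show ?case by (simp add: \<phi>_def Suc.hyps(2)[symmetric])
qed simp

lemma tv_smoothing_ob_change_fwd:
  fixes \<kappa> :: "int \<Rightarrow> 'o::finite \<Rightarrow> 'o \<Rightarrow> bool \<Rightarrow> real"
  assumes \<kappa>: "minorized \<kappa> c" and "\<And>x. 0 \<le> F x" "\<And>x. 0 \<le> F' x" "F z \<noteq> 0" "F' z' \<noteq> 0"
    and B_pos: "\<And>y. 0 < B y"
  shows "tv_dist (smoothing_ob \<kappa> t F B) (smoothing_ob \<kappa> t F' B)
    \<le> (1 - c) * tv_dist (normalize (\<lambda>x. F x * (\<Sum>y\<in>UNIV. option_kernel \<kappa> t x y * B y)))
                        (normalize (\<lambda>x. F' x * (\<Sum>y\<in>UNIV. option_kernel \<kappa> t x y * B y)))"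
proof -
  have "tv_dist (normalize (\<lambda>qb. (\<Sum>x\<in>UNIV. F x * \<kappa> t x (fst qb) (snd qb)) * B (fst qb)))
                (normalize (\<lambda>qb. (\<Sum>x\<in>UNIV. F' x * \<kappa> t x (fst qb) (snd qb)) * B (fst qb)))
    \<le> (1 - c) * tv_dist (normalize (\<lambda>x. F x * (\<Sum>qb\<in>UNIV. \<kappa> t x (fst qb) (snd qb) * B (fst qb))))
                        (normalize (\<lambda>x. F' x * (\<Sum>qb\<in>UNIV. \<kappa> t x (fst qb) (snd qb) * B (fst qb))))"
    by (intro tv_normalize_fwd_step)
       (use assms minorized_pos[OF \<kappa>] minorized_ratio[OF \<kappa>] minorized_const_nonneg[OF \<kappa>] in auto)
  then show ?thesis
    by (simp add: smoothing_ob_def sum_UNIV_prod option_kernel_def sum_distrib_right case_prod_unfold)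
qed

lemma tv_smoothing_prev_change_fwd:
  fixes \<kappa> :: "int \<Rightarrow> 'o::finite \<Rightarrow> 'o \<Rightarrow> bool \<Rightarrow> real"
  assumes \<kappa>: "minorized \<kappa> c" and "\<And>x. 0 \<le> F x" "\<And>x. 0 \<le> F' x" "F z \<noteq> 0" "F' z' \<noteq> 0"
    and B_pos: "\<And>y. 0 < B y"
  shows "tv_dist (smoothing_prev \<kappa> t F B) (smoothing_prev \<kappa> t F' B)
    \<le> tv_dist (normalize (\<lambda>x. F x * (\<Sum>y\<in>UNIV. option_kernel \<kappa> t x y * B y)))
              (normalize (\<lambda>x. F' x * (\<Sum>y\<in>UNIV. option_kernel \<kappa> t x y * B y)))"
proof -
  define A where "A x (qb :: 'o \<times> bool) = (if x = fst qb then \<Sum>y\<in>UNIV. \<kappa> t x y (snd qb) * B y else 0)" for x qb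
  have A_sum: "(\<Sum>qb\<in>UNIV. A x qb) = (\<Sum>y\<in>UNIV. option_kernel \<kappa> t x y * B y)" for x
  proof -
    have "(\<Sum>qb\<in>UNIV. A x qb) = (\<Sum>b\<in>UNIV. \<Sum>y\<in>UNIV. \<kappa> t x y b * B y)"
      unfolding sum_UNIV_prod A_def by (subst sum.swap) (simp add: sum.delta')
    also have "\<dots> = (\<Sum>y\<in>UNIV. option_kernel \<kappa> t x y * B y)"
      by (subst sum.swap) (simp add: option_kernel_def sum_distrib_right)
    finally show ?thesis .
  qed
  have A_nonneg: "0 \<le> A x qb" for x qb
    using less_imp_le[OF B_pos] less_imp_le[OF minorized_pos[OF \<kappa>]]
    by (auto simp: A_def intro!: sum_nonneg mult_nonneg_nonneg)
  have row_pos: "0 < (\<Sum>qb\<in>UNIV. A x qb)" for x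
    unfolding A_sum using option_kernel_pos[OF \<kappa>] B_pos by (intro sum_pos mult_pos_pos) auto
  have "tv_dist (normalize (\<lambda>qb. \<Sum>x\<in>UNIV. F x * A x qb)) (normalize (\<lambda>qb. \<Sum>x\<in>UNIV. F' x * A x qb))
     \<le> tv_dist (normalize (\<lambda>x. F x * (\<Sum>qb\<in>UNIV. A x qb))) (normalize (\<lambda>x. F' x * (\<Sum>qb\<in>UNIV. A x qb)))"
    using A_nonneg row_pos assms(2-5) by (intro tv_dist_normalize_mix_le[where xu=z and xv=z']) auto
  moreover have "(\<lambda>qb. \<Sum>x\<in>UNIV. G x * A x qb) = (\<lambda>(q, b). G q * (\<Sum>y\<in>UNIV. \<kappa> t q y b * B y))" for G
    by (rule ext) (auto simp: A_def if_distrib sum.delta cong: if_cong split: prod.split)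
  ultimately show ?thesis unfolding A_sum smoothing_prev_def by simp
qed

lemma tv_smoothing_ob_change_bwd:
  fixes \<kappa> :: "int \<Rightarrow> 'o::finite \<Rightarrow> 'o \<Rightarrow> bool \<Rightarrow> real"
  assumes \<kappa>: "minorized \<kappa> c" and F_nonneg: "\<And>x. 0 \<le> F x" and "F z \<noteq> 0"
    and B_pos: "\<And>y. 0 < B y" "\<And>y. 0 < B' y"
  shows "tv_dist (smoothing_ob \<kappa> t F B) (smoothing_ob \<kappa> t F B')
    \<le> tv_dist (normalize (\<lambda>y. (\<Sum>x\<in>UNIV. F x * option_kernel \<kappa> t x y) * B y))
              (normalize (\<lambda>y. (\<Sum>x\<in>UNIV. F x * option_kernel \<kappa> t x y) * B' y))"
proof -
  define A where "A y (qb :: 'o \<times> bool) = (if y = fst qb then \<Sum>x\<in>UNIV. F x * \<kappa> t x y (snd qb) else 0)" for y qb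
  have A_sum: "(\<Sum>qb\<in>UNIV. A y qb) = (\<Sum>x\<in>UNIV. F x * option_kernel \<kappa> t x y)" for y
  proof -
    have "(\<Sum>qb\<in>UNIV. A y qb) = (\<Sum>b\<in>UNIV. \<Sum>x\<in>UNIV. F x * \<kappa> t x y b)"
      unfolding sum_UNIV_prod A_def by (subst sum.swap) (simp add: sum.delta')
    also have "\<dots> = (\<Sum>x\<in>UNIV. F x * option_kernel \<kappa> t x y)"
      by (subst sum.swap) (simp add: option_kernel_def sum_distrib_left)
    finally show ?thesis .
  qed
  have A_nonneg: "0 \<le> A y qb" for y qb
    using F_nonneg less_imp_le[OF minorized_pos[OF \<kappa>]] by (auto simp: A_def intro!: sum_nonneg mult_nonneg_nonneg)
  have row_pos: "0 < (\<Sum>qb\<in>UNIV. A y qb)" for y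
    unfolding A_sum by (rule sum_mult_pos_if_nonzero) (use assms option_kernel_pos[OF \<kappa>] in auto)
  have "tv_dist (normalize (\<lambda>qb. \<Sum>y\<in>UNIV. B y * A y qb)) (normalize (\<lambda>qb. \<Sum>y\<in>UNIV. B' y * A y qb))
     \<le> tv_dist (normalize (\<lambda>y. B y * (\<Sum>qb\<in>UNIV. A y qb))) (normalize (\<lambda>y. B' y * (\<Sum>qb\<in>UNIV. A y qb)))"
    using A_nonneg row_pos B_pos(1)[of z] B_pos(2)[of z] less_imp_le[OF B_pos(1)] less_imp_le[OF B_pos(2)]
    by (intro tv_dist_normalize_mix_le[where xu=z and xv=z]) auto
  moreover have "(\<lambda>qb. \<Sum>y\<in>UNIV. G y * A y qb) = (\<lambda>(q, b). (\<Sum>x\<in>UNIV. F x * \<kappa> t x q b) * G q)" for G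
    by (rule ext) (auto simp: A_def if_distrib sum.delta mult.commute cong: if_cong split: prod.split)
  ultimately show ?thesis unfolding A_sum smoothing_ob_def by (simp add: mult.commute)
qed

lemma tv_smoothing_prev_change_bwd:
  fixes \<kappa> :: "int \<Rightarrow> 'o::finite \<Rightarrow> 'o \<Rightarrow> bool \<Rightarrow> real"
  assumes \<kappa>: "minorized \<kappa> c" and F_nonneg: "\<And>x. 0 \<le> F x" and "F z \<noteq> 0"
    and B_pos: "\<And>y. 0 < B y" "\<And>y. 0 < B' y"
  shows "tv_dist (smoothing_prev \<kappa> t F B) (smoothing_prev \<kappa> t F B')
    \<le> tv_dist (normalize (\<lambda>y. (\<Sum>x\<in>UNIV. F x * option_kernel \<kappa> t x y) * B y))
              (normalize (\<lambda>y. (\<Sum>x\<in>UNIV. F x * option_kernel \<kappa> t x y) * B' y))"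
proof -
  define A where "A y (qb :: 'o \<times> bool) = F (fst qb) * \<kappa> t (fst qb) y (snd qb)" for y qb
  have A_sum: "(\<Sum>qb\<in>UNIV. A y qb) = (\<Sum>x\<in>UNIV. F x * option_kernel \<kappa> t x y)" for y
    by (simp add: sum_UNIV_prod A_def option_kernel_def sum_distrib_left)
  have A_nonneg: "0 \<le> A y qb" for y qb
    using F_nonneg less_imp_le[OF minorized_pos[OF \<kappa>]] by (auto simp: A_def intro!: sum_nonneg mult_nonneg_nonneg)
  have row_pos: "0 < (\<Sum>qb\<in>UNIV. A y qb)" for y
    unfolding A_sum by (rule sum_mult_pos_if_nonzero) (use assms option_kernel_pos[OF \<kappa>] in auto)
  have "tv_dist (normalize (\<lambda>qb. \<Sum>y\<in>UNIV. B y * A y qb)) (normalize (\<lambda>qb. \<Sum>y\<in>UNIV. B' y * A y qb))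
     \<le> tv_dist (normalize (\<lambda>y. B y * (\<Sum>qb\<in>UNIV. A y qb))) (normalize (\<lambda>y. B' y * (\<Sum>qb\<in>UNIV. A y qb)))"
    using A_nonneg row_pos B_pos(1)[of z] B_pos(2)[of z] less_imp_le[OF B_pos(1)] less_imp_le[OF B_pos(2)]
    by (intro tv_dist_normalize_mix_le[where xu=z and xv=z]) auto
  moreover have "(\<lambda>qb. \<Sum>y\<in>UNIV. G y * A y qb) = (\<lambda>(q, b). F q * (\<Sum>y\<in>UNIV. \<kappa> t q y b * G y))" for G
    by (rule ext) (auto simp: A_def sum_distrib_left ac_simps split: prod.split)
  ultimately show ?thesis unfolding A_sum smoothing_prev_def by (simp add: mult.commute)
qed

lemma tv_normalize_fwd_rel_perturb:
  fixes K1 K2 :: "'x::finite \<Rightarrow> 'y::finite \<Rightarrow> real"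
  assumes K_pos: "\<And>x y. 0 < K1 x y" "\<And>x y. 0 < K2 x y"
    and close: "\<And>x y. \<bar>K1 x y - K2 x y\<bar> \<le> r * K1 x y"
    and F_nonneg: "\<And>x. 0 \<le> F x" and F_nonzero: "F z \<noteq> 0" and \<beta>_pos: "\<And>y. 0 < \<beta> y"
  shows "tv_dist (normalize (\<lambda>y. (\<Sum>x\<in>UNIV. F x * K1 x y) * \<beta> y)) (normalize (\<lambda>y. (\<Sum>x\<in>UNIV. F x * K2 x y) * \<beta> y)) \<le> r"
proof -
  have pos: "0 < (\<Sum>y\<in>UNIV. \<Sum>x\<in>UNIV. (F x * \<beta> y) * K x y)" if "\<And>x y. 0 < K x y" for K :: "'x \<Rightarrow> 'y \<Rightarrow> real"
  proof -
    have "0 < (\<Sum>x\<in>UNIV. F x * (\<Sum>y\<in>UNIV. K x y * \<beta> y))"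
      by (rule sum_mult_pos_if_nonzero[of F z, OF F_nonneg F_nonzero]) (use that \<beta>_pos in \<open>auto intro!: sum_pos\<close>)
    then show ?thesis by (subst sum.swap) (simp add: sum_distrib_left ac_simps)
  qed
  have eq: "(\<lambda>y. (\<Sum>x\<in>UNIV. F x * K x y) * \<beta> y) = (\<lambda>y. \<Sum>x\<in>UNIV. (F x * \<beta> y) * K x y)" for K
    by (simp add: sum_distrib_left sum_distrib_right ac_simps)
  show ?thesis
    unfolding eq by (rule tv_dist_normalize_sum_rel_perturb)
       (use F_nonneg \<beta>_pos K_pos close pos[OF K_pos(1)] pos[OF K_pos(2)] in \<open>auto intro: mult_nonneg_nonneg less_imp_le\<close>)
qed

lemma tv_normalize_bwd_rel_perturb:
  fixes K1 K2 :: "'x::finite \<Rightarrow> 'y::finite \<Rightarrow> real"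
  assumes K_pos: "\<And>x y. 0 < K1 x y" "\<And>x y. 0 < K2 x y"
    and close: "\<And>x y. \<bar>K1 x y - K2 x y\<bar> \<le> r * K1 x y"
    and F_nonneg: "\<And>x. 0 \<le> F x" and F_nonzero: "F z \<noteq> 0" and \<beta>_pos: "\<And>y. 0 < \<beta> y"
  shows "tv_dist (normalize (\<lambda>x. F x * (\<Sum>y\<in>UNIV. K1 x y * \<beta> y))) (normalize (\<lambda>x. F x * (\<Sum>y\<in>UNIV. K2 x y * \<beta> y))) \<le> r"
proof -
  have pos: "0 < (\<Sum>x\<in>UNIV. \<Sum>y\<in>UNIV. (F x * \<beta> y) * K x y)" if "\<And>x y. 0 < K x y" for K :: "'x \<Rightarrow> 'y \<Rightarrow> real"
  proof -
    have "0 < (\<Sum>x\<in>UNIV. F x * (\<Sum>y\<in>UNIV. K x y * \<beta> y))"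
      by (rule sum_mult_pos_if_nonzero[of F z, OF F_nonneg F_nonzero]) (use that \<beta>_pos in \<open>auto intro!: sum_pos\<close>)
    then show ?thesis by (simp add: sum_distrib_left ac_simps)
  qed
  have "tv_dist (normalize (\<lambda>x. \<Sum>y\<in>UNIV. (F x * \<beta> y) * K1 x y)) (normalize (\<lambda>x. \<Sum>y\<in>UNIV. (F x * \<beta> y) * K2 x y)) \<le> r"
    by (rule tv_dist_normalize_sum_rel_perturb)
       (use F_nonneg \<beta>_pos K_pos close pos[OF K_pos(1)] pos[OF K_pos(2)] in \<open>auto intro: mult_nonneg_nonneg less_imp_le\<close>)
  then show ?thesis by (simp add: sum_distrib_left ac_simps)
qed

lemma tv_smoothing_ob_rel_perturb:
  fixes \<kappa>1 \<kappa>2 :: "int \<Rightarrow> 'o::finite \<Rightarrow> 'o \<Rightarrow> bool \<Rightarrow> real"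
  assumes \<kappa>_pos: "\<And>x y e. 0 < \<kappa>1 t x y e" "\<And>x y e. 0 < \<kappa>2 t x y e"
    and close: "\<And>x y e. \<bar>\<kappa>1 t x y e - \<kappa>2 t x y e\<bar> \<le> r * \<kappa>1 t x y e"
    and F_nonneg: "\<And>x. 0 \<le> F x" and F_nonzero: "F z \<noteq> 0" and B_pos: "\<And>y. 0 < B y"
  shows "tv_dist (smoothing_ob \<kappa>1 t F B) (smoothing_ob \<kappa>2 t F B) \<le> r"
proof -
  have eq: "smoothing_ob \<kappa> t F B = normalize (\<lambda>qb. \<Sum>x\<in>UNIV. (F x * B (fst qb)) * \<kappa> t x (fst qb) (snd qb))"
    for \<kappa> :: "int \<Rightarrow> 'o \<Rightarrow> 'o \<Rightarrow> bool \<Rightarrow> real"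
    unfolding smoothing_ob_def by (simp add: sum_distrib_left sum_distrib_right case_prod_unfold ac_simps)
  have pos: "0 < (\<Sum>qb\<in>UNIV. \<Sum>x\<in>UNIV. (F x * B (fst qb)) * \<kappa> t x (fst qb) (snd qb))"
    if "\<And>x y e. 0 < \<kappa> t x y e" for \<kappa> :: "int \<Rightarrow> 'o \<Rightarrow> 'o \<Rightarrow> bool \<Rightarrow> real"
  proof -
    have "0 < (\<Sum>x\<in>UNIV. F x * (\<Sum>qb\<in>UNIV. B (fst qb) * \<kappa> t x (fst qb) (snd qb)))"
      by (rule sum_mult_pos_if_nonzero[of F z, OF F_nonneg F_nonzero]) (use that B_pos in \<open>auto intro!: sum_pos\<close>)
    then show ?thesis by (subst sum.swap) (simp add: sum_distrib_left ac_simps)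
  qed
  show ?thesis
    unfolding eq by (rule tv_dist_normalize_sum_rel_perturb)
      (use F_nonneg B_pos \<kappa>_pos close pos[of \<kappa>1, OF \<kappa>_pos(1)] pos[of \<kappa>2, OF \<kappa>_pos(2)] in \<open>auto intro: mult_nonneg_nonneg less_imp_le\<close>)
qed

lemma tv_smoothing_prev_rel_perturb:
  fixes \<kappa>1 \<kappa>2 :: "int \<Rightarrow> 'o::finite \<Rightarrow> 'o \<Rightarrow> bool \<Rightarrow> real"
  assumes \<kappa>_pos: "\<And>x y e. 0 < \<kappa>1 t x y e" "\<And>x y e. 0 < \<kappa>2 t x y e"
    and close: "\<And>x y e. \<bar>\<kappa>1 t x y e - \<kappa>2 t x y e\<bar> \<le> r * \<kappa>1 t x y e"
    and F_nonneg: "\<And>x. 0 \<le> F x" and F_nonzero: "F z \<noteq> 0" and B_pos: "\<And>y. 0 < B y"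
  shows "tv_dist (smoothing_prev \<kappa>1 t F B) (smoothing_prev \<kappa>2 t F B) \<le> r"
proof -
  have eq: "smoothing_prev \<kappa> t F B = normalize (\<lambda>qb. \<Sum>y\<in>UNIV. (F (fst qb) * B y) * \<kappa> t (fst qb) y (snd qb))"
    for \<kappa> :: "int \<Rightarrow> 'o \<Rightarrow> 'o \<Rightarrow> bool \<Rightarrow> real"
    unfolding smoothing_prev_def by (simp add: sum_distrib_left case_prod_unfold ac_simps)
  have pos: "0 < (\<Sum>qb\<in>UNIV. \<Sum>y\<in>UNIV. (F (fst qb) * B y) * \<kappa> t (fst qb) y (snd qb))"
    if "\<And>x y e. 0 < \<kappa> t x y e" for \<kappa> :: "int \<Rightarrow> 'o \<Rightarrow> 'o \<Rightarrow> bool \<Rightarrow> real"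
  proof -
    have "0 < (\<Sum>q\<in>UNIV. F q * (\<Sum>b\<in>UNIV. \<Sum>y\<in>UNIV. B y * \<kappa> t q y b))"
      by (rule sum_mult_pos_if_nonzero[of F z, OF F_nonneg F_nonzero]) (use that B_pos in \<open>auto intro!: sum_pos\<close>)
    then show ?thesis by (simp add: sum_UNIV_prod sum_distrib_left ac_simps)
  qed
  show ?thesis
    unfolding eq by (rule tv_dist_normalize_sum_rel_perturb)
      (use F_nonneg B_pos \<kappa>_pos close pos[of \<kappa>1, OF \<kappa>_pos(1)] pos[of \<kappa>2, OF \<kappa>_pos(2)] in \<open>auto intro: mult_nonneg_nonneg less_imp_le\<close>)
qed

section \<open>Changing the kernel at a single time step\<close>

context
  fixes \<kappa>1 \<kappa>2 :: "int \<Rightarrow> 'o::finite \<Rightarrow> 'o \<Rightarrow> bool \<Rightarrow> real" and c r :: real and u w :: "'o \<Rightarrow> real"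
    and N i :: nat and z :: 'o
  assumes minorized: "minorized \<kappa>1 c" "minorized \<kappa>2 c"
    and same: "\<And>s. s \<noteq> int i \<Longrightarrow> \<kappa>1 s = \<kappa>2 s"
    and i_range: "1 \<le> i" "i \<le> N"
    and close: "\<And>x y e. \<bar>\<kappa>1 (int i) x y e - \<kappa>2 (int i) x y e\<bar> \<le> r * \<kappa>1 (int i) x y e"
    and u_nonneg: "\<And>x. 0 \<le> u x" and u_nonzero: "u z \<noteq> 0" and w_pos: "\<And>x. 0 < w x"
begin

lemma option_kernel_close:
  "\<bar>option_kernel \<kappa>1 (int i) x y - option_kernel \<kappa>2 (int i) x y\<bar> \<le> r * option_kernel \<kappa>1 (int i) x y"
proof -
  have "\<bar>option_kernel \<kappa>1 (int i) x y - option_kernel \<kappa>2 (int i) x y\<bar> \<le> (\<Sum>e\<in>UNIV. \<bar>\<kappa>1 (int i) x y e - \<kappa>2 (int i) x y e\<bar>)"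
    using sum_abs[of "\<lambda>e. \<kappa>1 (int i) x y e - \<kappa>2 (int i) x y e" UNIV] by (simp add: option_kernel_def sum_subtractf)
  also have "\<dots> \<le> (\<Sum>e\<in>UNIV. r * \<kappa>1 (int i) x y e)" by (rule sum_mono) (rule close)
  finally show ?thesis by (simp add: option_kernel_def sum_distrib_left)
qed

lemma fwd_before_change: "n < i \<Longrightarrow> fwd \<kappa>2 u 1 n = fwd \<kappa>1 u 1 n"
  by (rule fwd_cong) (use same in auto)

lemma bwd_after_change: "i \<le> N - n \<Longrightarrow> bwd \<kappa>2 w (int N) n = bwd \<kappa>1 w (int N) n"
  by (rule bwd_cong) (use same i_range in auto)

lemma nonzero_fwd_before_change: "\<exists>x. fwd \<kappa>1 u 1 (i - 1) x \<noteq> 0"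
  using fwd_nonzero[where u=u, OF minorized(1) u_nonneg u_nonzero] by blast

lemma tv_fwd_after_change:
  assumes "i < t" "t \<le> N"
  shows "tv_dist (normalize (\<lambda>x. fwd \<kappa>1 u 1 (t - 1) x * bwd \<kappa>2 w (int N) (N - t + 1) x))
                 (normalize (\<lambda>x. fwd \<kappa>2 u 1 (t - 1) x * bwd \<kappa>2 w (int N) (N - t + 1) x))
     \<le> r * (1 - c) ^ (t - 1 - i)"
proof -
  define G where "G \<kappa> = fwd \<kappa> u 1 i" for \<kappa>
  define \<beta> where "\<beta> = bwd \<kappa>2 w (int N) (N - i)"
  have split: "fwd \<kappa> u 1 (t - 1) = fwd \<kappa>2 (G \<kappa>) (int i + 1) (t - 1 - i)" if "\<kappa> = \<kappa>1 \<or> \<kappa> = \<kappa>2" for \<kappa>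
  proof -
    have "fwd \<kappa> u 1 (t - 1) = fwd \<kappa> (G \<kappa>) (int i + 1) (t - 1 - i)"
      using fwd_add[of \<kappa> u 1 i "t - 1 - i"] assms by (simp add: G_def add.commute)
    also have "\<dots> = fwd \<kappa>2 (G \<kappa>) (int i + 1) (t - 1 - i)"
      by (rule fwd_cong) (use same that in auto)
    finally show ?thesis .
  qed
  obtain z1 z2 where "G \<kappa>1 z1 \<noteq> 0" "G \<kappa>2 z2 \<noteq> 0"
    using fwd_nonzero[where u=u, OF minorized(1) u_nonneg u_nonzero] fwd_nonzero[where u=u, OF minorized(2) u_nonneg u_nonzero]
    unfolding G_def by metis
  then have "tv_dist (normalize (\<lambda>x. fwd \<kappa>2 (G \<kappa>1) (int i + 1) (t - 1 - i) x * bwd \<kappa>2 w (int i + int (N - i)) (N - i - (t - 1 - i)) x))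
                     (normalize (\<lambda>x. fwd \<kappa>2 (G \<kappa>2) (int i + 1) (t - 1 - i) x * bwd \<kappa>2 w (int i + int (N - i)) (N - i - (t - 1 - i)) x))
     \<le> (1 - c) ^ (t - 1 - i) * tv_dist (normalize (\<lambda>x. G \<kappa>1 x * bwd \<kappa>2 w (int i + int (N - i)) (N - i) x))
                                        (normalize (\<lambda>x. G \<kappa>2 x * bwd \<kappa>2 w (int i + int (N - i)) (N - i) x))"
    by (intro tv_fwd_contract[OF minorized(2)])
       (use assms w_pos in \<open>auto simp: G_def intro: fwd_nonneg[OF minorized(1) u_nonneg] fwd_nonneg[OF minorized(2) u_nonneg]\<close>)
  moreover have "int i + int (N - i) = int N" "N - i - (t - 1 - i) = N - t + 1"
    using assms i_range by simp_all
  ultimately have contract: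
    "tv_dist (normalize (\<lambda>x. fwd \<kappa>1 u 1 (t - 1) x * bwd \<kappa>2 w (int N) (N - t + 1) x))
             (normalize (\<lambda>x. fwd \<kappa>2 u 1 (t - 1) x * bwd \<kappa>2 w (int N) (N - t + 1) x))
     \<le> (1 - c) ^ (t - 1 - i) * tv_dist (normalize (\<lambda>x. G \<kappa>1 x * \<beta> x)) (normalize (\<lambda>x. G \<kappa>2 x * \<beta> x))"
    unfolding split[OF disjI1[OF refl]] split[OF disjI2[OF refl]] \<beta>_def by (simp only:)
  define F where "F = fwd \<kappa>1 u 1 (i - 1)"
  have G_step: "G \<kappa> y = (\<Sum>x\<in>UNIV. F x * option_kernel \<kappa> (int i) x y)" if "\<kappa> = \<kappa>1 \<or> \<kappa> = \<kappa>2" for \<kappa> y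
    using that fwd_step_at[of i \<kappa> u y] i_range fwd_before_change[of "i - 1"] by (auto simp: G_def F_def)
  obtain z0 where "F z0 \<noteq> 0" using nonzero_fwd_before_change F_def by blast
  then have "tv_dist (normalize (\<lambda>x. G \<kappa>1 x * \<beta> x)) (normalize (\<lambda>x. G \<kappa>2 x * \<beta> x)) \<le> r"
    unfolding G_step[OF disjI1[OF refl]] G_step[OF disjI2[OF refl]]
    by (intro tv_normalize_fwd_rel_perturb)
       (use option_kernel_pos[OF minorized(1)] option_kernel_pos[OF minorized(2)] option_kernel_close
          fwd_nonneg[OF minorized(1) u_nonneg] bwd_pos[OF minorized(2) w_pos] in \<open>auto simp: F_def \<beta>_def\<close>)
  from order_trans[OF contract mult_left_mono[OF this]] show ?thesis
    using minorized_le_1[OF minorized(1)] by (simp add: mult.commute)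
qed

lemma tv_bwd_before_change:
  assumes "t < i"
  shows "tv_dist (normalize (\<lambda>x. fwd \<kappa>1 u 1 t x * bwd \<kappa>1 w (int N) (N - t) x))
                 (normalize (\<lambda>x. fwd \<kappa>1 u 1 t x * bwd \<kappa>2 w (int N) (N - t) x))
     \<le> r * (1 - c) ^ (i - 1 - t)"
proof -
  define H where "H \<kappa> = bwd \<kappa> w (int N) (N - i + 1)" for \<kappa>
  define \<beta> where "\<beta> = bwd \<kappa>1 w (int N) (N - i)"
  have H_pos: "0 < H \<kappa> x" if "minorized \<kappa> c" for \<kappa> x unfolding H_def by (rule bwd_pos[OF that w_pos])
  have split: "bwd \<kappa> w (int N) (N - t) = bwd \<kappa>1 (H \<kappa>) (int (i - 1)) (i - 1 - t)" if "\<kappa> = \<kappa>1 \<or> \<kappa> = \<kappa>2" for \<kappa>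
  proof -
    have "N - t = (N - i + 1) + (i - 1 - t)" using assms i_range by arith
    then have "bwd \<kappa> w (int N) (N - t) = bwd \<kappa> (H \<kappa>) (int N - int (N - i + 1)) (i - 1 - t)"
      unfolding H_def by (simp only: bwd_add)
    also have "int N - int (N - i + 1) = int (i - 1)" using i_range by simp
    also have "bwd \<kappa> (H \<kappa>) (int (i - 1)) (i - 1 - t) = bwd \<kappa>1 (H \<kappa>) (int (i - 1)) (i - 1 - t)"
      by (rule bwd_cong) (use same that i_range in auto)
    finally show ?thesis .
  qed
  have "tv_dist (normalize (\<lambda>x. fwd \<kappa>1 u (0 + 1) t x * bwd \<kappa>1 (H \<kappa>1) (0 + int (i - 1)) (i - 1 - t) x))
                (normalize (\<lambda>x. fwd \<kappa>1 u (0 + 1) t x * bwd \<kappa>1 (H \<kappa>2) (0 + int (i - 1)) (i - 1 - t) x))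
     \<le> (1 - c) ^ (i - 1 - t) * tv_dist (normalize (\<lambda>x. fwd \<kappa>1 u (0 + 1) (i - 1) x * H \<kappa>1 x))
                                        (normalize (\<lambda>x. fwd \<kappa>1 u (0 + 1) (i - 1) x * H \<kappa>2 x))"
    using assms H_pos[OF minorized(1)] H_pos[OF minorized(2)]
    by (intro tv_bwd_contract[where F=u, OF minorized(1) u_nonneg u_nonzero]) auto
  then have contract:
    "tv_dist (normalize (\<lambda>x. fwd \<kappa>1 u 1 t x * bwd \<kappa>1 w (int N) (N - t) x))
             (normalize (\<lambda>x. fwd \<kappa>1 u 1 t x * bwd \<kappa>2 w (int N) (N - t) x))
     \<le> (1 - c) ^ (i - 1 - t) * tv_dist (normalize (\<lambda>x. fwd \<kappa>1 u 1 (i - 1) x * H \<kappa>1 x))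
                                        (normalize (\<lambda>x. fwd \<kappa>1 u 1 (i - 1) x * H \<kappa>2 x))"
    unfolding split[OF disjI1[OF refl]] split[OF disjI2[OF refl]] by (simp only: add_0_left)
  have H_step: "H \<kappa> x = (\<Sum>y\<in>UNIV. option_kernel \<kappa> (int i) x y * \<beta> y)" if "\<kappa> = \<kappa>1 \<or> \<kappa> = \<kappa>2" for \<kappa> x
    using that bwd_step_at[of i N \<kappa> w x] i_range bwd_after_change[of "N - i"] by (auto simp: H_def \<beta>_def)
  obtain z0 where "fwd \<kappa>1 u 1 (i - 1) z0 \<noteq> 0" using nonzero_fwd_before_change by blast
  then have "tv_dist (normalize (\<lambda>x. fwd \<kappa>1 u 1 (i - 1) x * H \<kappa>1 x)) (normalize (\<lambda>x. fwd \<kappa>1 u 1 (i - 1) x * H \<kappa>2 x)) \<le> r"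
    unfolding H_step[OF disjI1[OF refl]] H_step[OF disjI2[OF refl]]
    by (intro tv_normalize_bwd_rel_perturb)
       (use option_kernel_pos[OF minorized(1)] option_kernel_pos[OF minorized(2)] option_kernel_close
          fwd_nonneg[OF minorized(1) u_nonneg] bwd_pos[OF minorized(1) w_pos] in \<open>auto simp: \<beta>_def\<close>)
  from order_trans[OF contract mult_left_mono[OF this]] show ?thesis
    using minorized_le_1[OF minorized(1)] by (simp add: mult.commute)
qed

lemma tv_smoothing_change_before:
  fixes t :: nat
  assumes "i < t" "t \<le> N"
  defines "F \<equiv> \<lambda>\<kappa>. fwd \<kappa> u 1 (t - 1)" and "B \<equiv> \<lambda>\<kappa>. bwd \<kappa> w (int N) (N - t)"
  shows "tv_dist (smoothing_ob \<kappa>1 (int t) (F \<kappa>1) (B \<kappa>1)) (smoothing_ob \<kappa>2 (int t) (F \<kappa>2) (B \<kappa>2)) \<le> r * (1 - c) ^ (t - i)"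
    and "tv_dist (smoothing_prev \<kappa>1 (int t) (F \<kappa>1) (B \<kappa>1)) (smoothing_prev \<kappa>2 (int t) (F \<kappa>2) (B \<kappa>2)) \<le> r * (1 - c) ^ (t - 1 - i)"
proof -
  have B_eq: "B \<kappa>1 = B \<kappa>2" unfolding B_def using bwd_after_change[of "N - t"] assms by simp
  have \<kappa>_eq: "\<kappa>1 (int t) = \<kappa>2 (int t)" using same assms by simp
  obtain z1 z2 where nonzero: "F \<kappa>1 z1 \<noteq> 0" "F \<kappa>2 z2 \<noteq> 0"
    using fwd_nonzero[where u=u, OF minorized(1) u_nonneg u_nonzero] fwd_nonzero[where u=u, OF minorized(2) u_nonneg u_nonzero]
    unfolding F_def by metis
  have fwd_change: "tv_dist (normalize (\<lambda>x. F \<kappa>1 x * (\<Sum>y\<in>UNIV. option_kernel \<kappa>2 (int t) x y * B \<kappa>2 y)))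
                           (normalize (\<lambda>x. F \<kappa>2 x * (\<Sum>y\<in>UNIV. option_kernel \<kappa>2 (int t) x y * B \<kappa>2 y)))
      \<le> r * (1 - c) ^ (t - 1 - i)"
    using tv_fwd_after_change[OF assms(1,2)] unfolding F_def B_def bwd_step_at[OF assms(2)] .
  have F_nonneg: "0 \<le> F \<kappa> x" if "minorized \<kappa> c" for \<kappa> x
    unfolding F_def by (rule fwd_nonneg[OF that u_nonneg])
  have B_pos: "0 < B \<kappa>2 y" for y unfolding B_def by (rule bwd_pos[OF minorized(2) w_pos])
  have c_le: "0 \<le> 1 - c" using minorized_le_1[OF minorized(1)] by simp
  have "tv_dist (smoothing_ob \<kappa>1 (int t) (F \<kappa>1) (B \<kappa>1)) (smoothing_ob \<kappa>2 (int t) (F \<kappa>2) (B \<kappa>2))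
      \<le> (1 - c) * (r * (1 - c) ^ (t - 1 - i))"
    unfolding B_eq smoothing_ob_def \<kappa>_eq
    using tv_smoothing_ob_change_fwd[where F="F \<kappa>1" and F'="F \<kappa>2" and B="B \<kappa>2" and t="int t",
        OF minorized(2) F_nonneg[OF minorized(1)] F_nonneg[OF minorized(2)] nonzero B_pos]
      mult_left_mono[OF fwd_change c_le]
    unfolding smoothing_ob_def by linarith
  also have "\<dots> = r * (1 - c) ^ (t - i)"
    using assms by (simp add: power_eq_if[of _ "t - i"])
  finally show "tv_dist (smoothing_ob \<kappa>1 (int t) (F \<kappa>1) (B \<kappa>1)) (smoothing_ob \<kappa>2 (int t) (F \<kappa>2) (B \<kappa>2)) \<le> r * (1 - c) ^ (t - i)" .
  show "tv_dist (smoothing_prev \<kappa>1 (int t) (F \<kappa>1) (B \<kappa>1)) (smoothing_prev \<kappa>2 (int t) (F \<kappa>2) (B \<kappa>2)) \<le> r * (1 - c) ^ (t - 1 - i)"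
    unfolding B_eq smoothing_prev_def \<kappa>_eq
    using tv_smoothing_prev_change_fwd[where F="F \<kappa>1" and F'="F \<kappa>2" and B="B \<kappa>2" and t="int t",
        OF minorized(2) F_nonneg[OF minorized(1)] F_nonneg[OF minorized(2)] nonzero B_pos]
      fwd_change
    unfolding smoothing_prev_def by linarith
qed

lemma tv_smoothing_change_at:
  fixes t :: nat
  assumes "t = i"
  defines "F \<equiv> \<lambda>\<kappa>. fwd \<kappa> u 1 (t - 1)" and "B \<equiv> \<lambda>\<kappa>. bwd \<kappa> w (int N) (N - t)"
  shows "tv_dist (smoothing_ob \<kappa>1 (int t) (F \<kappa>1) (B \<kappa>1)) (smoothing_ob \<kappa>2 (int t) (F \<kappa>2) (B \<kappa>2)) \<le> r"
    and "tv_dist (smoothing_prev \<kappa>1 (int t) (F \<kappa>1) (B \<kappa>1)) (smoothing_prev \<kappa>2 (int t) (F \<kappa>2) (B \<kappa>2)) \<le> r"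
proof -
  have F_eq: "F \<kappa>2 = F \<kappa>1" unfolding F_def using fwd_before_change[of "t - 1"] assms i_range by simp
  have B_eq: "B \<kappa>2 = B \<kappa>1" unfolding B_def using bwd_after_change[of "N - t"] assms i_range by simp
  obtain z1 where "F \<kappa>1 z1 \<noteq> 0"
    using fwd_nonzero[where u=u, OF minorized(1) u_nonneg u_nonzero] unfolding F_def by metis
  moreover have "0 \<le> F \<kappa>1 x" for x unfolding F_def by (rule fwd_nonneg[OF minorized(1) u_nonneg])
  moreover have "0 < B \<kappa>1 y" for y unfolding B_def by (rule bwd_pos[OF minorized(1) w_pos])
  moreover note minorized_pos[OF minorized(1)] minorized_pos[OF minorized(2)] close[unfolded assms[symmetric]]
  ultimately show "tv_dist (smoothing_ob \<kappa>1 (int t) (F \<kappa>1) (B \<kappa>1)) (smoothing_ob \<kappa>2 (int t) (F \<kappa>2) (B \<kappa>2)) \<le> r"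
    and "tv_dist (smoothing_prev \<kappa>1 (int t) (F \<kappa>1) (B \<kappa>1)) (smoothing_prev \<kappa>2 (int t) (F \<kappa>2) (B \<kappa>2)) \<le> r"
    unfolding F_eq B_eq by (blast intro: tv_smoothing_ob_rel_perturb tv_smoothing_prev_rel_perturb)+
qed

lemma tv_smoothing_change_after:
  fixes t :: nat
  assumes "t < i" "1 \<le> t"
  defines "F \<equiv> \<lambda>\<kappa>. fwd \<kappa> u 1 (t - 1)" and "B \<equiv> \<lambda>\<kappa>. bwd \<kappa> w (int N) (N - t)"
  shows "tv_dist (smoothing_ob \<kappa>1 (int t) (F \<kappa>1) (B \<kappa>1)) (smoothing_ob \<kappa>2 (int t) (F \<kappa>2) (B \<kappa>2)) \<le> r * (1 - c) ^ (i - 1 - t)"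
    and "tv_dist (smoothing_prev \<kappa>1 (int t) (F \<kappa>1) (B \<kappa>1)) (smoothing_prev \<kappa>2 (int t) (F \<kappa>2) (B \<kappa>2)) \<le> r * (1 - c) ^ (i - 1 - t)"
proof -
  have F_eq: "F \<kappa>2 = F \<kappa>1" unfolding F_def using fwd_before_change[of "t - 1"] assms by simp
  have \<kappa>_eq: "\<kappa>2 (int t) = \<kappa>1 (int t)" using same assms by simp
  obtain z1 where nonzero: "F \<kappa>1 z1 \<noteq> 0"
    using fwd_nonzero[where u=u, OF minorized(1) u_nonneg u_nonzero] unfolding F_def by metis
  have F_nonneg: "0 \<le> F \<kappa>1 x" for x unfolding F_def by (rule fwd_nonneg[OF minorized(1) u_nonneg])
  have B_pos: "0 < B \<kappa> y" if "minorized \<kappa> c" for \<kappa> y unfolding B_def by (rule bwd_pos[OF that w_pos])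
  have bwd_change: "tv_dist (normalize (\<lambda>y. (\<Sum>x\<in>UNIV. F \<kappa>1 x * option_kernel \<kappa>1 (int t) x y) * B \<kappa>1 y))
                           (normalize (\<lambda>y. (\<Sum>x\<in>UNIV. F \<kappa>1 x * option_kernel \<kappa>1 (int t) x y) * B \<kappa>2 y))
      \<le> r * (1 - c) ^ (i - 1 - t)"
    using tv_bwd_before_change[OF assms(1)] unfolding F_def B_def fwd_step_at[OF assms(2)] .
  show "tv_dist (smoothing_ob \<kappa>1 (int t) (F \<kappa>1) (B \<kappa>1)) (smoothing_ob \<kappa>2 (int t) (F \<kappa>2) (B \<kappa>2)) \<le> r * (1 - c) ^ (i - 1 - t)"
    unfolding F_eq smoothing_ob_def \<kappa>_eq
    using tv_smoothing_ob_change_bwd[where F="F \<kappa>1" and B="B \<kappa>1" and B'="B \<kappa>2" and t="int t",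
        OF minorized(1) F_nonneg nonzero B_pos[OF minorized(1)] B_pos[OF minorized(2)]]
      bwd_change
    unfolding smoothing_ob_def by linarith
  show "tv_dist (smoothing_prev \<kappa>1 (int t) (F \<kappa>1) (B \<kappa>1)) (smoothing_prev \<kappa>2 (int t) (F \<kappa>2) (B \<kappa>2)) \<le> r * (1 - c) ^ (i - 1 - t)"
    unfolding F_eq smoothing_prev_def \<kappa>_eq
    using tv_smoothing_prev_change_bwd[where F="F \<kappa>1" and B="B \<kappa>1" and B'="B \<kappa>2" and t="int t",
        OF minorized(1) F_nonneg nonzero B_pos[OF minorized(1)] B_pos[OF minorized(2)]]
      bwd_change
    unfolding smoothing_prev_def by linarith
qed


lemma tv_smoothing_change_step:
  fixes t :: nat
  assumes "1 \<le> t" "t \<le> N"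
  defines "F \<equiv> \<lambda>\<kappa>. fwd \<kappa> u 1 (t - 1)" and "B \<equiv> \<lambda>\<kappa>. bwd \<kappa> w (int N) (N - t)"
  shows "tv_dist (smoothing_ob \<kappa>1 (int t) (F \<kappa>1) (B \<kappa>1)) (smoothing_ob \<kappa>2 (int t) (F \<kappa>2) (B \<kappa>2))
           \<le> r * (1 - c) ^ (if i \<le> t then t - i else i - 1 - t)"
    and "tv_dist (smoothing_prev \<kappa>1 (int t) (F \<kappa>1) (B \<kappa>1)) (smoothing_prev \<kappa>2 (int t) (F \<kappa>2) (B \<kappa>2))
           \<le> r * (if i = t then 1 else (1 - c) ^ (if i < t then t - 1 - i else i - 1 - t))"
proof -
  consider "i < t" | "i = t" | "t < i" by linarith
  then have "tv_dist (smoothing_ob \<kappa>1 (int t) (F \<kappa>1) (B \<kappa>1)) (smoothing_ob \<kappa>2 (int t) (F \<kappa>2) (B \<kappa>2))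
           \<le> r * (1 - c) ^ (if i \<le> t then t - i else i - 1 - t)
    \<and> tv_dist (smoothing_prev \<kappa>1 (int t) (F \<kappa>1) (B \<kappa>1)) (smoothing_prev \<kappa>2 (int t) (F \<kappa>2) (B \<kappa>2))
           \<le> r * (if i = t then 1 else (1 - c) ^ (if i < t then t - 1 - i else i - 1 - t))"
  proof cases
    case 1
    then show ?thesis using tv_smoothing_change_before[OF 1 assms(2)] unfolding F_def B_def by simp
  next
    case 2
    then show ?thesis using tv_smoothing_change_at[OF 2[symmetric]] unfolding F_def B_def by simp
  next
    case 3
    then show ?thesis using tv_smoothing_change_after[OF 3 assms(1)] unfolding F_def B_def by simp
  qed
  then show "tv_dist (smoothing_ob \<kappa>1 (int t) (F \<kappa>1) (B \<kappa>1)) (smoothing_ob \<kappa>2 (int t) (F \<kappa>2) (B \<kappa>2))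
           \<le> r * (1 - c) ^ (if i \<le> t then t - i else i - 1 - t)"
    and "tv_dist (smoothing_prev \<kappa>1 (int t) (F \<kappa>1) (B \<kappa>1)) (smoothing_prev \<kappa>2 (int t) (F \<kappa>2) (B \<kappa>2))
           \<le> r * (if i = t then 1 else (1 - c) ^ (if i < t then t - 1 - i else i - 1 - t))"
    by blast+
qed

end

section \<open>Stability of the smoothing distributions\<close>

lemma sum_power_below_le:
  fixes \<rho> :: real
  assumes "t \<le> N" "0 \<le> \<rho>" "\<rho> < 1"
  shows "(\<Sum>j<N. if j < t then \<rho> ^ (t - Suc j) else 0) \<le> 1 / (1 - \<rho>)"
proof -
  have "(\<Sum>j<N. if j < t then \<rho> ^ (t - Suc j) else 0) = (\<Sum>j\<in>{..<N} \<inter> {..<t}. \<rho> ^ (t - Suc j))"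
    by (simp add: sum.inter_restrict)
  also have "{..<N} \<inter> {..<t} = {..<t}" using assms by auto
  also have "(\<Sum>j<t. \<rho> ^ (t - Suc j)) = (\<Sum>j<t. \<rho> ^ j)" by (rule sum.nat_diff_reindex)
  also have "\<dots> = (1 - \<rho> ^ t) / (1 - \<rho>)" using assms by (simp add: sum_gp_strict)
  also have "\<dots> \<le> 1 / (1 - \<rho>)" using assms by (intro divide_right_mono) auto
  finally show ?thesis .
qed

lemma sum_power_above_le:
  fixes \<rho> :: real
  assumes "0 \<le> \<rho>" "\<rho> < 1"
  shows "(\<Sum>j<N. if t \<le> j then \<rho> ^ (j - t) else 0) \<le> 1 / (1 - \<rho>)"
proof -
  have "(\<Sum>j<N. if t \<le> j then \<rho> ^ (j - t) else 0) = (\<Sum>j\<in>{..<N} \<inter> {t..}. \<rho> ^ (j - t))"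
    by (simp add: sum.inter_restrict)
  also have "{..<N} \<inter> {t..} = {t..<N}" by auto
  also have "(\<Sum>j\<in>{t..<N}. \<rho> ^ (j - t)) = (\<Sum>j<N - t. \<rho> ^ j)"
    by (subst sum.atLeastLessThan_shift_0) (simp add: atLeast0LessThan)
  also have "\<dots> = (1 - \<rho> ^ (N - t)) / (1 - \<rho>)" using assms by (simp add: sum_gp_strict)
  also have "\<dots> \<le> 1 / (1 - \<rho>)" using assms by (intro divide_right_mono) auto
  finally show ?thesis .
qed

lemma sum_power_two_sided_le:
  fixes \<rho> :: real
  assumes "t \<le> N" "0 \<le> \<rho>" "\<rho> < 1"
  shows "(\<Sum>j<N. \<rho> ^ (if j < t then t - Suc j else j - t)) \<le> 2 / (1 - \<rho>)"
proof -
  have "(\<Sum>j<N. \<rho> ^ (if j < t then t - Suc j else j - t))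
      = (\<Sum>j<N. if j < t then \<rho> ^ (t - Suc j) else 0) + (\<Sum>j<N. if t \<le> j then \<rho> ^ (j - t) else 0)"
    by (simp add: sum.distrib[symmetric]) (intro sum.cong; auto)
  moreover have "1 / (1 - \<rho>) + 1 / (1 - \<rho>) = 2 / (1 - \<rho>)" by (simp add: field_simps)
  ultimately show ?thesis
    using sum_power_below_le[OF assms] sum_power_above_le[OF assms(2,3), of t N] by linarith
qed


lemma sum_power_two_sided_shifted_le:
  fixes \<rho> :: real
  assumes "1 \<le> t" "t \<le> N" "0 \<le> \<rho>" "\<rho> < 1"
  shows "(\<Sum>j<N. if Suc j = t then 1 else \<rho> ^ (if Suc j < t then t - 1 - Suc j else j - t)) \<le> 3 / (1 - \<rho>)"
proof -
  have "(\<Sum>j<N. if Suc j = t then 1 else \<rho> ^ (if Suc j < t then t - 1 - Suc j else j - t))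
      \<le> (\<Sum>j<N. \<rho> ^ (if j < t - 1 then t - 1 - Suc j else j - (t - 1)) + (if t \<le> j then \<rho> ^ (j - t) else 0))"
  proof (rule sum_mono)
    fix j
    have "0 \<le> \<rho> ^ (j - t + 1)" using assms by simp
    then show "(if Suc j = t then 1 else \<rho> ^ (if Suc j < t then t - 1 - Suc j else j - t))
        \<le> \<rho> ^ (if j < t - 1 then t - 1 - Suc j else j - (t - 1)) + (if t \<le> j then \<rho> ^ (j - t) else 0)"
      using assms by (auto simp: Suc_diff_le not_less)
  qed
  also have "\<dots> \<le> 2 / (1 - \<rho>) + 1 / (1 - \<rho>)"
    unfolding sum.distrib using assms
    by (intro add_mono sum_power_two_sided_le sum_power_above_le) auto
  finally show ?thesis by (simp add: add_divide_distrib[symmetric])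
qed

lemma power_pred_le_twice:
  fixes x :: real and t :: int
  assumes "0 \<le> x" "x \<le> 1"
  shows "x ^ nat (t - 1) \<le> 2 * x ^ nat (t - 2)"
proof -
  have "x ^ nat (t - 1) \<le> x ^ nat (t - 2)" "0 \<le> x ^ nat (t - 2)"
    using assms by (simp_all add: power_decreasing nat_mono)
  then show ?thesis by linarith
qed

lemma smoothing_window_cong:
  assumes "\<And>s. 1 \<le> s \<Longrightarrow> s \<le> int N \<Longrightarrow> \<kappa> s = \<kappa>' s" "1 \<le> t" "t \<le> N"
  shows "smoothing_ob \<kappa> (int t) (fwd \<kappa> u 1 (t - 1)) (bwd \<kappa> w (int N) (N - t))
       = smoothing_ob \<kappa>' (int t) (fwd \<kappa>' u 1 (t - 1)) (bwd \<kappa>' w (int N) (N - t))"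
    and "smoothing_prev \<kappa> (int t) (fwd \<kappa> u 1 (t - 1)) (bwd \<kappa> w (int N) (N - t))
       = smoothing_prev \<kappa>' (int t) (fwd \<kappa>' u 1 (t - 1)) (bwd \<kappa>' w (int N) (N - t))"
proof -
  have "fwd \<kappa> u 1 (t - 1) = fwd \<kappa>' u 1 (t - 1)" by (rule fwd_cong) (use assms in auto)
  moreover have "bwd \<kappa> w (int N) (N - t) = bwd \<kappa>' w (int N) (N - t)" by (rule bwd_cong) (use assms in auto)
  moreover have "\<kappa> (int t) = \<kappa>' (int t)" using assms by auto
  ultimately show "smoothing_ob \<kappa> (int t) (fwd \<kappa> u 1 (t - 1)) (bwd \<kappa> w (int N) (N - t))
       = smoothing_ob \<kappa>' (int t) (fwd \<kappa>' u 1 (t - 1)) (bwd \<kappa>' w (int N) (N - t))"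
    and "smoothing_prev \<kappa> (int t) (fwd \<kappa> u 1 (t - 1)) (bwd \<kappa> w (int N) (N - t))
       = smoothing_prev \<kappa>' (int t) (fwd \<kappa>' u 1 (t - 1)) (bwd \<kappa>' w (int N) (N - t))"
    by (simp_all add: smoothing_ob_def smoothing_prev_def)
qed

definition hybrid_kernel ::
  "(int \<Rightarrow> 'o \<Rightarrow> 'o \<Rightarrow> bool \<Rightarrow> real) \<Rightarrow> (int \<Rightarrow> 'o \<Rightarrow> 'o \<Rightarrow> bool \<Rightarrow> real) \<Rightarrow> nat \<Rightarrow> int \<Rightarrow> 'o \<Rightarrow> 'o \<Rightarrow> bool \<Rightarrow> real" where
  "hybrid_kernel \<kappa>A \<kappa>B j s = (if s \<le> int j then \<kappa>B s else \<kappa>A s)"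

lemma tv_smoothing_hybrid_step:
  fixes \<kappa>A \<kappa>B :: "int \<Rightarrow> 'o::finite \<Rightarrow> 'o \<Rightarrow> bool \<Rightarrow> real" and t N :: nat
  assumes minorized: "minorized \<kappa>A c" "minorized \<kappa>B c"
    and close: "\<And>s x y e. \<bar>\<kappa>A s x y e - \<kappa>B s x y e\<bar> \<le> r * \<kappa>A s x y e"
    and u: "\<And>x. 0 \<le> u x" "u z \<noteq> 0" and w_pos: "\<And>x. 0 < w x"
    and t: "1 \<le> t" "t \<le> N" and "j < N"
  defines "M \<equiv> hybrid_kernel \<kappa>A \<kappa>B"
    and "F \<equiv> \<lambda>\<kappa>. fwd \<kappa> u 1 (t - 1)" and "B \<equiv> \<lambda>\<kappa>. bwd \<kappa> w (int N) (N - t)"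
  shows "tv_dist (smoothing_ob (M j) (int t) (F (M j)) (B (M j))) (smoothing_ob (M (Suc j)) (int t) (F (M (Suc j))) (B (M (Suc j))))
           \<le> r * (1 - c) ^ (if j < t then t - Suc j else j - t)"
    and "tv_dist (smoothing_prev (M j) (int t) (F (M j)) (B (M j))) (smoothing_prev (M (Suc j)) (int t) (F (M (Suc j))) (B (M (Suc j))))
           \<le> r * (if Suc j = t then 1 else (1 - c) ^ (if Suc j < t then t - 1 - Suc j else j - t))"
proof -
  have M: "minorized (M j) c" "minorized (M (Suc j)) c" "\<And>s. s \<noteq> int (Suc j) \<Longrightarrow> M j s = M (Suc j) s"
    "\<And>x y e. \<bar>M j (int (Suc j)) x y e - M (Suc j) (int (Suc j)) x y e\<bar> \<le> r * M j (int (Suc j)) x y e"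
    using minorized close by (auto simp: M_def hybrid_kernel_def minorized_def)
  have j: "1 \<le> Suc j" "Suc j \<le> N" using \<open>j < N\<close> by simp_all
  note change = tv_smoothing_change_step[where u=u and z=z and w=w and t=t, OF M(1-3) j M(4) u w_pos t]
  have exps: "(if Suc j \<le> t then t - Suc j else Suc j - 1 - t) = (if j < t then t - Suc j else j - t)"
    "(if Suc j < t then t - 1 - Suc j else Suc j - 1 - t) = (if Suc j < t then t - 1 - Suc j else j - t)"
    by simp_all
  show "tv_dist (smoothing_ob (M j) (int t) (F (M j)) (B (M j))) (smoothing_ob (M (Suc j)) (int t) (F (M (Suc j))) (B (M (Suc j))))
      \<le> r * (1 - c) ^ (if j < t then t - Suc j else j - t)"
    using change(1) unfolding exps F_def B_def .
  show "tv_dist (smoothing_prev (M j) (int t) (F (M j)) (B (M j))) (smoothing_prev (M (Suc j)) (int t) (F (M (Suc j))) (B (M (Suc j))))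
      \<le> r * (if Suc j = t then 1 else (1 - c) ^ (if Suc j < t then t - 1 - Suc j else j - t))"
    using change(2) unfolding exps F_def B_def .
qed

lemma tv_smoothing_change_kernel:
  fixes \<kappa>A \<kappa>B :: "int \<Rightarrow> 'o::finite \<Rightarrow> 'o \<Rightarrow> bool \<Rightarrow> real" and t N :: nat
  assumes minorized: "minorized \<kappa>A c" "minorized \<kappa>B c" and c_pos: "0 < c"
    and close: "\<And>s x y e. \<bar>\<kappa>A s x y e - \<kappa>B s x y e\<bar> \<le> r * \<kappa>A s x y e"
    and u: "\<And>x. 0 \<le> u x" "u z \<noteq> 0" and w_pos: "\<And>x. 0 < w x"
    and t: "1 \<le> t" "t \<le> N"
  defines "F \<equiv> \<lambda>\<kappa>. fwd \<kappa> u 1 (t - 1)" and "B \<equiv> \<lambda>\<kappa>. bwd \<kappa> w (int N) (N - t)"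
  shows "tv_dist (smoothing_ob \<kappa>A (int t) (F \<kappa>A) (B \<kappa>A)) (smoothing_ob \<kappa>B (int t) (F \<kappa>B) (B \<kappa>B)) \<le> 2 * r / c"
    and "tv_dist (smoothing_prev \<kappa>A (int t) (F \<kappa>A) (B \<kappa>A)) (smoothing_prev \<kappa>B (int t) (F \<kappa>B) (B \<kappa>B)) \<le> 3 * r / c"
proof -
  have \<rho>: "0 \<le> 1 - c" "1 - c < 1" using minorized_le_1[OF minorized(1)] c_pos by simp_all
  have r_nonneg: "0 \<le> r"
  proof -
    have "0 \<le> r * \<kappa>A 0 z z True" using close[of 0 z z True] by linarith
    moreover have "0 < \<kappa>A 0 z z True" by (rule minorized_pos[OF minorized(1)])
    ultimately show ?thesis by (simp add: zero_le_mult_iff)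
  qed
  define f where "f j = smoothing_ob (hybrid_kernel \<kappa>A \<kappa>B j) (int t) (F (hybrid_kernel \<kappa>A \<kappa>B j)) (B (hybrid_kernel \<kappa>A \<kappa>B j))" for j
  define g where "g j = smoothing_prev (hybrid_kernel \<kappa>A \<kappa>B j) (int t) (F (hybrid_kernel \<kappa>A \<kappa>B j)) (B (hybrid_kernel \<kappa>A \<kappa>B j))" for j
  have ends: "f 0 = smoothing_ob \<kappa>A (int t) (F \<kappa>A) (B \<kappa>A)" "f N = smoothing_ob \<kappa>B (int t) (F \<kappa>B) (B \<kappa>B)"
    "g 0 = smoothing_prev \<kappa>A (int t) (F \<kappa>A) (B \<kappa>A)" "g N = smoothing_prev \<kappa>B (int t) (F \<kappa>B) (B \<kappa>B)"
    unfolding f_def g_def F_def B_def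
    by (intro smoothing_window_cong; use t in \<open>simp add: hybrid_kernel_def\<close>)+
  have step_ob: "tv_dist (f j) (f (Suc j)) \<le> r * (1 - c) ^ (if j < t then t - Suc j else j - t)"
    and step_prev: "tv_dist (g j) (g (Suc j))
      \<le> r * (if Suc j = t then 1 else (1 - c) ^ (if Suc j < t then t - 1 - Suc j else j - t))"
    if "j < N" for j
    unfolding f_def g_def F_def B_def
    by (rule tv_smoothing_hybrid_step[where u=u and z=z and w=w, OF minorized close u w_pos t that])+
  have "tv_dist (f 0) (f N) \<le> (\<Sum>j<N. tv_dist (f j) (f (Suc j)))" by (rule tv_dist_telescope)
  also have "\<dots> \<le> (\<Sum>j<N. r * (1 - c) ^ (if j < t then t - Suc j else j - t))"
    by (rule sum_mono) (simp add: step_ob)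
  also have "\<dots> \<le> r * (2 / c)"
    using mult_left_mono[OF sum_power_two_sided_le[OF t(2) \<rho>] r_nonneg] by (simp add: sum_distrib_left)
  finally show "tv_dist (smoothing_ob \<kappa>A (int t) (F \<kappa>A) (B \<kappa>A)) (smoothing_ob \<kappa>B (int t) (F \<kappa>B) (B \<kappa>B)) \<le> 2 * r / c"
    unfolding ends by (simp add: mult.commute)
  have "tv_dist (g 0) (g N) \<le> (\<Sum>j<N. tv_dist (g j) (g (Suc j)))" by (rule tv_dist_telescope)
  also have "\<dots> \<le> (\<Sum>j<N. r * (if Suc j = t then 1 else (1 - c) ^ (if Suc j < t then t - 1 - Suc j else j - t)))"
    by (rule sum_mono) (simp add: step_prev)
  also have "\<dots> \<le> r * (3 / c)"
    using mult_left_mono[OF sum_power_two_sided_shifted_le[OF t \<rho>] r_nonneg] by (simp add: sum_distrib_left)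
  finally show "tv_dist (smoothing_prev \<kappa>A (int t) (F \<kappa>A) (B \<kappa>A)) (smoothing_prev \<kappa>B (int t) (F \<kappa>B) (B \<kappa>B)) \<le> 3 * r / c"
    unfolding ends by (simp add: mult.commute)
qed
lemma tv_smoothing_change_init:
  fixes \<kappa> :: "int \<Rightarrow> 'o::finite \<Rightarrow> 'o \<Rightarrow> bool \<Rightarrow> real" and t N :: nat
  assumes \<kappa>: "minorized \<kappa> c" and u_nonneg: "\<And>x. 0 \<le> u x" "\<And>x. 0 \<le> u' x" and u_nonzero: "u z \<noteq> 0" "u' z' \<noteq> 0"
    and w_pos: "\<And>x. 0 < w x" and t: "1 \<le> t" "t \<le> N"
  defines "B \<equiv> bwd \<kappa> w (int N) (N - t)"
  shows "tv_dist (smoothing_ob \<kappa> (int t) (fwd \<kappa> u 1 (t - 1)) B) (smoothing_ob \<kappa> (int t) (fwd \<kappa> u' 1 (t - 1)) B)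
           \<le> (1 - c) ^ (t - 1)"
    and "tv_dist (smoothing_prev \<kappa> (int t) (fwd \<kappa> u 1 (t - 1)) B) (smoothing_prev \<kappa> (int t) (fwd \<kappa> u' 1 (t - 1)) B)
           \<le> (1 - c) ^ (t - 1)"
proof -
  have c: "0 \<le> 1 - c" "1 - c \<le> 1"
    using minorized_le_1[OF \<kappa>] minorized_const_nonneg[OF \<kappa>] by simp_all
  have "tv_dist (normalize (\<lambda>x. fwd \<kappa> u (0 + 1) (t - 1) x * bwd \<kappa> w (0 + int N) (N - (t - 1)) x))
                (normalize (\<lambda>x. fwd \<kappa> u' (0 + 1) (t - 1) x * bwd \<kappa> w (0 + int N) (N - (t - 1)) x))
     \<le> (1 - c) ^ (t - 1) * tv_dist (normalize (\<lambda>x. u x * bwd \<kappa> w (0 + int N) N x)) (normalize (\<lambda>x. u' x * bwd \<kappa> w (0 + int N) N x))"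
    by (rule tv_fwd_contract[where G=u and G'=u', OF \<kappa> u_nonneg u_nonzero w_pos]) (use t in simp)
  also have "\<dots> \<le> (1 - c) ^ (t - 1) * 1"
    using u_nonneg less_imp_le[OF bwd_pos[OF \<kappa> w_pos]] c
    by (intro mult_left_mono tv_dist_normalize_le_1 mult_nonneg_nonneg) auto
  finally have "tv_dist (normalize (\<lambda>x. fwd \<kappa> u (0 + 1) (t - 1) x * bwd \<kappa> w (0 + int N) (N - (t - 1)) x))
                (normalize (\<lambda>x. fwd \<kappa> u' (0 + 1) (t - 1) x * bwd \<kappa> w (0 + int N) (N - (t - 1)) x))
     \<le> (1 - c) ^ (t - 1) * 1" .
  moreover have "N - (t - 1) = N - t + 1" using t by simp
  ultimately have contract:
    "tv_dist (normalize (\<lambda>x. fwd \<kappa> u 1 (t - 1) x * (\<Sum>y\<in>UNIV. option_kernel \<kappa> (int t) x y * B y)))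
             (normalize (\<lambda>x. fwd \<kappa> u' 1 (t - 1) x * (\<Sum>y\<in>UNIV. option_kernel \<kappa> (int t) x y * B y)))
     \<le> (1 - c) ^ (t - 1)"
    unfolding B_def bwd_step_at[OF t(2), symmetric] by (simp only: add_0_left mult_1_right)
  obtain x x' where nonzero: "fwd \<kappa> u 1 (t - 1) x \<noteq> 0" "fwd \<kappa> u' 1 (t - 1) x' \<noteq> 0"
    using fwd_nonzero[where u=u, OF \<kappa> u_nonneg(1) u_nonzero(1)] fwd_nonzero[where u=u', OF \<kappa> u_nonneg(2) u_nonzero(2)]
    by metis
  have B_pos: "0 < B y" for y unfolding B_def by (rule bwd_pos[OF \<kappa> w_pos])
  note smoothing_hyps = \<kappa> fwd_nonneg[OF \<kappa> u_nonneg(1)] fwd_nonneg[OF \<kappa> u_nonneg(2)] nonzero B_pos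
  have "(1 - c) * tv_dist (normalize (\<lambda>x. fwd \<kappa> u 1 (t - 1) x * (\<Sum>y\<in>UNIV. option_kernel \<kappa> (int t) x y * B y)))
                          (normalize (\<lambda>x. fwd \<kappa> u' 1 (t - 1) x * (\<Sum>y\<in>UNIV. option_kernel \<kappa> (int t) x y * B y)))
      \<le> (1 - c) ^ (t - 1)"
    by (rule order_trans[OF mult_left_le_one_le[OF tv_dist_nonneg c] contract])
  then show "tv_dist (smoothing_ob \<kappa> (int t) (fwd \<kappa> u 1 (t - 1)) B) (smoothing_ob \<kappa> (int t) (fwd \<kappa> u' 1 (t - 1)) B)
           \<le> (1 - c) ^ (t - 1)"
    using tv_smoothing_ob_change_fwd[where F="fwd \<kappa> u 1 (t - 1)" and F'="fwd \<kappa> u' 1 (t - 1)" and B=B and t="int t", OF smoothing_hyps]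
    by linarith
  show "tv_dist (smoothing_prev \<kappa> (int t) (fwd \<kappa> u 1 (t - 1)) B) (smoothing_prev \<kappa> (int t) (fwd \<kappa> u' 1 (t - 1)) B)
           \<le> (1 - c) ^ (t - 1)"
    using tv_smoothing_prev_change_fwd[where F="fwd \<kappa> u 1 (t - 1)" and F'="fwd \<kappa> u' 1 (t - 1)" and B=B and t="int t", OF smoothing_hyps]
      contract by linarith
qed

lemma tv_smoothing_change_final:
  fixes \<kappa> :: "int \<Rightarrow> 'o::finite \<Rightarrow> 'o \<Rightarrow> bool \<Rightarrow> real" and t N :: nat
  assumes \<kappa>: "minorized \<kappa> c" and u_nonneg: "\<And>x. 0 \<le> u x" and u_nonzero: "u z \<noteq> 0"
    and w_pos: "\<And>x. 0 < w x" "\<And>x. 0 < w' x" and t: "1 \<le> t" "t \<le> N"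
  defines "F \<equiv> fwd \<kappa> u 1 (t - 1)"
  shows "tv_dist (smoothing_ob \<kappa> (int t) F (bwd \<kappa> w (int N) (N - t))) (smoothing_ob \<kappa> (int t) F (bwd \<kappa> w' (int N) (N - t)))
           \<le> (1 - c) ^ (N - t)"
    and "tv_dist (smoothing_prev \<kappa> (int t) F (bwd \<kappa> w (int N) (N - t))) (smoothing_prev \<kappa> (int t) F (bwd \<kappa> w' (int N) (N - t)))
           \<le> (1 - c) ^ (N - t)"
proof -
  have "tv_dist (normalize (\<lambda>x. fwd \<kappa> u (0 + 1) t x * bwd \<kappa> w (0 + int N) (N - t) x))
                (normalize (\<lambda>x. fwd \<kappa> u (0 + 1) t x * bwd \<kappa> w' (0 + int N) (N - t) x))
     \<le> (1 - c) ^ (N - t) * tv_dist (normalize (\<lambda>x. fwd \<kappa> u (0 + 1) N x * w x)) (normalize (\<lambda>x. fwd \<kappa> u (0 + 1) N x * w' x))"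
    by (rule tv_bwd_contract[where F=u, OF \<kappa> u_nonneg u_nonzero w_pos]) (use t in simp)
  also have "\<dots> \<le> (1 - c) ^ (N - t) * 1"
    using fwd_nonneg[OF \<kappa> u_nonneg] less_imp_le[OF w_pos(1)] less_imp_le[OF w_pos(2)]
      minorized_le_1[OF \<kappa>]
    by (intro mult_left_mono tv_dist_normalize_le_1 mult_nonneg_nonneg) auto
  finally have contract:
    "tv_dist (normalize (\<lambda>y. (\<Sum>x\<in>UNIV. F x * option_kernel \<kappa> (int t) x y) * bwd \<kappa> w (int N) (N - t) y))
             (normalize (\<lambda>y. (\<Sum>x\<in>UNIV. F x * option_kernel \<kappa> (int t) x y) * bwd \<kappa> w' (int N) (N - t) y))
     \<le> (1 - c) ^ (N - t)"
    unfolding F_def fwd_step_at[OF t(1), symmetric] by simp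
  obtain x where F_nonzero: "F x \<noteq> 0" using fwd_nonzero[where u=u, OF \<kappa> u_nonneg u_nonzero] F_def by metis
  have F_nonneg: "0 \<le> F x" for x unfolding F_def by (rule fwd_nonneg[OF \<kappa> u_nonneg])
  have B_pos: "0 < bwd \<kappa> w (int N) (N - t) y" "0 < bwd \<kappa> w' (int N) (N - t) y" for y
    by (rule bwd_pos[OF \<kappa>], rule w_pos)+
  note smoothing_hyps = \<kappa> F_nonneg F_nonzero B_pos
  show "tv_dist (smoothing_ob \<kappa> (int t) F (bwd \<kappa> w (int N) (N - t))) (smoothing_ob \<kappa> (int t) F (bwd \<kappa> w' (int N) (N - t)))
           \<le> (1 - c) ^ (N - t)"
    using tv_smoothing_ob_change_bwd[where F=F and B="bwd \<kappa> w (int N) (N - t)" and B'="bwd \<kappa> w' (int N) (N - t)" and t="int t",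
        OF smoothing_hyps] contract by linarith
  show "tv_dist (smoothing_prev \<kappa> (int t) F (bwd \<kappa> w (int N) (N - t))) (smoothing_prev \<kappa> (int t) F (bwd \<kappa> w' (int N) (N - t)))
           \<le> (1 - c) ^ (N - t)"
    using tv_smoothing_prev_change_bwd[where F=F and B="bwd \<kappa> w (int N) (N - t)" and B'="bwd \<kappa> w' (int N) (N - t)" and t="int t",
        OF smoothing_hyps] contract by linarith
qed

theorem tv_smoothing_stability:
  fixes \<kappa> \<kappa>' :: "int \<Rightarrow> 'o::finite \<Rightarrow> 'o \<Rightarrow> bool \<Rightarrow> real" and t N :: nat
  assumes minorized: "minorized \<kappa> c" "minorized \<kappa>' c" and c_pos: "0 < c"
    and close: "\<And>s x y e. \<bar>\<kappa> s x y e - \<kappa>' s x y e\<bar> \<le> r * \<kappa> s x y e"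
    and u_nonneg: "\<And>x. 0 \<le> u x" "\<And>x. 0 \<le> u' x" and u_nonzero: "u z \<noteq> 0" "u' z' \<noteq> 0"
    and w_pos: "\<And>x. 0 < w x" "\<And>x. 0 < w' x" and t: "1 \<le> t" "t \<le> N"
  defines "F \<equiv> \<lambda>\<kappa> u. fwd \<kappa> u 1 (t - 1)" and "B \<equiv> \<lambda>\<kappa> w. bwd \<kappa> w (int N) (N - t)"
  shows "tv_dist (smoothing_ob \<kappa> (int t) (F \<kappa> u) (B \<kappa> w)) (smoothing_ob \<kappa>' (int t) (F \<kappa>' u') (B \<kappa>' w'))
           \<le> (1 - c) ^ (t - 1) + (1 - c) ^ (N - t) + 2 * r / c"
    and "tv_dist (smoothing_prev \<kappa> (int t) (F \<kappa> u) (B \<kappa> w)) (smoothing_prev \<kappa>' (int t) (F \<kappa>' u') (B \<kappa>' w'))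
           \<le> (1 - c) ^ (t - 1) + (1 - c) ^ (N - t) + 3 * r / c"
proof -
  note init = tv_smoothing_change_init[where u=u and u'=u' and w=w, OF minorized(1) u_nonneg u_nonzero w_pos(1) t]
  note final = tv_smoothing_change_final[where u=u' and w=w and w'=w', OF minorized(1) u_nonneg(2) u_nonzero(2) w_pos t]
  note kernel = tv_smoothing_change_kernel[where u=u' and w=w', OF minorized c_pos close u_nonneg(2) u_nonzero(2) w_pos(2) t]
  have triangle: "tv_dist (p \<kappa> u w) (p \<kappa>' u' w')
      \<le> tv_dist (p \<kappa> u w) (p \<kappa> u' w) + tv_dist (p \<kappa> u' w) (p \<kappa> u' w') + tv_dist (p \<kappa> u' w') (p \<kappa>' u' w')"
    for p :: "(int \<Rightarrow> 'o \<Rightarrow> 'o \<Rightarrow> bool \<Rightarrow> real) \<Rightarrow> ('o \<Rightarrow> real) \<Rightarrow> ('o \<Rightarrow> real) \<Rightarrow> 'o \<times> bool \<Rightarrow> real"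
    using tv_dist_triangle[of "p \<kappa> u w" "p \<kappa>' u' w'" "p \<kappa> u' w"]
      tv_dist_triangle[of "p \<kappa> u' w" "p \<kappa>' u' w'" "p \<kappa> u' w'"] by linarith
  show "tv_dist (smoothing_ob \<kappa> (int t) (F \<kappa> u) (B \<kappa> w)) (smoothing_ob \<kappa>' (int t) (F \<kappa>' u') (B \<kappa>' w'))
           \<le> (1 - c) ^ (t - 1) + (1 - c) ^ (N - t) + 2 * r / c"
    using triangle[of "\<lambda>\<kappa> u w. smoothing_ob \<kappa> (int t) (F \<kappa> u) (B \<kappa> w)"] init(1) final(1) kernel(1)
    unfolding F_def B_def by linarith
  show "tv_dist (smoothing_prev \<kappa> (int t) (F \<kappa> u) (B \<kappa> w)) (smoothing_prev \<kappa>' (int t) (F \<kappa>' u') (B \<kappa>' w'))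
           \<le> (1 - c) ^ (t - 1) + (1 - c) ^ (N - t) + 3 * r / c"
    using triangle[of "\<lambda>\<kappa> u w. smoothing_prev \<kappa> (int t) (F \<kappa> u) (B \<kappa> w)"] init(2) final(2) kernel(2)
    unfolding F_def B_def by linarith
qed

theorem tv_gamma_stability:
  fixes h :: "'p \<Rightarrow> 'o::finite \<Rightarrow> 's \<Rightarrow> 'a \<Rightarrow> 'o \<Rightarrow> bool \<Rightarrow> real" and k T t :: int
  assumes minorized: "minorized (obs_kernel h \<theta> ss as) c" "minorized (obs_kernel h \<theta>' ss as) c" and "0 < c"
    and close: "\<And>q s a q' b. \<bar>h \<theta> q s a q' b - h \<theta>' q s a q' b\<bar> \<le> r * h \<theta> q s a q' b"
    and mu: "\<And>q. 0 \<le> \<mu> (ss 1) q" "(\<Sum>q\<in>UNIV. \<mu> (ss 1) q) = 1"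
    and nu: "\<And>q s. 0 \<le> \<nu> q s"
    and obs_pos: "0 < obs_prob h P \<theta>' (\<lambda>q. \<nu> q (ss (1 - k))) (1 - k) (T + k) ss as"
    and trans_pos: "\<And>t. 0 < P (ss t) (as t) (ss (t + 1))"
    and k: "1 \<le> k" and t: "1 \<le> t" "t \<le> T"
  shows "tv_dist (gamma_mu h P \<theta> \<mu> T ss as t) (gamma_k h P \<theta>' \<nu> k T ss as t)
           \<le> (1 - c) ^ nat (t - 1) + (1 - c) ^ nat (T - t) + 2 * r / c"
    and "tv_dist (gamma_mu_tilde h P \<theta> \<mu> T ss as t) (gamma_k_tilde h P \<theta>' \<nu> k T ss as t)
           \<le> (1 - c) ^ nat (t - 1) + (1 - c) ^ nat (T - t) + 3 * r / c"
proof -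
  define \<kappa> \<kappa>' where "\<kappa> = obs_kernel h \<theta> ss as" and "\<kappa>' = obs_kernel h \<theta>' ss as"
  define u' w' where "u' = fwd \<kappa>' (\<lambda>q. \<nu> q (ss (1 - k))) (1 - k) (nat k)" and "w' = bwd \<kappa>' (\<lambda>_. 1) (T + k) (nat k)"
  have transitions: "transition_factor P lo hi ss as \<noteq> 0" for lo hi
    unfolding transition_factor_def using trans_pos by (simp add: prod_pos less_imp_neq[symmetric])
  obtain z where z: "\<mu> (ss 1) z \<noteq> 0" using mu(2) by force
  have "\<exists>z'. u' z' \<noteq> 0"
  proof (rule ccontr)
    assume "\<not> ?thesis"
    then have "u' = (\<lambda>_. 0)" by auto
    then have "fwd \<kappa>' (\<lambda>q. \<nu> q (ss (1 - k))) (1 - k) (nat k + nat (T + k)) = (\<lambda>_. 0)"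
      by (simp add: fwd_add u'_def fwd_zero)
    moreover have "nat (T + k - (1 - k) + 1) = nat k + nat (T + k)" using k t by simp
    ultimately have "obs_prob h P \<theta>' (\<lambda>q. \<nu> q (ss (1 - k))) (1 - k) (T + k) ss as = 0"
      using obs_prob_eq_fwd[of "1 - k" "T + k" h P \<theta>'] k t by (simp add: \<kappa>'_def)
    with obs_pos show False by simp
  qed
  then obtain z' where z': "u' z' \<noteq> 0" by blast
  have u'_nonneg: "0 \<le> u' x" for x unfolding u'_def by (rule fwd_nonneg[OF minorized(2)[folded \<kappa>'_def]]) (rule nu)
  have w'_pos: "0 < w' x" for x unfolding w'_def by (rule bwd_pos[OF minorized(2)[folded \<kappa>'_def]]) simp
  have kernel_close: "\<bar>\<kappa> s x y e - \<kappa>' s x y e\<bar> \<le> r * \<kappa> s x y e" for s x y e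
    using close by (simp add: \<kappa>_def \<kappa>'_def obs_kernel_def)
  have nat_t: "int (nat t) = t" "nat t - 1 = nat (t - 1)" "int (nat T) = T" "nat T - nat t = nat (T - t)"
    using t by auto
  note stability = tv_smoothing_stability[where u="\<mu> (ss 1)" and u'=u' and w="\<lambda>_. 1" and w'=w' and t="nat t" and N="nat T",
      OF minorized[folded \<kappa>_def \<kappa>'_def] \<open>0 < c\<close> kernel_close mu(1) u'_nonneg z z' _ w'_pos]
  show "tv_dist (gamma_mu h P \<theta> \<mu> T ss as t) (gamma_k h P \<theta>' \<nu> k T ss as t)
           \<le> (1 - c) ^ nat (t - 1) + (1 - c) ^ nat (T - t) + 2 * r / c"
    using stability(1) t
    unfolding gamma_mu_eq_smoothing(1)[OF t transitions] gamma_k_eq_smoothing(1)[OF t k transitions] nat_t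
      \<kappa>_def[symmetric] \<kappa>'_def[symmetric] u'_def[symmetric] w'_def[symmetric] by simp
  show "tv_dist (gamma_mu_tilde h P \<theta> \<mu> T ss as t) (gamma_k_tilde h P \<theta>' \<nu> k T ss as t)
           \<le> (1 - c) ^ nat (t - 1) + (1 - c) ^ nat (T - t) + 3 * r / c"
    using stability(2) t
    unfolding gamma_mu_eq_smoothing(2)[OF t transitions] gamma_k_eq_smoothing(2)[OF t k transitions] nat_t
      \<kappa>_def[symmetric] \<kappa>'_def[symmetric] u'_def[symmetric] w'_def[symmetric] by simp
qed

section \<open>Lipschitz bounds\<close>

definition lipschitz_bounded_on :: "'p::metric_space set \<Rightarrow> ('p \<Rightarrow> real) \<Rightarrow> bool" where
  "lipschitz_bounded_on K f \<longleftrightarrow> (\<exists>L M. L-lipschitz_on K f \<and> (\<forall>x\<in>K. \<bar>f x\<bar> \<le> M))"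

lemma lipschitz_bounded_on_const: "lipschitz_bounded_on K (\<lambda>x. c)"
  unfolding lipschitz_bounded_on_def by (intro exI[of _ 0] exI[of _ "\<bar>c\<bar>"]) (auto intro: lipschitz_on_constant)

lemma lipschitz_bounded_on_mult:
  assumes "lipschitz_bounded_on K f" "lipschitz_bounded_on K g"
  shows "lipschitz_bounded_on K (\<lambda>x. f x * g x)"
proof -
  obtain L1 M1 where f: "L1-lipschitz_on K f" "\<forall>x\<in>K. \<bar>f x\<bar> \<le> M1"
    using assms(1) unfolding lipschitz_bounded_on_def by blast
  obtain L2 M2 where g: "L2-lipschitz_on K g" "\<forall>x\<in>K. \<bar>g x\<bar> \<le> M2"
    using assms(2) unfolding lipschitz_bounded_on_def by blast
  have "(\<bar>M1\<bar> * L2 + \<bar>M2\<bar> * L1)-lipschitz_on K (\<lambda>x. f x * g x)"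
  proof (rule lipschitz_onI)
    fix x y assume xy: "x \<in> K" "y \<in> K"
    have "\<bar>f x * g x - f y * g y\<bar> = \<bar>f x * (g x - g y) + g y * (f x - f y)\<bar>" by (simp add: algebra_simps)
    also have "\<dots> \<le> \<bar>f x\<bar> * \<bar>g x - g y\<bar> + \<bar>g y\<bar> * \<bar>f x - f y\<bar>"
      by (metis abs_mult abs_triangle_ineq)
    also have "\<dots> \<le> \<bar>M1\<bar> * (L2 * dist x y) + \<bar>M2\<bar> * (L1 * dist x y)"
      using f g xy lipschitz_onD[OF f(1) xy] lipschitz_onD[OF g(1) xy]
      by (intro add_mono mult_mono) (auto simp: dist_real_def)
    finally show "dist (f x * g x) (f y * g y) \<le> (\<bar>M1\<bar> * L2 + \<bar>M2\<bar> * L1) * dist x y"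
      by (simp add: dist_real_def algebra_simps)
  qed (use lipschitz_on_nonneg[OF f(1)] lipschitz_on_nonneg[OF g(1)] in simp)
  moreover have "\<bar>f x\<bar> \<le> \<bar>M1\<bar>" "\<bar>g x\<bar> \<le> \<bar>M2\<bar>" if "x \<in> K" for x
    using f(2) g(2) that by force+
  then have "\<forall>x\<in>K. \<bar>f x * g x\<bar> \<le> \<bar>M1\<bar> * \<bar>M2\<bar>"
    by (auto simp: abs_mult intro!: mult_mono)
  ultimately show ?thesis unfolding lipschitz_bounded_on_def by blast
qed

lemma C1_on_imp_lipschitz_bounded_on:
  fixes f :: "'p::euclidean_space \<Rightarrow> real"
  assumes "C1_on U f" "K \<subseteq> U" "compact K" "convex K"
  shows "lipschitz_bounded_on K f"
proof (cases "K = {}")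
  case False
  obtain f' where deriv: "\<forall>x\<in>U. (f has_derivative blinfun_apply (f' x)) (at x)" and "continuous_on U f'"
    using assms(1) C1_on_def by blast
  then have "continuous_on K (\<lambda>x. norm (f' x))"
    by (intro continuous_on_norm continuous_on_subset[OF _ assms(2)])
  then obtain x0 where x0: "\<forall>y\<in>K. norm (f' y) \<le> norm (f' x0)"
    using continuous_attains_sup[OF assms(3) False] by blast
  have lip: "(norm (f' x0))-lipschitz_on K f"
  proof (rule bounded_derivative_imp_lipschitz[where f'="\<lambda>x. blinfun_apply (f' x)"])
    show "(f has_derivative blinfun_apply (f' x)) (at x within K)" if "x \<in> K" for x
      using deriv that assms(2) by (auto intro: has_derivative_at_withinI)
    show "onorm (blinfun_apply (f' x)) \<le> norm (f' x0)" if "x \<in> K" for x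
      using x0 that by (simp add: norm_blinfun.rep_eq[symmetric])
  qed (use assms in auto)
  have "compact (f ` K)"
    using compact_continuous_image[OF lipschitz_on_continuous_on[OF lip] assms(3)] .
  then obtain M where "\<forall>y\<in>f ` K. norm y \<le> M" using compact_imp_bounded bounded_iff by metis
  then show ?thesis unfolding lipschitz_bounded_on_def using lip by auto
qed (auto simp: lipschitz_bounded_on_def intro!: exI[of _ 0])

text \<open>\<open>Lconst\<close> is an infimum; finitely many Lipschitz functions have a common Lipschitz constant,
  so the set it is taken over is nonempty and bounded below by \<open>0\<close>.\<close>
lemma Lconst_bound:
  fixes h :: "'p::metric_space \<Rightarrow> 'o::finite \<Rightarrow> 's::finite \<Rightarrow> 'a::finite \<Rightarrow> 'o \<Rightarrow> bool \<Rightarrow> real"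
  assumes lip: "\<And>q s a q' b. \<exists>L. L-lipschitz_on (\<Theta> \<inter> cball \<theta> (dist \<theta> \<theta>')) (\<lambda>\<phi>. h \<phi> q s a q' b)"
    and "\<theta> \<in> \<Theta>" "\<theta>' \<in> \<Theta>"
  shows "0 \<le> Lconst h \<Theta> \<theta> (dist \<theta> \<theta>')"
    and "\<bar>h \<theta>' q s a q' b - h \<theta> q s a q' b\<bar> \<le> Lconst h \<Theta> \<theta> (dist \<theta> \<theta>') * dist \<theta> \<theta>'"
proof -
  let ?K = "\<Theta> \<inter> cball \<theta> (dist \<theta> \<theta>')"
  define S where "S = {L. \<forall>q s a q' b. L-lipschitz_on ?K (\<lambda>\<phi>. h \<phi> q s a q' b)}"
  have "\<forall>arg. \<exists>L. L-lipschitz_on ?K (\<lambda>\<phi>. case arg of (q, s, a, q', b) \<Rightarrow> h \<phi> q s a q' b)"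
    using lip by (simp add: split_paired_all)
  then obtain Lf where Lf: "\<And>arg. (Lf arg)-lipschitz_on ?K (\<lambda>\<phi>. case arg of (q, s, a, q', b) \<Rightarrow> h \<phi> q s a q' b)"
    by metis
  have "(\<Sum>arg\<in>UNIV. Lf arg) \<in> S"
    unfolding S_def
  proof (intro CollectI allI)
    fix q s a q' b
    have "Lf (q, s, a, q', b) \<le> (\<Sum>arg\<in>UNIV. Lf arg)"
      by (rule member_le_sum) (use lipschitz_on_nonneg[OF Lf] in auto)
    then show "(\<Sum>arg\<in>UNIV. Lf arg)-lipschitz_on ?K (\<lambda>\<phi>. h \<phi> q s a q' b)"
      using lipschitz_on_le[OF Lf[of "(q, s, a, q', b)"]] by simp
  qed
  then have S_nonempty: "S \<noteq> {}" by blast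
  have S_nonneg: "0 \<le> L" if "L \<in> S" for L
    using that lipschitz_on_nonneg unfolding S_def by blast
  have Lconst_eq: "Lconst h \<Theta> \<theta> (dist \<theta> \<theta>') = Inf S" by (simp add: Lconst_def S_def)
  show "0 \<le> Lconst h \<Theta> \<theta> (dist \<theta> \<theta>')" unfolding Lconst_eq by (rule cInf_greatest[OF S_nonempty S_nonneg])
  show "\<bar>h \<theta>' q s a q' b - h \<theta> q s a q' b\<bar> \<le> Lconst h \<Theta> \<theta> (dist \<theta> \<theta>') * dist \<theta> \<theta>'"
  proof (cases "\<theta> = \<theta>'")
    case False
    then have dist_pos: "0 < dist \<theta> \<theta>'" by simp
    have "\<bar>h \<theta>' q s a q' b - h \<theta> q s a q' b\<bar> / dist \<theta> \<theta>' \<le> L" if "L \<in> S" for L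
    proof -
      have "L-lipschitz_on ?K (\<lambda>\<phi>. h \<phi> q s a q' b)" using that S_def by blast
      then have "dist (h \<theta>' q s a q' b) (h \<theta> q s a q' b) \<le> L * dist \<theta>' \<theta>"
        by (rule lipschitz_onD) (use assms(2,3) in auto)
      then have "\<bar>h \<theta>' q s a q' b - h \<theta> q s a q' b\<bar> \<le> L * dist \<theta> \<theta>'"
        by (simp add: dist_real_def dist_commute)
      then show ?thesis using dist_pos by (simp add: divide_le_eq)
    qed
    then have "\<bar>h \<theta>' q s a q' b - h \<theta> q s a q' b\<bar> / dist \<theta> \<theta>' \<le> Inf S" by (intro cInf_greatest[OF S_nonempty])
    then show ?thesis unfolding Lconst_eq using dist_pos by (simp add: divide_le_eq)
  qed simp
qed

section \<open>The options-with-failure model\<close>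

lemma zconst_mult_ge_1:
  fixes h :: "'p \<Rightarrow> 'o::finite \<Rightarrow> 's::finite \<Rightarrow> 'a::finite \<Rightarrow> 'o \<Rightarrow> bool \<Rightarrow> real"
  assumes pos: "\<And>q s a q' b. 0 < h \<theta> q s a q' b" "\<And>q s a q' b. 0 < h \<theta>' q s a q' b"
  shows "1 \<le> zconst h \<theta> \<theta>' * h \<theta> q s a q' b"
proof -
  define A where "A \<phi> = (\<lambda>(q, q', b). h \<phi> q s a q' b) ` (UNIV :: ('o \<times> 'o \<times> bool) set)" for \<phi>
  have fin: "finite (A \<phi>)" "A \<phi> \<noteq> {}" for \<phi> by (auto simp: A_def)
  have min_pos: "0 < Min (A \<theta>)" "0 < Min (A \<theta>')"
    using Min_in[OF fin, of \<theta>] Min_in[OF fin, of \<theta>'] pos by (auto simp: A_def)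
  have "1 / h \<theta> q s a q' b \<le> 1 / Min (A \<theta>)"
    using min_pos by (intro divide_left_mono Min_le) (auto simp: A_def fin intro!: image_eqI[where x="(q, q', b)"])
  also have "\<dots> = Min (A \<theta>') / (Min (A \<theta>) * Min (A \<theta>'))" using min_pos by simp
  also have "\<dots> \<le> max (Max (A \<theta>)) (Max (A \<theta>')) / (Min (A \<theta>) * Min (A \<theta>'))"
    using Min_le[OF fin(1) Max_in[OF fin]] min_pos by (intro divide_right_mono) (auto simp: le_max_iff_disj)
  also have "\<dots> \<le> zconst h \<theta> \<theta>'"
    unfolding zconst_def A_def by (rule Max_ge) (auto intro!: image_eqI[where x="(s, a)"])
  finally show ?thesis using pos(1)[of q s a q' b] by (simp add: divide_le_eq mult.commute)
qed

lemma minorized_obs_kernel: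
  assumes "0 \<le> c" "\<And>x s a y e. 0 < h \<phi> x s a y e" "\<And>x x' s a y e. c * h \<phi> x' s a y e \<le> h \<phi> x s a y e"
  shows "minorized (obs_kernel h \<phi> ss as) c"
  using assms by (simp add: minorized_def obs_kernel_def)

lemma rel_perturb_Lconst_zconst:
  fixes h :: "'p::metric_space \<Rightarrow> 'o::finite \<Rightarrow> 's::finite \<Rightarrow> 'a::finite \<Rightarrow> 'o \<Rightarrow> bool \<Rightarrow> real"
  assumes pos: "\<And>q s a q' b. 0 < h \<theta> q s a q' b" "\<And>q s a q' b. 0 < h \<theta>' q s a q' b"
    and lip: "\<And>q s a q' b. \<exists>L. L-lipschitz_on (\<Theta> \<inter> cball \<theta> (dist \<theta> \<theta>')) (\<lambda>\<phi>. h \<phi> q s a q' b)"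
    and "\<theta> \<in> \<Theta>" "\<theta>' \<in> \<Theta>"
  shows "\<bar>h \<theta> q s a q' b - h \<theta>' q s a q' b\<bar>
           \<le> zconst h \<theta> \<theta>' * Lconst h \<Theta> \<theta> (dist \<theta> \<theta>') * dist \<theta> \<theta>' * h \<theta> q s a q' b"
proof -
  let ?L = "Lconst h \<Theta> \<theta> (dist \<theta> \<theta>')"
  have L_nonneg: "0 \<le> ?L" by (rule Lconst_bound(1)[where h=h, OF lip assms(4,5)])
  have "\<bar>h \<theta> q s a q' b - h \<theta>' q s a q' b\<bar> \<le> ?L * dist \<theta> \<theta>'"
    using Lconst_bound(2)[where h=h, OF lip assms(4,5)] by (simp add: abs_minus_commute)
  also have "\<dots> \<le> ?L * dist \<theta> \<theta>' * (zconst h \<theta> \<theta>' * h \<theta> q s a q' b)"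
    using mult_left_mono[OF zconst_mult_ge_1[where h=h, OF pos], of "?L * dist \<theta> \<theta>'"] L_nonneg by simp
  finally show ?thesis by (simp add: ac_simps)
qed

lemma hfun_lipschitz_bounded_on:
  fixes pi_hi :: "'h::euclidean_space \<Rightarrow> 's \<Rightarrow> 'o::finite \<Rightarrow> real"
    and pi_lo :: "'l::euclidean_space \<Rightarrow> 's \<Rightarrow> 'o \<Rightarrow> 'a \<Rightarrow> real"
    and pi_b :: "'b::euclidean_space \<Rightarrow> 's \<Rightarrow> 'o \<Rightarrow> bool \<Rightarrow> real"
  assumes "\<forall>s q. C1_on U (\<lambda>\<phi>. pi_hi (fst \<phi>) s q)" "\<forall>s q a. C1_on U (\<lambda>\<phi>. pi_lo (fst (snd \<phi>)) s q a)"
    "\<forall>s q b. C1_on U (\<lambda>\<phi>. pi_b (snd (snd \<phi>)) s q b)"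
    and K: "K \<subseteq> U" "compact K" "convex K"
  shows "lipschitz_bounded_on K (\<lambda>\<phi>. hfun pi_hi pi_lo pi_b \<zeta> \<phi> x s a y e)"
proof -
  have "lipschitz_bounded_on K (\<lambda>\<phi>. pibar_hi pi_hi \<zeta> (fst \<phi>) s x e y)"
    using C1_on_imp_lipschitz_bounded_on[OF _ K] assms(1) by (cases e) (auto simp: pibar_hi_def lipschitz_bounded_on_const)
  then show ?thesis
    unfolding hfun_def using assms C1_on_imp_lipschitz_bounded_on[OF _ K]
    by (intro lipschitz_bounded_on_mult) auto
qed

lemma hfun_minorized_on:
  fixes pi_hi :: "'h \<Rightarrow> 's \<Rightarrow> 'o::finite \<Rightarrow> real" and pi_lo :: "'l \<Rightarrow> 's \<Rightarrow> 'o \<Rightarrow> 'a \<Rightarrow> real"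
    and pi_b :: "'b \<Rightarrow> 's \<Rightarrow> 'o \<Rightarrow> bool \<Rightarrow> real" and \<zeta> :: real
  defines "n \<equiv> real CARD('o)" and "h \<equiv> hfun pi_hi pi_lo pi_b \<zeta>"
  assumes "0 < \<epsilon>b" "0 < \<zeta>"
    and bounds: "\<forall>\<phi>\<in>\<Theta>. \<forall>o_prev s q b.
      0 < \<epsilon>b * \<zeta> * pibar \<phi> s q b \<and>
      \<epsilon>b * \<zeta> * pibar \<phi> s q b \<le> pi_b (snd (snd \<phi>)) s o_prev b * pibar_hi pi_hi \<zeta> (fst \<phi>) s o_prev b q \<and>
      pi_b (snd (snd \<phi>)) s o_prev b * pibar_hi pi_hi \<zeta> (fst \<phi>) s o_prev b q \<le> inverse \<epsilon>b * n * pibar \<phi> s q b"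
    and lo_pos: "\<forall>\<phi>\<in>\<Theta>. \<forall>s q a. 0 < pi_lo (fst (snd \<phi>)) s q a"
    and \<phi>: "\<phi> \<in> \<Theta>"
  shows "\<And>x s a y e. 0 < h \<phi> x s a y e"
    and "minorized (obs_kernel h \<phi> ss as) (\<epsilon>b\<^sup>2 * \<zeta> / n)"
proof -
  let ?X = "\<lambda>s x e y. pi_b (snd (snd \<phi>)) s x e * pibar_hi pi_hi \<zeta> (fst \<phi>) s x e y"
  have n_pos: "0 < n" by (simp add: n_def)
  have lower: "0 < \<epsilon>b * \<zeta> * pibar \<phi> s y e" "\<epsilon>b * \<zeta> * pibar \<phi> s y e \<le> ?X s x e y"
    and upper: "?X s x e y \<le> inverse \<epsilon>b * n * pibar \<phi> s y e" for s x e y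
    using bounds \<phi> by blast+
  have lo: "0 < pi_lo (fst (snd \<phi>)) s y a" for s y a using lo_pos \<phi> by blast
  have ratio: "\<epsilon>b\<^sup>2 * \<zeta> / n * ?X s x' e y \<le> ?X s x e y" for s x x' e y
  proof -
    have "\<epsilon>b\<^sup>2 * \<zeta> / n * ?X s x' e y \<le> \<epsilon>b\<^sup>2 * \<zeta> / n * (inverse \<epsilon>b * n * pibar \<phi> s y e)"
      using upper[of s x' e y] assms(3,4) n_pos by (intro mult_left_mono) auto
    also have "\<dots> = \<epsilon>b * \<zeta> * pibar \<phi> s y e" using assms(3) n_pos by (simp add: power2_eq_square field_simps)
    finally show ?thesis using lower(2)[of s y e x] by linarith
  qed
  show pos: "0 < h \<phi> x s a y e" for x s a y e
    using mult_pos_pos[OF order.strict_trans2[OF lower] lo] by (simp add: h_def hfun_def)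
  have "\<epsilon>b\<^sup>2 * \<zeta> / n * h \<phi> x' s a y e \<le> h \<phi> x s a y e" for x x' s a y e
    using mult_right_mono[OF ratio less_imp_le[OF lo]] by (simp add: h_def hfun_def mult.assoc)
  then show "minorized (obs_kernel h \<phi> ss as) (\<epsilon>b\<^sup>2 * \<zeta> / n)"
    using pos assms(3,4) n_pos by (intro minorized_obs_kernel) auto
qed

lemma hfun_rel_perturb:
  fixes pi_hi :: "'h::euclidean_space \<Rightarrow> 's::finite \<Rightarrow> 'o::finite \<Rightarrow> real"
    and pi_lo :: "'l::euclidean_space \<Rightarrow> 's \<Rightarrow> 'o \<Rightarrow> 'a::finite \<Rightarrow> real"
    and pi_b :: "'b::euclidean_space \<Rightarrow> 's \<Rightarrow> 'o \<Rightarrow> bool \<Rightarrow> real" and \<zeta> :: real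
  defines "h \<equiv> hfun pi_hi pi_lo pi_b \<zeta>"
  assumes C1: "\<forall>s q. C1_on U (\<lambda>\<phi>. pi_hi (fst \<phi>) s q)" "\<forall>s q a. C1_on U (\<lambda>\<phi>. pi_lo (fst (snd \<phi>)) s q a)"
      "\<forall>s q b. C1_on U (\<lambda>\<phi>. pi_b (snd (snd \<phi>)) s q b)"
    and \<Theta>: "\<Theta> \<subseteq> U" "compact \<Theta>" "convex \<Theta>" and \<theta>: "\<theta> \<in> \<Theta>" "\<theta>' \<in> \<Theta>"
    and pos: "\<And>x s a y e. 0 < h \<theta> x s a y e" "\<And>x s a y e. 0 < h \<theta>' x s a y e"
  shows "\<bar>h \<theta> x s a y e - h \<theta>' x s a y e\<bar>
           \<le> zconst h \<theta> \<theta>' * Lconst h \<Theta> \<theta> (norm (\<theta>' - \<theta>)) * norm (\<theta>' - \<theta>) * h \<theta> x s a y e"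
proof -
  have "compact (\<Theta> \<inter> cball \<theta> (dist \<theta> \<theta>'))" "convex (\<Theta> \<inter> cball \<theta> (dist \<theta> \<theta>'))"
    using \<Theta> by (auto intro: compact_Int_closed convex_Int)
  then have "\<exists>L. L-lipschitz_on (\<Theta> \<inter> cball \<theta> (dist \<theta> \<theta>')) (\<lambda>\<phi>. h \<phi> x s a y e)" for x s a y e
    using hfun_lipschitz_bounded_on[OF C1, of "\<Theta> \<inter> cball \<theta> (dist \<theta> \<theta>')"] \<Theta>(1)
    unfolding lipschitz_bounded_on_def h_def by blast
  from rel_perturb_Lconst_zconst[where h=h, OF pos this \<theta>] show ?thesis
    by (simp add: dist_norm norm_minus_commute)
qed

theorem lemma12:
  fixes pi_hi :: "'h::euclidean_space \<Rightarrow> 's::finite \<Rightarrow> 'o::finite \<Rightarrow> real"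
    and pi_lo :: "'l::euclidean_space \<Rightarrow> 's \<Rightarrow> 'o \<Rightarrow> 'a::finite \<Rightarrow> real"
    and pi_b :: "'b::euclidean_space \<Rightarrow> 's \<Rightarrow> 'o \<Rightarrow> bool \<Rightarrow> real"
    and P :: "'s \<Rightarrow> 'a \<Rightarrow> 's \<Rightarrow> real"
    and \<zeta> \<epsilon>b :: real
    and \<Theta>h :: "'h set" and \<Theta>l :: "'l set" and \<Theta>b :: "'b set"
    and \<theta>star \<theta> \<theta>' :: "'h \<times> 'l \<times> 'b"
    and \<nu> :: "'o \<Rightarrow> 's \<Rightarrow> real"
    and \<mu> :: "'s \<Rightarrow> 'o \<Rightarrow> real"
    and k T :: int
    and ss :: "int \<Rightarrow> 's" and as :: "int \<Rightarrow> 'a"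
  defines "\<Theta> \<equiv> \<Theta>h \<times> \<Theta>l \<times> \<Theta>b"
    and "h \<equiv> hfun pi_hi pi_lo pi_b \<zeta>"
  assumes Theta: "convex \<Theta>h" "compact \<Theta>h" "convex \<Theta>l" "compact \<Theta>l" "convex \<Theta>b" "compact \<Theta>b"
    and zeta: "0 < \<zeta>" "\<zeta> < 1"
    and P_dist: "\<forall>s a s'. 0 \<le> P s a s'" "\<forall>s a. (\<Sum>s'\<in>UNIV. P s a s') = 1"
    and policies: "\<exists>U. open U \<and> \<Theta> \<subseteq> U \<and>
        (\<forall>\<phi>\<in>U. \<forall>s.
            (\<forall>q. 0 < pi_hi (fst \<phi>) s q) \<and> (\<Sum>q\<in>UNIV. pi_hi (fst \<phi>) s q) = 1 \<and>
            (\<forall>q. (\<forall>a. 0 < pi_lo (fst (snd \<phi>)) s q a) \<and> (\<Sum>a\<in>UNIV. pi_lo (fst (snd \<phi>)) s q a) = 1) \<and>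
            (\<forall>q. (\<forall>b. 0 < pi_b (snd (snd \<phi>)) s q b) \<and> (\<Sum>b\<in>UNIV. pi_b (snd (snd \<phi>)) s q b) = 1)) \<and>
        (\<forall>s q. C1_on U (\<lambda>\<phi>. pi_hi (fst \<phi>) s q)) \<and>
        (\<forall>s q a. C1_on U (\<lambda>\<phi>. pi_lo (fst (snd \<phi>)) s q a)) \<and>
        (\<forall>s q b. C1_on U (\<lambda>\<phi>. pi_b (snd (snd \<phi>)) s q b))"
    and true_param: "\<theta>star \<in> \<Theta>"
    and nu_star: "extreme_point_in \<nu> (stationary_dists h P \<theta>star)"
    and eps_b: "0 < \<epsilon>b"
      "\<exists>pibar :: 'h \<times> 'l \<times> 'b \<Rightarrow> 's \<Rightarrow> 'o \<Rightarrow> bool \<Rightarrow> real.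
         (\<forall>\<phi>\<in>\<Theta>. \<forall>s. (\<forall>q b. 0 \<le> pibar \<phi> s q b) \<and> (\<Sum>(q, b)\<in>UNIV. pibar \<phi> s q b) = 1) \<and>
         (\<forall>\<phi>\<in>\<Theta>. \<forall>o_prev s q b.
            0 < \<epsilon>b * \<zeta> * pibar \<phi> s q b \<and>
            \<epsilon>b * \<zeta> * pibar \<phi> s q b
              \<le> pi_b (snd (snd \<phi>)) s o_prev b * pibar_hi pi_hi \<zeta> (fst \<phi>) s o_prev b q \<and>
            pi_b (snd (snd \<phi>)) s o_prev b * pibar_hi pi_hi \<zeta> (fst \<phi>) s o_prev b q
              \<le> inverse \<epsilon>b * real (card (UNIV :: 'o set)) * pibar \<phi> s q b)"
    and params: "\<theta> \<in> \<Theta>" "\<theta>' \<in> \<Theta>"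
    and k_pos: "1 \<le> k"
    and mu: "\<forall>s q. 0 \<le> \<mu> s q" "\<forall>s. (\<Sum>q\<in>UNIV. \<mu> s q) = 1"
    and T2: "2 \<le> T"
    and omega: "\<forall>t. 0 < P (ss t) (as t) (ss (t + 1))"
    and obs_pos: "0 < obs_prob h P \<theta>' (\<lambda>q. \<nu> q (ss (1 - k))) (1 - k) (T + k) ss as"
  shows "(\<forall>t\<in>{1..T}.
            tv_dist (gamma_mu h P \<theta> \<mu> T ss as t) (gamma_k h P \<theta>' \<nu> k T ss as t)
            \<le> (1 - \<epsilon>b\<^sup>2 * \<zeta> / real (card (UNIV :: 'o set))) ^ nat (t - 1)
             + (1 - \<epsilon>b\<^sup>2 * \<zeta> / real (card (UNIV :: 'o set))) ^ nat (T - t)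
             + 2 * real (card (UNIV :: 'o set)) * zconst h \<theta> \<theta>' * Lconst h \<Theta> \<theta> (norm (\<theta>' - \<theta>))
                 / (\<epsilon>b\<^sup>2 * \<zeta>) * norm (\<theta>' - \<theta>))
       \<and> (\<forall>t\<in>{2..T}.
            tv_dist (gamma_mu_tilde h P \<theta> \<mu> T ss as t) (gamma_k_tilde h P \<theta>' \<nu> k T ss as t)
            \<le> 2 * (1 - \<epsilon>b\<^sup>2 * \<zeta> / real (card (UNIV :: 'o set))) ^ nat (t - 2)
             + (1 - \<epsilon>b\<^sup>2 * \<zeta> / real (card (UNIV :: 'o set))) ^ nat (T - t)
             + 4 * real (card (UNIV :: 'o set)) * zconst h \<theta> \<theta>' * Lconst h \<Theta> \<theta> (norm (\<theta>' - \<theta>))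
                 / (\<epsilon>b\<^sup>2 * \<zeta>) * norm (\<theta>' - \<theta>))"
proof -
  define c where "c = \<epsilon>b\<^sup>2 * \<zeta> / real (card (UNIV :: 'o set))"
  define r where "r = zconst h \<theta> \<theta>' * Lconst h \<Theta> \<theta> (norm (\<theta>' - \<theta>)) * norm (\<theta>' - \<theta>)"
  obtain U where U: "\<Theta> \<subseteq> U" and lo_pos: "\<forall>\<phi>\<in>U. \<forall>s q a. 0 < pi_lo (fst (snd \<phi>)) s q a"
    and C1: "\<forall>s q. C1_on U (\<lambda>\<phi>. pi_hi (fst \<phi>) s q)" "\<forall>s q a. C1_on U (\<lambda>\<phi>. pi_lo (fst (snd \<phi>)) s q a)"
      "\<forall>s q b. C1_on U (\<lambda>\<phi>. pi_b (snd (snd \<phi>)) s q b)"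
    using policies by auto
  obtain pibar where bounds: "\<forall>\<phi>\<in>\<Theta>. \<forall>o_prev s q b. 0 < \<epsilon>b * \<zeta> * pibar \<phi> s q b \<and>
      \<epsilon>b * \<zeta> * pibar \<phi> s q b \<le> pi_b (snd (snd \<phi>)) s o_prev b * pibar_hi pi_hi \<zeta> (fst \<phi>) s o_prev b q \<and>
      pi_b (snd (snd \<phi>)) s o_prev b * pibar_hi pi_hi \<zeta> (fst \<phi>) s o_prev b q \<le> inverse \<epsilon>b * real CARD('o) * pibar \<phi> s q b"
    using eps_b(2) by blast
  have "\<forall>\<phi>\<in>\<Theta>. \<forall>s q a. 0 < pi_lo (fst (snd \<phi>)) s q a" using U lo_pos by blast
  note model = hfun_minorized_on[OF eps_b(1) zeta(1) bounds this, folded h_def c_def]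
  have \<Theta>_compact_convex: "compact \<Theta>" "convex \<Theta>"
    unfolding \<Theta>_def using Theta by (auto intro: compact_Times convex_Times)
  have close: "\<bar>h \<theta> x s a y e - h \<theta>' x s a y e\<bar> \<le> r * h \<theta> x s a y e" for x s a y e
    unfolding r_def h_def by (rule hfun_rel_perturb[OF C1 U \<Theta>_compact_convex params
        model(1)[OF params(1), unfolded h_def] model(1)[OF params(2), unfolded h_def]])
  have c_pos: "0 < c" using eps_b(1) zeta(1) by (simp add: c_def)
  have r_nonneg: "0 \<le> r"
  proof -
    have "0 \<le> r * h \<theta> x s a y e" for x s a y e using order_trans[OF abs_ge_zero close] .
    with model(1)[OF params(1)] show ?thesis by (metis zero_le_mult_iff not_less)
  qed
  have "0 \<le> \<nu> q s" for q s using nu_star by (simp add: extreme_point_in_def stationary_dists_def)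
  note stability = tv_gamma_stability[where P=P and \<mu>=\<mu> and \<nu>=\<nu>, OF model(2)[OF params(1)] model(2)[OF params(2)]
      c_pos close mu(1)[rule_format] mu(2)[rule_format] this obs_pos omega[rule_format] k_pos]
  have power: "(1 - c) ^ nat (t - 1) \<le> 2 * (1 - c) ^ nat (t - 2)" for t :: int
    using c_pos minorized_le_1[OF model(2)[OF params(1)]] by (intro power_pred_le_twice) simp_all
  have const: "2 * r / c = 2 * real CARD('o) * zconst h \<theta> \<theta>' * Lconst h \<Theta> \<theta> (norm (\<theta>' - \<theta>))
                      / (\<epsilon>b\<^sup>2 * \<zeta>) * norm (\<theta>' - \<theta>)"
    "3 * r / c \<le> 4 * real CARD('o) * zconst h \<theta> \<theta>' * Lconst h \<Theta> \<theta> (norm (\<theta>' - \<theta>))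
                      / (\<epsilon>b\<^sup>2 * \<zeta>) * norm (\<theta>' - \<theta>)"
    using r_nonneg c_pos by (simp_all add: r_def c_def field_simps)
  show ?thesis
    unfolding c_def[symmetric] const(1)[symmetric]
    using stability order_trans[OF stability(2) add_mono[OF add_mono[OF power order_refl] const(2)]] by auto
qed

end
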